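(* Let $\rho$ be an invariant state supported on $V\ominus W$. Then $\rho$ is invariant-extremal if and only if the state $\tau=\frac{1}{\operatorname{tr}(|Z|_1\rho)}|Z|_1\rho$ is extremal.
   Context: Fix integers $N\ge 2$ and $n_1\ge n_2\ge\dots\ge n_N\ge 1$. Let $\mathcal H$ be a finite-dimensional complex Hilbert space with orthonormal basis $\{|-\rangle,|+\rangle\}\cup\{|a_k\rangle:1\le k\le N,\ 0\le a\le n_k-1\}$. For vectors $x,y$, $|x\rangle\langle y|$ denotes the operator $u\mapsto\langle y,u\rangle x$. Put $E_k=\mathrm{span}\{|a_k\rangle:0\le a\le n_k-1\}$, $P_k$ the orthogonal projection onto $E_k$, $P_\pm=|\pm\rangle\langle\pm|$, $\zeta_k=e^{2\pi i/n_k}$, and $\varphi_{a_k}=n_k^{-1/2}\sum_{b=0}^{n_k-1}\zeta_k^{-ba}|b_k\rangle$ for $0\le a\le n_k-1$. For $1\le k\le N-1$ let $Z_k=n_k^{-1/2}\sum_{b=0}^{n_{k+1}-1}\sum_{a=0}^{n_k-1}\zeta_k^{ba}|b_{k+1}\rangle\langle a_k|$ (an operator on $\mathcal H$), $|Z|_k=Z_k^*Z_k$. The transport operator is $Z=\sum_{k=1}^{N-1}Z_k$. Let $\omega$ range over the set $\{\omega_+,\omega_-,\omega_1,\dots,\omega_{N-1}\}$ of (distinct) Bohr frequencies, and let $\Gamma_{\pm,\omega}>0$, $\gamma_{\pm,\omega}\in\mathbb R$ be constants. Kraus operators: $L_{-,\omega_+}=\sqrt{n_1\Gamma_{-,\omega_+}}|\varphi_{0_1}\rangle\langle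 +|$, $L_{+,\omega_+}=\sqrt{n_1\Gamma_{+,\omega_+}}|+\rangle\langle\varphi_{0_1}|$, $L_{-,\omega_k}=\sqrt{\Gamma_{-,\omega_k}}Z_k$, $L_{+,\omega_k}=\sqrt{\Gamma_{+,\omega_k}}Z_k^*$ ($1\le k\le N-1$), $L_{-,\omega_-}=\sqrt{\Gamma_{-,\omega_-}}|-\rangle\langle\varphi_{0_N}|$, $L_{+,\omega_-}=0$. Effective Hamiltonian $H_{\mathrm{eff}}=n_1\gamma_{-,\omega_+}P_+-n_1\gamma_{+,\omega_+}|\varphi_{0_1}\rangle\langle\varphi_{0_1}|+\gamma_{-,\omega_-}|\varphi_{0_N}\rangle\langle\varphi_{0_N}|-\gamma_{+,\omega_-}P_-+\sum_{k=1}^{N-1}(\gamma_{-,\omega_k}|Z|_k-\gamma_{+,\omega_k}P_{k+1})$. The generator is $\mathcal L(\rho)=-i[H_{\mathrm{eff}},\rho]+\sum_{\omega}\sum_{\epsilon=\pm}\big(L_{\epsilon,\omega}\rho L_{\epsilon,\omega}^*-\tfrac12\{L_{\epsilon,\omega}^*L_{\epsilon,\omega},\rho\}\big)$. A state is a positive operator of trace one; it is invariant if $\mathcal L(\rho)=0$; a state is extremal if it is not a nontrivial convex combination of two different states; it is invariant-extremal if it is invariant and is not a nontrivial convex combination of two different invariant states; an operator is supported on a subspace $E$ if its range is contained in $E$. The interaction-free subspace is $W=\bigcap_{\omega,\epsilon=\pm}(\ker L_{\epsilon,\omega}\cap\ker L_{\epsilon,\omega}^* )$. $V$ is the orthogonal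 complement of the set $\{|-\rangle,|+\rangle,Z^n\varphi_{0_1},Z^{*n}\varphi_{0_N},Z^{*s}\varphi_{0_{2m+1}}:0\le n\le N-1,\ 1\le m\le (N-1)/2,\ 1\le s\le 2m\}$. $A\ominus B$ denotes $A\cap B^\perp$. *)

theory Defs
  imports Complex_Main
begin

text \<open>Basis labels: Mn = |->, Pl = |+>, St k a = |a_k> (1 <= k <= N, 0 <= a <= n_k - 1).\<close>
datatype bidx = Mn | Pl | St nat nat

type_synonym cvec = "bidx \<Rightarrow> complex"
type_synonym cop = "bidx \<Rightarrow> bidx \<Rightarrow> complex"

definition basis :: "nat \<Rightarrow> (nat \<Rightarrow> nat) \<Rightarrow> bidx set" where
  "basis N n = {Mn, Pl} \<union> {St k a | k a. 1 \<le> k \<and> k \<le> N \<and> a < n k}"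

definition hvecs :: "bidx set \<Rightarrow> cvec set" where
  "hvecs B = {v. \<forall>i. i \<notin> B \<longrightarrow> v i = 0}"

definition hops :: "bidx set \<Rightarrow> cop set" where
  "hops B = {A. \<forall>i j. i \<notin> B \<or> j \<notin> B \<longrightarrow> A i j = 0}"

definition inner_h :: "bidx set \<Rightarrow> cvec \<Rightarrow> cvec \<Rightarrow> complex" where
  "inner_h B u v = (\<Sum>i\<in>B. cnj (u i) * v i)"

definition app :: "bidx set \<Rightarrow> cop \<Rightarrow> cvec \<Rightarrow> cvec" where
  "app B A v = (\<lambda>i. \<Sum>j\<in>B. A i j * v j)"

definition mmul :: "bidx set \<Rightarrow> cop \<Rightarrow> cop \<Rightarrow> cop" where
  "mmul B A C = (\<lambda>i j. \<Sum>l\<in>B. A i l * C l j)"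

definition adj :: "cop \<Rightarrow> cop" where
  "adj A = (\<lambda>i j. cnj (A j i))"

definition opadd :: "cop \<Rightarrow> cop \<Rightarrow> cop" where
  "opadd A C = (\<lambda>i j. A i j + C i j)"

definition opsub :: "cop \<Rightarrow> cop \<Rightarrow> cop" where
  "opsub A C = (\<lambda>i j. A i j - C i j)"

definition opscale :: "complex \<Rightarrow> cop \<Rightarrow> cop" where
  "opscale c A = (\<lambda>i j. c * A i j)"

definition trace_h :: "bidx set \<Rightarrow> cop \<Rightarrow> complex" where
  "trace_h B A = (\<Sum>i\<in>B. A i i)"

definition ket :: "bidx \<Rightarrow> cvec" where
  "ket b = (\<lambda>j. if j = b then 1 else 0)"

definition ketbra :: "cvec \<Rightarrow> cvec \<Rightarrow> cop" where
  "ketbra x y = (\<lambda>i j. x i * cnj (y j))"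

definition op_range :: "bidx set \<Rightarrow> cop \<Rightarrow> cvec set" where
  "op_range B A = {app B A v | v. v \<in> hvecs B}"

definition supported_on :: "bidx set \<Rightarrow> cop \<Rightarrow> cvec set \<Rightarrow> bool" where
  "supported_on B A E \<longleftrightarrow> op_range B A \<subseteq> E"

definition kernel_h :: "bidx set \<Rightarrow> cop \<Rightarrow> cvec set" where
  "kernel_h B A = {v \<in> hvecs B. app B A v = (\<lambda>_. 0)}"

definition ortho_compl :: "bidx set \<Rightarrow> cvec set \<Rightarrow> cvec set" where
  "ortho_compl B S = {v \<in> hvecs B. \<forall>u\<in>S. inner_h B u v = 0}"

definition is_state :: "bidx set \<Rightarrow> cop \<Rightarrow> bool" where
  "is_state B \<rho> \<longleftrightarrow> \<rho> \<in> hops B \<and>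
     (\<forall>v\<in>hvecs B. Im (inner_h B v (app B \<rho> v)) = 0 \<and> Re (inner_h B v (app B \<rho> v)) \<ge> 0) \<and>
     trace_h B \<rho> = 1"

definition convex_comb :: "real \<Rightarrow> cop \<Rightarrow> cop \<Rightarrow> cop" where
  "convex_comb t A C = (\<lambda>i j. complex_of_real t * A i j + complex_of_real (1 - t) * C i j)"

definition extremal_state :: "bidx set \<Rightarrow> cop \<Rightarrow> bool" where
  "extremal_state B \<rho> \<longleftrightarrow> is_state B \<rho> \<and>
     \<not> (\<exists>\<sigma>1 \<sigma>2 t. is_state B \<sigma>1 \<and> is_state B \<sigma>2 \<and> \<sigma>1 \<noteq> \<sigma>2 \<and> 0 < t \<and> t < 1 \<and>
          \<rho> = convex_comb t \<sigma>1 \<sigma>2)"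

datatype sgn = Neg | Pos
datatype freq = WPlus | WMinus | W nat

definition freqs :: "nat \<Rightarrow> freq set" where
  "freqs N = {WPlus, WMinus} \<union> {W k | k. 1 \<le> k \<and> k \<le> N - 1}"

definition zeta :: "(nat \<Rightarrow> nat) \<Rightarrow> nat \<Rightarrow> complex" where
  "zeta n k = cis (2 * pi / real (n k))"

definition phi :: "(nat \<Rightarrow> nat) \<Rightarrow> nat \<Rightarrow> nat \<Rightarrow> cvec" where
  "phi n k a = (\<lambda>i. case i of
      St k' b \<Rightarrow> if k' = k \<and> b < n k
                 then inverse (zeta n k ^ (b * a)) / complex_of_real (sqrt (real (n k))) else 0
    | _ \<Rightarrow> 0)"

definition Zk :: "(nat \<Rightarrow> nat) \<Rightarrow> nat \<Rightarrow> cop" where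
  "Zk n k = (\<lambda>i j. case (i, j) of
      (St k1 b, St k2 a) \<Rightarrow>
        if k1 = k + 1 \<and> k2 = k \<and> b < n (k + 1) \<and> a < n k
        then zeta n k ^ (b * a) / complex_of_real (sqrt (real (n k))) else 0
    | _ \<Rightarrow> 0)"

definition Zabs :: "nat \<Rightarrow> (nat \<Rightarrow> nat) \<Rightarrow> nat \<Rightarrow> cop" where
  "Zabs N n k = mmul (basis N n) (adj (Zk n k)) (Zk n k)"

definition Ztot :: "nat \<Rightarrow> (nat \<Rightarrow> nat) \<Rightarrow> cop" where
  "Ztot N n = (\<lambda>i j. \<Sum>k\<in>{1..N-1}. Zk n k i j)"

definition Pk :: "(nat \<Rightarrow> nat) \<Rightarrow> nat \<Rightarrow> cop" where
  "Pk n k = (\<lambda>i j. case i of St k' a \<Rightarrow> if i = j \<and> k' = k \<and> a < n k then 1 else 0 | _ \<Rightarrow> 0)"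

definition Kraus :: "nat \<Rightarrow> (nat \<Rightarrow> nat) \<Rightarrow> (sgn \<Rightarrow> freq \<Rightarrow> real) \<Rightarrow> sgn \<Rightarrow> freq \<Rightarrow> cop" where
  "Kraus N n \<Gamma> e w = (case (e, w) of
      (Neg, WPlus) \<Rightarrow> opscale (complex_of_real (sqrt (real (n 1) * \<Gamma> Neg WPlus))) (ketbra (phi n 1 0) (ket Pl))
    | (Pos, WPlus) \<Rightarrow> opscale (complex_of_real (sqrt (real (n 1) * \<Gamma> Pos WPlus))) (ketbra (ket Pl) (phi n 1 0))
    | (Neg, W k) \<Rightarrow> opscale (complex_of_real (sqrt (\<Gamma> Neg (W k)))) (Zk n k)
    | (Pos, W k) \<Rightarrow> opscale (complex_of_real (sqrt (\<Gamma> Pos (W k)))) (adj (Zk n k))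
    | (Neg, WMinus) \<Rightarrow> opscale (complex_of_real (sqrt (\<Gamma> Neg WMinus))) (ketbra (ket Mn) (phi n N 0))
    | (Pos, WMinus) \<Rightarrow> (\<lambda>_ _. 0))"

definition Heff :: "nat \<Rightarrow> (nat \<Rightarrow> nat) \<Rightarrow> (sgn \<Rightarrow> freq \<Rightarrow> real) \<Rightarrow> cop" where
  "Heff N n \<gamma> = (\<lambda>i j.
      complex_of_real (real (n 1) * \<gamma> Neg WPlus) * ketbra (ket Pl) (ket Pl) i j
    - complex_of_real (real (n 1) * \<gamma> Pos WPlus) * ketbra (phi n 1 0) (phi n 1 0) i j
    + complex_of_real (\<gamma> Neg WMinus) * ketbra (phi n N 0) (phi n N 0) i j
    - complex_of_real (\<gamma> Pos WMinus) * ketbra (ket Mn) (ket Mn) i j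
    + (\<Sum>k\<in>{1..N-1}. complex_of_real (\<gamma> Neg (W k)) * Zabs N n k i j
                     - complex_of_real (\<gamma> Pos (W k)) * Pk n (k + 1) i j))"

definition Lgen :: "nat \<Rightarrow> (nat \<Rightarrow> nat) \<Rightarrow> (sgn \<Rightarrow> freq \<Rightarrow> real) \<Rightarrow> (sgn \<Rightarrow> freq \<Rightarrow> real) \<Rightarrow> cop \<Rightarrow> cop" where
  "Lgen N n \<Gamma> \<gamma> \<rho> = (let B = basis N n; H = Heff N n \<gamma> in
     (\<lambda>i j. - \<i> * (mmul B H \<rho> i j - mmul B \<rho> H i j)
       + (\<Sum>w\<in>freqs N. \<Sum>e\<in>{Neg, Pos}. (let L = Kraus N n \<Gamma> e w; LL = mmul B (adj L) L in
            mmul B (mmul B L \<rho>) (adj L) i j - (1/2) * (mmul B LL \<rho> i j + mmul B \<rho> LL i j)))))"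

definition invariant_state :: "nat \<Rightarrow> (nat \<Rightarrow> nat) \<Rightarrow> (sgn \<Rightarrow> freq \<Rightarrow> real) \<Rightarrow> (sgn \<Rightarrow> freq \<Rightarrow> real) \<Rightarrow> cop \<Rightarrow> bool" where
  "invariant_state N n \<Gamma> \<gamma> \<rho> \<longleftrightarrow> is_state (basis N n) \<rho> \<and> Lgen N n \<Gamma> \<gamma> \<rho> = (\<lambda>_ _. 0)"

definition invariant_extremal :: "nat \<Rightarrow> (nat \<Rightarrow> nat) \<Rightarrow> (sgn \<Rightarrow> freq \<Rightarrow> real) \<Rightarrow> (sgn \<Rightarrow> freq \<Rightarrow> real) \<Rightarrow> cop \<Rightarrow> bool" where
  "invariant_extremal N n \<Gamma> \<gamma> \<rho> \<longleftrightarrow> invariant_state N n \<Gamma> \<gamma> \<rho> \<and>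
     \<not> (\<exists>\<sigma>1 \<sigma>2 t. invariant_state N n \<Gamma> \<gamma> \<sigma>1 \<and> invariant_state N n \<Gamma> \<gamma> \<sigma>2 \<and> \<sigma>1 \<noteq> \<sigma>2 \<and>
          0 < t \<and> t < 1 \<and> \<rho> = convex_comb t \<sigma>1 \<sigma>2)"

definition Wfree :: "nat \<Rightarrow> (nat \<Rightarrow> nat) \<Rightarrow> (sgn \<Rightarrow> freq \<Rightarrow> real) \<Rightarrow> cvec set" where
  "Wfree N n \<Gamma> = (\<Inter>w\<in>freqs N. \<Inter>e\<in>{Neg, Pos}.
      kernel_h (basis N n) (Kraus N n \<Gamma> e w) \<inter> kernel_h (basis N n) (adj (Kraus N n \<Gamma> e w)))"

definition Vsub :: "nat \<Rightarrow> (nat \<Rightarrow> nat) \<Rightarrow> cvec set" where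
  "Vsub N n = (let B = basis N n; Z = app B (Ztot N n); Zs = app B (adj (Ztot N n)) in
     ortho_compl B ({ket Mn, ket Pl}
       \<union> {(Z ^^ m) (phi n 1 0) | m. m \<le> N - 1}
       \<union> {(Zs ^^ m) (phi n N 0) | m. m \<le> N - 1}
       \<union> {(Zs ^^ s) (phi n (2 * m + 1) 0) | m s. 1 \<le> m \<and> 2 * m \<le> N - 1 \<and> 1 \<le> s \<and> s \<le> 2 * m}))"

end

theory Submission
  imports Defs "HOL-Library.Function_Algebras"
begin

(* A state rho that is invariant and supported on V minus W vanishes on |+>, |-> and on the part
   of E_1 outside the range of |Z|_1, which lies in W; invariance then forces it to vanish on
   phi_{0_1} and phi_{0_N} as well.  On such operators the generator is a sum of one term per link
   k.  Pairing the (k,l) block of L(rho) = 0 with P_k rho P_l in the Hilbert-Schmidt product shows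
   that the off-diagonal blocks vanish, and the diagonal blocks rho_k obey the detailed balance
   recursion Gamma_+ rho_(k+1) = Gamma_- Z_k rho_k Z_k^*, with rho_k commuting with |Z|_k.  Hence
   rho = lift rho_1, a positive combination of the transports (Z_m...Z_1) rho_1 (Z_m...Z_1)^*, and
   rho_1 = |Z|_1 rho.  Conversely lift X is invariant for every admissible first block X.
   Since X |-> lift X is linear, injective and compatible with kernels, decompositions of
   tau = rho_1 / tr rho_1 into states and of rho into invariant states correspond to each other.
   The one subtlety is that the components of tau are admissible only when every projection
   Q_m = (Z_m...Z_1)^* (Z_m...Z_1) acts on rho_1 as 0 or 1, and a Q_m acting otherwise splits rho
   itself. *)

section \<open>Operators on a finite index set\<close>

lemma sum_cop_apply: "(\<Sum>x\<in>S. (F x :: cop)) i j = (\<Sum>x\<in>S. F x i j)"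
  by (induction S rule: infinite_finite_induct) auto

lemma sum_cvec_apply: "(\<Sum>x\<in>S. (F x :: cvec)) i = (\<Sum>x\<in>S. F x i)"
  by (induction S rule: infinite_finite_induct) auto

lemma opscale_apply[simp]: "opscale c X i j = c * X i j"
  unfolding opscale_def by simp

lemma opscale_eq_zero_iff: "opscale c X = 0 \<longleftrightarrow> c = 0 \<or> X = 0"
  unfolding opscale_def by (auto simp: fun_eq_iff)

lemma opscale_cancel: "c \<noteq> 0 \<Longrightarrow> opscale c X = opscale c Y \<longleftrightarrow> X = Y"
  unfolding opscale_def by (auto simp: fun_eq_iff)

lemma opscale_add: "opscale c (X + Y) = opscale c X + opscale c Y"
  unfolding opscale_def by (intro ext) (auto simp: algebra_simps)

lemma opscale_diff: "opscale c (X - Y) = opscale c X - opscale c Y"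
  unfolding opscale_def by (intro ext) (auto simp: algebra_simps)

lemma opscale_scale[simp]: "opscale c (opscale d X) = opscale (c * d) X"
  unfolding opscale_def by (intro ext) (auto simp: algebra_simps)

lemma opscale_one[simp]: "opscale 1 X = X"
  unfolding opscale_def by (intro ext) auto

lemma opscale_zero[simp]: "opscale 0 X = 0" "opscale c 0 = 0"
  unfolding opscale_def by (auto intro!: ext)

lemma opscale_scalar_add: "opscale (c + d) X = opscale c X + opscale d X"
  unfolding opscale_def by (intro ext) (auto simp: algebra_simps)

lemma opscale_sum: "opscale c (\<Sum>x\<in>S. F x) = (\<Sum>x\<in>S. opscale c (F x))"
  unfolding opscale_def by (intro ext) (auto simp: sum_cop_apply sum_distrib_left)

lemma convex_comb_eq_opscale: "convex_comb t A C = opscale (complex_of_real t) A + opscale (complex_of_real (1 - t)) C"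
  unfolding convex_comb_def by (intro ext) simp

lemma mmul_assoc: "mmul B (mmul B X Y) Z = mmul B X (mmul B Y Z)"
  unfolding mmul_def
  by (rule ext, rule ext) (simp add: sum_distrib_left sum_distrib_right mult.assoc, rule sum.swap)

lemma mmul_add_left: "mmul B (X + Y) Z = mmul B X Z + mmul B Y Z"
  unfolding mmul_def by (intro ext) (simp add: algebra_simps sum.distrib)

lemma mmul_add_right: "mmul B Z (X + Y) = mmul B Z X + mmul B Z Y"
  unfolding mmul_def by (intro ext) (simp add: algebra_simps sum.distrib)

lemma mmul_diff_left: "mmul B (X - Y) Z = mmul B X Z - mmul B Y Z"
  unfolding mmul_def by (intro ext) (simp add: algebra_simps sum_subtractf)

lemma mmul_diff_right: "mmul B Z (X - Y) = mmul B Z X - mmul B Z Y"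
  unfolding mmul_def by (intro ext) (simp add: algebra_simps sum_subtractf)

lemma mmul_zero_left[simp]: "mmul B 0 Z = 0"
  unfolding mmul_def by (intro ext) auto

lemma mmul_zero_right[simp]: "mmul B Z 0 = 0"
  unfolding mmul_def by (intro ext) auto

lemma mmul_scale_left: "mmul B (opscale c X) Z = opscale c (mmul B X Z)"
  unfolding mmul_def opscale_def by (intro ext) (auto simp: sum_distrib_left mult.assoc)

lemma mmul_scale_right: "mmul B Z (opscale c X) = opscale c (mmul B Z X)"
  unfolding mmul_def opscale_def by (intro ext) (auto simp: sum_distrib_left algebra_simps)

lemma mmul_sum_left: "mmul B (\<Sum>x\<in>S. F x) Z = (\<Sum>x\<in>S. mmul B (F x) Z)"
  unfolding mmul_def by (intro ext) (auto simp: sum_cop_apply sum_distrib_right intro!: sum.swap)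

lemma mmul_sum_right: "mmul B Z (\<Sum>x\<in>S. F x) = (\<Sum>x\<in>S. mmul B Z (F x))"
  unfolding mmul_def by (intro ext) (auto simp: sum_cop_apply sum_distrib_left intro!: sum.swap)

lemma adj_adj[simp]: "adj (adj X) = X"
  unfolding adj_def by simp

lemma adj_diff: "adj (X - Y) = adj X - adj Y"
  unfolding adj_def by (intro ext) auto

lemma adj_zero[simp]: "adj 0 = 0"
  unfolding adj_def by (intro ext) auto

lemma adj_scale: "adj (opscale c X) = opscale (cnj c) (adj X)"
  unfolding adj_def opscale_def by (intro ext) auto

lemma adj_sum: "adj (\<Sum>x\<in>S. F x) = (\<Sum>x\<in>S. adj (F x))"
  unfolding adj_def by (intro ext) (auto simp: sum_cop_apply)

lemma adj_mmul: "adj (mmul B X Y) = mmul B (adj Y) (adj X)"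
  unfolding adj_def mmul_def by (intro ext) (auto simp: mult.commute)

lemma trace_h_add: "trace_h B (X + Y) = trace_h B X + trace_h B Y"
  unfolding trace_h_def by (simp add: sum.distrib)

lemma trace_h_scale: "trace_h B (opscale c X) = c * trace_h B X"
  unfolding trace_h_def by (simp add: sum_distrib_left)

lemma trace_h_sum: "trace_h B (\<Sum>x\<in>S. F x) = (\<Sum>x\<in>S. trace_h B (F x))"
  unfolding trace_h_def by (simp add: sum_cop_apply, rule sum.swap)

lemma trace_h_zero[simp]: "trace_h B 0 = 0"
  unfolding trace_h_def by simp

lemma trace_h_mmul_commute: "trace_h B (mmul B X Y) = trace_h B (mmul B Y X)"
  unfolding trace_h_def mmul_def by (simp add: mult.commute, rule sum.swap)

lemma app_mmul: "app B (mmul B X Y) v = app B X (app B Y v)"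
  unfolding app_def mmul_def
  by (rule ext) (simp add: sum_distrib_left sum_distrib_right mult.assoc, rule sum.swap)

lemma app_add: "app B (X + Y) v = app B X v + app B Y v"
  unfolding app_def by (intro ext) (simp add: algebra_simps sum.distrib)

lemma app_diff: "app B (X - Y) v = app B X v - app B Y v"
  unfolding app_def by (intro ext) (simp add: algebra_simps sum_subtractf)

lemma app_opscale: "app B (opscale c X) v = (\<lambda>i. c * app B X v i)"
  unfolding app_def by (intro ext) (auto simp: sum_distrib_left mult.assoc)

lemma app_sum: "app B (\<Sum>x\<in>S. F x) v = (\<Sum>x\<in>S. app B (F x) v)"
  unfolding app_def by (intro ext) (auto simp: sum_cop_apply sum_cvec_apply sum_distrib_right intro!: sum.swap)

lemma app_zero[simp]: "app B 0 v = 0"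
  unfolding app_def by (intro ext) auto

lemma app_zero_vec[simp]: "app B X 0 = 0"
  unfolding app_def by (intro ext) auto

lemma app_add_vec: "app B X (u + v) = app B X u + app B X v"
  unfolding app_def by (intro ext) (simp add: algebra_simps sum.distrib)

lemma app_scaled_vec: "app B X (\<lambda>i. c * v i) = (\<lambda>i. c * app B X v i)"
  unfolding app_def by (intro ext) (auto simp: sum_distrib_left algebra_simps)

lemma inner_h_app_adj: "inner_h B u (app B X v) = inner_h B (app B (adj X) u) v"
  unfolding inner_h_def app_def adj_def
  by (simp add: sum_distrib_left sum_distrib_right mult.assoc mult.left_commute, rule sum.swap)

lemma inner_h_add_left: "inner_h B (u + w) v = inner_h B u v + inner_h B w v"
  unfolding inner_h_def by (simp add: algebra_simps sum.distrib)

lemma inner_h_add_right: "inner_h B v (u + w) = inner_h B v u + inner_h B v w"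
  unfolding inner_h_def by (simp add: algebra_simps sum.distrib)

lemma inner_h_scale_left: "inner_h B (\<lambda>i. c * u i) v = cnj c * inner_h B u v"
  unfolding inner_h_def by (simp add: sum_distrib_left algebra_simps)

lemma inner_h_scale_right: "inner_h B v (\<lambda>i. c * u i) = c * inner_h B v u"
  unfolding inner_h_def by (simp add: sum_distrib_left algebra_simps)

lemma inner_h_sum_right: "inner_h B e (\<Sum>x\<in>S. F x) = (\<Sum>x\<in>S. inner_h B e (F x))"
  unfolding inner_h_def by (simp add: sum_cvec_apply sum_distrib_left) (rule sum.swap)

lemma inner_h_diff_right: "inner_h B v (u - w) = inner_h B v u - inner_h B v w"
  unfolding inner_h_def by (simp add: algebra_simps sum_subtractf)

lemma inner_h_zero_right[simp]: "inner_h B v 0 = 0"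
  unfolding inner_h_def by simp

lemma inner_h_zero_left[simp]: "inner_h B 0 v = 0"
  unfolding inner_h_def by simp

lemma inner_h_app_opscale: "inner_h B v (app B (opscale c X) w) = c * inner_h B v (app B X w)"
  unfolding app_opscale by (rule inner_h_scale_right)

lemma inner_h_self: "inner_h B v v = complex_of_real (\<Sum>i\<in>B. (cmod (v i))\<^sup>2)"
  unfolding inner_h_def of_real_sum by (intro sum.cong refl) (metis complex_norm_square mult.commute)

lemma inner_h_self_eq_zero:
  assumes "finite B" "inner_h B v v = 0" "i \<in> B" shows "v i = 0"
proof -
  have "complex_of_real (\<Sum>i\<in>B. (cmod (v i))\<^sup>2) = 0" using assms(2) by (simp only: inner_h_self)
  then have "(\<Sum>i\<in>B. (cmod (v i))\<^sup>2) = 0" by (metis of_real_eq_0_iff)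
  then have "\<forall>i\<in>B. (cmod (v i))\<^sup>2 = 0" using assms(1) by (subst (asm) sum_nonneg_eq_0_iff) auto
  then show ?thesis using assms(3) by auto
qed

lemma inner_h_app_add_add:
  "inner_h B (u + v) (app B X (u + v)) =
   inner_h B u (app B X u) + inner_h B u (app B X v) + inner_h B v (app B X u) + inner_h B v (app B X v)"
  by (simp add: app_add_vec inner_h_add_left inner_h_add_right)

lemma hopsI: "(\<And>i j. i \<notin> B \<or> j \<notin> B \<Longrightarrow> A i j = 0) \<Longrightarrow> A \<in> hops B"
  unfolding hops_def by auto

lemma hops_mmul: "X \<in> hops B \<Longrightarrow> Y \<in> hops B \<Longrightarrow> mmul B X Y \<in> hops B"
  unfolding hops_def mmul_def by (auto intro!: sum.neutral)

lemma hops_diff: "X \<in> hops B \<Longrightarrow> Y \<in> hops B \<Longrightarrow> X - Y \<in> hops B"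
  unfolding hops_def by auto

lemma hops_scale: "X \<in> hops B \<Longrightarrow> opscale c X \<in> hops B"
  unfolding hops_def by auto

lemma hops_adj: "X \<in> hops B \<Longrightarrow> adj X \<in> hops B"
  unfolding hops_def adj_def by auto

lemma hops_zero[simp]: "0 \<in> hops B"
  unfolding hops_def by auto

lemma hops_sum: "(\<And>x. x \<in> S \<Longrightarrow> F x \<in> hops B) \<Longrightarrow> (\<Sum>x\<in>S. F x) \<in> hops B"
  unfolding hops_def by (auto simp: sum_cop_apply intro!: sum.neutral)

lemma hvecs_app: "X \<in> hops B \<Longrightarrow> app B X v \<in> hvecs B"
  unfolding hops_def hvecs_def app_def by (auto intro!: sum.neutral)

lemma hops_eqI:
  assumes "X \<in> hops B" "Y \<in> hops B" "\<And>i j. i \<in> B \<Longrightarrow> j \<in> B \<Longrightarrow> X i j = Y i j"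
  shows "X = Y"
proof (intro ext)
  fix i j show "X i j = Y i j"
    by (cases "i \<in> B \<and> j \<in> B") (use assms in \<open>auto simp: hops_def\<close>)
qed

lemma ket_hvecs: "i \<in> B \<Longrightarrow> ket i \<in> hvecs B"
  unfolding ket_def hvecs_def by auto

lemma app_ket: "finite B \<Longrightarrow> j \<in> B \<Longrightarrow> app B X (ket j) = (\<lambda>i. X i j)"
  unfolding app_def ket_def by (intro ext) (simp add: if_distrib sum.delta cong: if_cong)

lemma inner_h_ket: "finite B \<Longrightarrow> i \<in> B \<Longrightarrow> inner_h B (ket i) w = w i"
proof -
  assume "finite B" "i \<in> B"
  have "\<And>ia. cnj (ket i ia) * w ia = (if ia = i then w i else 0)" by (simp add: ket_def)
  then show ?thesis unfolding inner_h_def using \<open>finite B\<close> \<open>i \<in> B\<close> by (simp add: sum.delta)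
qed

lemma hvecs_add: "u \<in> hvecs B \<Longrightarrow> v \<in> hvecs B \<Longrightarrow> u + v \<in> hvecs B"
  unfolding hvecs_def by auto

lemma hvecs_scale: "u \<in> hvecs B \<Longrightarrow> (\<lambda>i. c * u i) \<in> hvecs B"
  unfolding hvecs_def by auto

lemma mmul_eq_zero_if_app_ket:
  assumes fin: "finite B" and M: "M \<in> hops B" "K \<in> hops B" and z: "\<And>j. j \<in> B \<Longrightarrow> app B M (app B K (ket j)) = 0"
  shows "mmul B M K = 0"
proof (rule hops_eqI[OF hops_mmul[OF M] hops_zero])
  fix i j assume "i \<in> B" "j \<in> B"
  have "app B (mmul B M K) (ket j) = 0" using z[OF \<open>j \<in> B\<close>] by (simp add: app_mmul)
  then show "mmul B M K i j = 0 i j" using fin \<open>j \<in> B\<close> by (simp add: app_ket fun_eq_iff)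
qed

lemma mmul_eq_zero_if_kernel_subset:
  assumes fin: "finite B" and mu: "\<mu> \<in> hops B" and M: "M \<in> hops B" and XM: "mmul B X M = 0"
    and ker: "\<And>v. v \<in> hvecs B \<Longrightarrow> app B X v = 0 \<Longrightarrow> app B \<mu> v = 0"
  shows "mmul B \<mu> M = 0"
proof (rule mmul_eq_zero_if_app_ket[OF fin mu M])
  fix j assume "j \<in> B"
  have "app B X (app B M (ket j)) = 0" using XM by (simp flip: app_mmul)
  then show "app B \<mu> (app B M (ket j)) = 0" by (intro ker hvecs_app M)
qed

lemma app_eq_zero_if_orthogonal_range:
  assumes "finite B" "\<rho> \<in> hops B" "adj \<rho> = \<rho>" "u \<in> hvecs B" "\<forall>v\<in>hvecs B. inner_h B u (app B \<rho> v) = 0"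
  shows "app B \<rho> u = 0"
proof -
  let ?w = "app B \<rho> u"
  have w: "?w \<in> hvecs B" by (rule hvecs_app[OF assms(2)])
  have "inner_h B u (app B \<rho> ?w) = inner_h B ?w ?w"
    using inner_h_app_adj[of B u \<rho> ?w] assms(3) by simp
  then have "inner_h B ?w ?w = 0" using assms(5) w by simp
  then have "\<forall>i\<in>B. ?w i = 0" using inner_h_self_eq_zero[OF assms(1)] by blast
  then show ?thesis using w unfolding hvecs_def by (intro ext) auto
qed

lemma mmul_ketbra_right: "mmul B A (ketbra x y) = ketbra (app B A x) y"
  unfolding mmul_def ketbra_def app_def
  by (intro ext) (simp add: sum_distrib_right sum_distrib_left mult_ac)

lemma mmul_ketbra_left: "mmul B (ketbra x y) A = ketbra x (app B (adj A) y)"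
  unfolding mmul_def ketbra_def app_def adj_def
  by (intro ext) (simp add: sum_distrib_left algebra_simps)

lemma adj_ketbra: "adj (ketbra x y) = ketbra y x"
  unfolding adj_def ketbra_def by (intro ext) simp

lemma app_ketbra: "app B (ketbra x y) v = (\<lambda>i. x i * inner_h B y v)"
  unfolding app_def ketbra_def inner_h_def by (intro ext) (simp add: sum_distrib_left algebra_simps)

lemma hops_ketbra: "x \<in> hvecs B \<Longrightarrow> y \<in> hvecs B \<Longrightarrow> ketbra x y \<in> hops B"
  unfolding hops_def hvecs_def ketbra_def by auto

lemma ketbra_zero_left[simp]: "ketbra 0 y = 0" unfolding ketbra_def by (intro ext) simp

lemma ketbra_zero_right[simp]: "ketbra x 0 = 0" unfolding ketbra_def by (intro ext) simp

section \<open>Positive operators\<close>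

definition psd :: "bidx set \<Rightarrow> cop \<Rightarrow> bool" where
  "psd B X \<longleftrightarrow> (\<forall>v\<in>hvecs B. Im (inner_h B v (app B X v)) = 0 \<and> Re (inner_h B v (app B X v)) \<ge> 0)"

lemma is_state_iff_psd: "is_state B X \<longleftrightarrow> X \<in> hops B \<and> psd B X \<and> trace_h B X = 1"
  unfolding is_state_def psd_def by auto

lemma quadratic_nonneg_linear_coeff_zero:
  fixes a b :: real
  assumes "\<And>t. a * t\<^sup>2 + b * t \<ge> 0" "a \<ge> 0"
  shows "b = 0"
proof (rule ccontr)
  assume b: "b \<noteq> 0"
  define t where "t = - b / (a + 1)"
  have d: "a + 1 \<noteq> 0" using assms(2) by simp
  have e1: "a * t + b = b / (a + 1)" using d unfolding t_def by (simp add: field_simps)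
  have "a * t\<^sup>2 + b * t = t * (a * t + b)" by (simp add: power2_eq_square algebra_simps)
  also have "\<dots> = t * (b / (a + 1))" using e1 by simp
  also have "\<dots> = - (b\<^sup>2 / (a + 1)\<^sup>2)" by (simp add: t_def power2_eq_square)
  also have "\<dots> < 0" using b assms(2) by (simp add: divide_pos_pos)
  finally show False using assms(1)[of t] by simp
qed

lemma psd_selfadjoint:
  assumes X: "X \<in> hops B" and P: "psd B X" and fin: "finite B"
  shows "adj X = X"
proof (rule hops_eqI[OF hops_adj[OF X] X])
  fix i j assume i: "i \<in> B" and j: "j \<in> B"
  have q: "Im (inner_h B v (app B X v)) = 0" if "v \<in> hvecs B" for v
    using P that unfolding psd_def by auto
  let ?ci = "(\<lambda>k. \<i> * ket j k)"
  have e1: "inner_h B (ket a) (app B X (ket b)) = X a b" if "a \<in> B" "b \<in> B" for a b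
    using that fin by (simp add: app_ket inner_h_ket)
  have hii: "Im (X i i) = 0" using q[OF ket_hvecs[OF i]] e1[OF i i] by simp
  have hjj: "Im (X j j) = 0" using q[OF ket_hvecs[OF j]] e1[OF j j] by simp
  have s1: "Im (X i i + X i j + X j i + X j j) = 0"
    using q[OF hvecs_add[OF ket_hvecs[OF i] ket_hvecs[OF j]]]
    by (simp add: inner_h_app_add_add e1 i j)
  have s2: "Im (X i i + \<i> * X i j - \<i> * X j i + X j j) = 0"
    using q[OF hvecs_add[OF ket_hvecs[OF i] hvecs_scale[where c="\<i>", OF ket_hvecs[OF j]]]]
    by (simp add: inner_h_app_add_add e1 i j app_scaled_vec inner_h_scale_left inner_h_scale_right)
  have "Im (X i j) = - Im (X j i)" using s1 hii hjj by simp
  moreover have "Re (X i j) = Re (X j i)" using s2 hii hjj by simp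
  ultimately show "adj X i j = X i j" unfolding adj_def by (simp add: complex_eq_iff)
qed

lemma psd_app_eq_zero:
  assumes X: "X \<in> hops B" and P: "psd B X" and fin: "finite B"
    and v: "v \<in> hvecs B" and z: "inner_h B v (app B X v) = 0"
  shows "app B X v = 0"
proof -
  have H: "adj X = X" by (rule psd_selfadjoint[OF X P fin])
  define w where "w = app B X v"
  have wv: "w \<in> hvecs B" unfolding w_def by (rule hvecs_app[OF X])
  have key: "Re (inner_h B w w) = 0"
  proof -
    define a where "a = Re (inner_h B w (app B X w))"
    define b where "b = 2 * Re (inner_h B w w)"
    have a0: "a \<ge> 0" using P wv unfolding psd_def a_def by auto
    have "a * t\<^sup>2 + b * t \<ge> 0" for t :: real
    proof -
      let ?u = "v + (\<lambda>i. complex_of_real t * w i)"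
      have "?u \<in> hvecs B" by (intro hvecs_add v hvecs_scale wv)
      then have ge: "Re (inner_h B ?u (app B X ?u)) \<ge> 0" using P unfolding psd_def by auto
      have c1: "inner_h B v (app B X w) = inner_h B w w"
        unfolding w_def by (metis H inner_h_app_adj)
      have c2: "inner_h B w (app B X v) = inner_h B w w" unfolding w_def ..
      have "Re (inner_h B ?u (app B X ?u)) = a * t\<^sup>2 + b * t"
        by (simp add: inner_h_app_add_add app_scaled_vec inner_h_scale_left inner_h_scale_right z c1 c2 a_def b_def
            power2_eq_square algebra_simps)
      then show ?thesis using ge by simp
    qed
    then have "b = 0" using quadratic_nonneg_linear_coeff_zero a0 by blast
    then show ?thesis unfolding b_def by simp
  qed
  have "inner_h B w w = 0"
    using key by (simp add: inner_h_self)
  then have "\<forall>i\<in>B. w i = 0" using inner_h_self_eq_zero[OF fin] by blast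
  then show ?thesis using wv unfolding w_def hvecs_def by (intro ext) auto
qed

lemma psd_add: "psd B X \<Longrightarrow> psd B Y \<Longrightarrow> psd B (X + Y)"
  unfolding psd_def by (auto simp: app_add inner_h_add_right)

lemma psd_scale: "psd B X \<Longrightarrow> c \<ge> 0 \<Longrightarrow> psd B (opscale (complex_of_real c) X)"
  unfolding psd_def by (auto simp: app_opscale inner_h_scale_right)

lemma psd_zero: "psd B 0"
  unfolding psd_def inner_h_def by simp

lemma psd_sum: "(\<And>x. x \<in> S \<Longrightarrow> psd B (F x)) \<Longrightarrow> psd B (\<Sum>x\<in>S. F x)"
  by (induction S rule: infinite_finite_induct) (auto intro: psd_add psd_zero)

lemma psd_sandwich:
  assumes "psd B X" "A \<in> hops B"
  shows "psd B (mmul B (mmul B A X) (adj A))"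
  unfolding psd_def
proof
  fix v assume "v \<in> hvecs B"
  have e: "inner_h B v (app B (mmul B (mmul B A X) (adj A)) v) =
        inner_h B (app B (adj A) v) (app B X (app B (adj A) v))"
    by (simp add: app_mmul inner_h_app_adj)
  have "app B (adj A) v \<in> hvecs B" by (rule hvecs_app[OF hops_adj[OF assms(2)]])
  then show "Im (inner_h B v (app B (mmul B (mmul B A X) (adj A)) v)) = 0 \<and>
        0 \<le> Re (inner_h B v (app B (mmul B (mmul B A X) (adj A)) v))"
    using assms(1) unfolding e psd_def by auto
qed

lemma trace_h_eq_sum_inner: "finite B \<Longrightarrow> trace_h B X = (\<Sum>i\<in>B. inner_h B (ket i) (app B X (ket i)))"
  unfolding trace_h_def by (intro sum.cong refl) (simp add: app_ket inner_h_ket)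

lemma psd_trace_nonneg: "finite B \<Longrightarrow> psd B X \<Longrightarrow> Im (trace_h B X) = 0 \<and> Re (trace_h B X) \<ge> 0"
  by (simp add: trace_h_eq_sum_inner) (auto simp: psd_def ket_hvecs intro!: sum_nonneg)

lemma psd_trace_eq_zero:
  assumes X: "X \<in> hops B" and P: "psd B X" and fin: "finite B" and t: "trace_h B X = 0"
  shows "X = 0"
proof -
  have nn: "\<forall>i\<in>B. Re (inner_h B (ket i) (app B X (ket i))) \<ge> 0"
    using P unfolding psd_def by (auto simp: ket_hvecs)
  have "Re (trace_h B X) = (\<Sum>i\<in>B. Re (inner_h B (ket i) (app B X (ket i))))"
    using fin by (simp add: trace_h_eq_sum_inner)
  then have "(\<Sum>i\<in>B. Re (inner_h B (ket i) (app B X (ket i)))) = 0" using t by simp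
  then have "\<forall>i\<in>B. Re (inner_h B (ket i) (app B X (ket i))) = 0"
    using nn fin by (subst (asm) sum_nonneg_eq_0_iff) auto
  moreover have "\<forall>i\<in>B. Im (inner_h B (ket i) (app B X (ket i))) = 0"
    using P unfolding psd_def by (auto simp: ket_hvecs)
  ultimately have "\<forall>i\<in>B. inner_h B (ket i) (app B X (ket i)) = 0"
    by (simp add: complex_eq_iff)
  then have "\<forall>i\<in>B. app B X (ket i) = 0"
    using psd_app_eq_zero[OF X P fin] ket_hvecs by blast
  then have "\<forall>i\<in>B. \<forall>j. X j i = 0" using fin by (auto simp: app_ket fun_eq_iff)
  then show ?thesis using X by (intro hops_eqI) auto
qed

lemma psd_trace_pos:
  assumes "finite B" "Y \<in> hops B" "psd B Y" "Y \<noteq> 0"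
  shows "Re (trace_h B Y) > 0 \<and> trace_h B Y = complex_of_real (Re (trace_h B Y))"
proof -
  have p: "Im (trace_h B Y) = 0" "Re (trace_h B Y) \<ge> 0" using psd_trace_nonneg[OF assms(1,3)] by auto
  have "trace_h B Y \<noteq> 0" using psd_trace_eq_zero[OF assms(2,3,1)] assms(4) by blast
  then have "Re (trace_h B Y) \<noteq> 0" using p by (auto simp: complex_eq_iff)
  then show ?thesis using p by (auto simp: complex_eq_iff)
qed

lemma is_state_normalize:
  assumes "X \<in> hops B" "psd B X" "trace_h B X = complex_of_real l" "l > 0"
  shows "is_state B (opscale (complex_of_real (inverse l)) X)"
proof -
  have "psd B (opscale (complex_of_real (inverse l)) X)" by (rule psd_scale) (use assms in auto)
  moreover have "trace_h B (opscale (complex_of_real (inverse l)) X) = 1"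
    using assms by (simp add: trace_h_scale)
  ultimately show ?thesis unfolding is_state_iff_psd using assms by (auto intro!: hops_scale)
qed

lemma normalize_convex_comb:
  assumes X: "X = opscale (complex_of_real t) X1 + opscale (complex_of_real (1 - t)) X2"
    and tr: "trace_h B X = complex_of_real a" "trace_h B X1 = complex_of_real a1" "trace_h B X2 = complex_of_real a2"
    and pos: "0 < t" "t < 1" "a1 > 0" "a2 > 0"
  obtains s where "0 < s" "s < 1" "opscale (complex_of_real (inverse a)) X
    = convex_comb s (opscale (complex_of_real (inverse a1)) X1) (opscale (complex_of_real (inverse a2)) X2)"
proof -
  have "complex_of_real a = complex_of_real (t * a1 + (1 - t) * a2)"
    using tr unfolding X by (simp add: trace_h_add trace_h_scale)
  then have aa: "a = t * a1 + (1 - t) * a2" by (simp only: of_real_eq_iff)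
  have summands: "0 < t * a1" "0 < (1 - t) * a2" using pos by simp_all
  then have ap: "a > 0" using aa by linarith
  define s where "s = t * a1 / a"
  have s: "0 < s" "s < 1" unfolding s_def using aa ap summands by (simp_all add: field_simps)
  have s1: "1 - s = (1 - t) * a2 / a" unfolding s_def using aa ap by (simp add: field_simps)
  have c1: "inverse a * t = s * inverse a1" unfolding s_def using ap pos(3) by (simp add: field_simps)
  have c2: "inverse a * (1 - t) = (1 - s) * inverse a2" unfolding s1 using ap pos(4) by (simp add: field_simps)
  have "opscale (complex_of_real (inverse a)) X
    = convex_comb s (opscale (complex_of_real (inverse a1)) X1) (opscale (complex_of_real (inverse a2)) X2)"
  proof (intro ext)
    fix i j
    have "opscale (complex_of_real (inverse a)) X i j
      = complex_of_real (inverse a * t) * X1 i j + complex_of_real (inverse a * (1 - t)) * X2 i j"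
      unfolding X by (simp add: algebra_simps)
    also have "\<dots> = convex_comb s (opscale (complex_of_real (inverse a1)) X1) (opscale (complex_of_real (inverse a2)) X2) i j"
      unfolding c1 c2 convex_comb_def by (simp add: algebra_simps)
    finally show "opscale (complex_of_real (inverse a)) X i j
      = convex_comb s (opscale (complex_of_real (inverse a1)) X1) (opscale (complex_of_real (inverse a2)) X2) i j" .
  qed
  then show ?thesis using that s by blast
qed

lemma psd_convex_comb_kernel:
  assumes fin: "finite B" and X: "X \<in> hops B" "psd B X" and Y: "Y \<in> hops B" "psd B Y"
    and t: "0 < t" "t < 1" and v: "v \<in> hvecs B" and z: "app B (convex_comb t X Y) v = 0"
  shows "app B X v = 0 \<and> app B Y v = 0"
proof -
  let ?a = "inner_h B v (app B X v)" and ?b = "inner_h B v (app B Y v)"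
  have "inner_h B v (app B (convex_comb t X Y) v) = complex_of_real t * ?a + complex_of_real (1 - t) * ?b"
    unfolding convex_comb_eq_opscale app_add inner_h_add_right inner_h_app_opscale ..
  then have e: "complex_of_real t * ?a + complex_of_real (1 - t) * ?b = 0" using z by simp
  have pa: "Im ?a = 0" "Re ?a \<ge> 0" using X(2) v unfolding psd_def by auto
  have pb: "Im ?b = 0" "Re ?b \<ge> 0" using Y(2) v unfolding psd_def by auto
  have "t * Re ?a + (1 - t) * Re ?b = 0" using arg_cong[OF e, of Re] by simp
  moreover have "t * Re ?a \<ge> 0" "(1 - t) * Re ?b \<ge> 0" using pa pb t by auto
  ultimately have "t * Re ?a = 0" "(1 - t) * Re ?b = 0" by linarith+
  then have "Re ?a = 0" "Re ?b = 0" using t by auto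
  then have "?a = 0" "?b = 0" using pa pb by (auto simp: complex_eq_iff)
  then show ?thesis using psd_app_eq_zero[OF X(1,2) fin v] psd_app_eq_zero[OF Y(1,2) fin v] by auto
qed

definition hs2 :: "bidx set \<Rightarrow> cop \<Rightarrow> real" where
  "hs2 B X = (\<Sum>i\<in>B. \<Sum>l\<in>B. (cmod (X l i))\<^sup>2)"

lemma trace_adj_mmul_self: "trace_h B (mmul B (adj X) X) = complex_of_real (hs2 B X)"
  unfolding trace_h_def mmul_def adj_def hs2_def of_real_sum
  by (intro sum.cong refl) (metis complex_norm_square mult.commute)

lemma hs2_nonneg: "hs2 B X \<ge> 0"
  unfolding hs2_def by (intro sum_nonneg) auto

lemma hs2_eq_zero:
  assumes "finite B" "X \<in> hops B" "hs2 B X = 0"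
  shows "X = 0"
proof -
  have "\<forall>i\<in>B. (\<Sum>l\<in>B. (cmod (X l i))\<^sup>2) = 0"
    using assms(1,3) unfolding hs2_def by (subst (asm) sum_nonneg_eq_0_iff) (auto intro: sum_nonneg)
  then have "\<forall>i\<in>B. \<forall>l\<in>B. (cmod (X l i))\<^sup>2 = 0"
    using assms(1) by (subst (asm) sum_nonneg_eq_0_iff) auto
  then show ?thesis using assms(2) by (intro hops_eqI) auto
qed

definition rows_in :: "bidx set \<Rightarrow> cop \<Rightarrow> bool" where
  "rows_in S X \<longleftrightarrow> (\<forall>i j. i \<notin> S \<longrightarrow> X i j = 0)"

definition cols_in :: "bidx set \<Rightarrow> cop \<Rightarrow> bool" where
  "cols_in S X \<longleftrightarrow> (\<forall>i j. j \<notin> S \<longrightarrow> X i j = 0)"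

lemma rows_in_mmul: "rows_in S X \<Longrightarrow> rows_in S (mmul B X Y)"
  unfolding rows_in_def mmul_def by auto

lemma cols_in_mmul: "cols_in S Y \<Longrightarrow> cols_in S (mmul B X Y)"
  unfolding cols_in_def mmul_def by auto

lemma rows_in_adj: "rows_in S (adj X) \<longleftrightarrow> cols_in S X"
  unfolding rows_in_def cols_in_def adj_def by auto

lemma cols_in_adj: "cols_in S (adj X) \<longleftrightarrow> rows_in S X"
  unfolding rows_in_def cols_in_def adj_def by auto

lemma rows_in_diff: "rows_in S X \<Longrightarrow> rows_in S Y \<Longrightarrow> rows_in S (X - Y)"
  unfolding rows_in_def by auto

lemma mmul_disjoint_support: "cols_in S X \<Longrightarrow> rows_in T Y \<Longrightarrow> S \<inter> T = {} \<Longrightarrow> mmul B X Y = 0"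
proof (intro ext)
  fix i j
  assume a: "cols_in S X" "rows_in T Y" "S \<inter> T = {}"
  have h: "\<And>l. X i l * Y l j = 0"
  proof -
    fix l show "X i l * Y l j = 0"
    proof (cases "l \<in> S")
      case True then have "l \<notin> T" using a(3) by blast
      then show ?thesis using a(2) unfolding rows_in_def by simp
    next
      case False then show ?thesis using a(1) unfolding cols_in_def by simp
    qed
  qed
  show "mmul B X Y i j = 0 i j" unfolding mmul_def zero_fun_apply by (rule sum.neutral) (simp add: h)
qed

lemma app_eq_zero_if_cols_in:
  assumes "cols_in S M" "\<And>i. i \<in> S \<Longrightarrow> v i = 0" shows "app B M v = 0"
proof (intro ext)
  fix i show "app B M v i = 0 i" unfolding app_def zero_fun_apply
  proof (rule sum.neutral, rule ballI)
    fix x show "M i x * v x = 0" by (cases "x \<in> S") (use assms in \<open>auto simp: cols_in_def\<close>)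
  qed
qed

lemma cnj_sqrt_mult_sqrt: "x \<ge> 0 \<Longrightarrow> cnj (complex_of_real (sqrt x)) * complex_of_real (sqrt x) = complex_of_real x"
  by (metis complex_cnj_complex_of_real of_real_mult real_sqrt_mult_self abs_of_nonneg)

lemma sqrt_mult_sqrt: "x \<ge> 0 \<Longrightarrow> complex_of_real (sqrt x) * complex_of_real (sqrt x) = complex_of_real x"
  by (metis of_real_mult real_sqrt_mult_self abs_of_nonneg)

lemma Re_sum_nonneg_eq_zero:
  assumes "finite S" "\<And>x. x \<in> S \<Longrightarrow> Re (g x) \<ge> 0" "Re (\<Sum>x\<in>S. g x) = 0" "y \<in> S"
  shows "Re (g y) = 0"
proof -
  have "(\<Sum>x\<in>S. Re (g x)) = 0" using assms(3) by (simp add: Re_sum)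
  then show ?thesis using assms by (subst (asm) sum_nonneg_eq_0_iff) auto
qed

lemma Re_sum_neg_coeffs_eq_zero:
  fixes r1 r2 r3 r4 :: "nat \<Rightarrow> real" and a b :: "nat \<Rightarrow> complex"
  assumes fin: "finite K"
    and ra: "\<And>j. j \<in> K \<Longrightarrow> Re (a j) < 0" and rb: "\<And>j. j \<in> K \<Longrightarrow> Re (b j) < 0"
    and nn: "\<And>j. j \<in> K \<Longrightarrow> r1 j \<ge> 0 \<and> r2 j \<ge> 0 \<and> r3 j \<ge> 0 \<and> r4 j \<ge> 0"
    and s: "(\<Sum>j\<in>K. a j * r1 j + cnj (a j) * r2 j + b j * r3 j + cnj (b j) * r4 j) = 0"
    and j: "j \<in> K"
  shows "r3 j = 0 \<and> r4 j = 0"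
proof -
  let ?t = "\<lambda>j. Re (a j) * (r1 j + r2 j) + Re (b j) * (r3 j + r4 j)"
  have "Re (\<Sum>j\<in>K. a j * r1 j + cnj (a j) * r2 j + b j * r3 j + cnj (b j) * r4 j) = (\<Sum>j\<in>K. ?t j)"
    by (simp add: Re_sum algebra_simps)
  then have "(\<Sum>j\<in>K. ?t j) = 0" using s by simp
  then have s0: "(\<Sum>j\<in>K. - ?t j) = 0" by (simp only: sum_negf)
  have tn: "\<And>j. j \<in> K \<Longrightarrow> - ?t j \<ge> 0"
  proof -
    fix j assume j: "j \<in> K"
    have "Re (a j) * (r1 j + r2 j) \<le> 0" using ra[OF j] nn[OF j] by (simp add: mult_nonpos_nonneg)
    moreover have "Re (b j) * (r3 j + r4 j) \<le> 0" using rb[OF j] nn[OF j] by (simp add: mult_nonpos_nonneg)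
    ultimately show "- ?t j \<ge> 0" by simp
  qed
  have "- ?t j = 0" using s0 tn fin j by (subst (asm) sum_nonneg_eq_0_iff) auto
  moreover have "Re (a j) * (r1 j + r2 j) \<le> 0" using ra[OF j] nn[OF j] by (simp add: mult_nonpos_nonneg)
  ultimately have "Re (b j) * (r3 j + r4 j) \<ge> 0" by simp
  then have "r3 j + r4 j \<le> 0" using rb[OF j] by (simp add: mult_le_0_iff zero_le_mult_iff)
  then show ?thesis using nn[OF j] by simp
qed

lemma sum_roots_of_unity_orthogonal:
  fixes m b b' :: nat
  assumes b: "b < m" "b' < m"
  shows "(\<Sum>a<m. cis (2 * pi / real m) ^ (b * a) * cnj (cis (2 * pi / real m) ^ (b' * a)))
         = (if b = b' then of_nat m else 0)"
proof -
  define \<zeta> where "\<zeta> = cis (2 * pi / real m)"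
  define w where "w = \<zeta> ^ b / \<zeta> ^ b'"
  have m: "m > 0" using b by simp
  have root: "\<zeta> ^ k = cis (2 * pi * real k / real m)" for k unfolding \<zeta>_def by (simp add: DeMoivre mult.commute)
  have cnj_root: "cnj (\<zeta> ^ k) = inverse (\<zeta> ^ k)" for k unfolding root by (simp add: cis_cnj)
  have terms: "\<zeta> ^ (b * a) * cnj (\<zeta> ^ (b' * a)) = w ^ a" for a
    unfolding w_def cnj_root power_divide by (simp add: power_mult power_divide divide_inverse)
  have "\<zeta> ^ m = 1" unfolding root using m by simp
  then have "(\<zeta> ^ k) ^ m = 1" for k by (metis mult.commute power_mult power_one)
  then have wm: "w ^ m = 1" unfolding w_def power_divide by simp
  have "w = 1 \<longleftrightarrow> \<zeta> ^ b = \<zeta> ^ b'" unfolding w_def by (simp add: \<zeta>_def)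
  also have "\<dots> \<longleftrightarrow> b = b'"
    using bij_betw_imp_inj_on[OF bij_betw_roots_unity[OF m]] b unfolding root inj_on_def by auto
  finally have w1: "w = 1 \<longleftrightarrow> b = b'" .
  show ?thesis unfolding \<zeta>_def[symmetric] terms using w1 wm by (auto simp: sum_gp_strict)
qed

section \<open>Levels, projections and transport operators\<close>

definition level :: "(nat \<Rightarrow> nat) \<Rightarrow> nat \<Rightarrow> bidx set" where
  "level n k = {St k a | a. a < n k}"

lemma level_disjoint: "k \<noteq> k' \<Longrightarrow> level n k \<inter> level n k' = {}"
  unfolding level_def by auto

lemma Pk_apply: "Pk n k i j = (if i = j \<and> i \<in> level n k then 1 else 0)"
  unfolding Pk_def level_def by (cases i) auto

lemma rows_in_Pk: "rows_in (level n k) (Pk n k)" unfolding rows_in_def by (simp add: Pk_apply)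

lemma cols_in_Pk: "cols_in (level n k) (Pk n k)" unfolding cols_in_def by (simp add: Pk_apply)

lemma adj_Pk: "adj (Pk n k) = Pk n k" unfolding adj_def by (intro ext) (auto simp: Pk_apply)

lemma Zk_nonzero_imp: "Zk n k i j \<noteq> 0 \<Longrightarrow> i \<in> level n (k + 1) \<and> j \<in> level n k"
  unfolding Zk_def level_def by (cases i; cases j) (auto split: if_splits)

lemma Zk_col_zero: "l \<notin> level n k \<Longrightarrow> Zk n k i l = 0" using Zk_nonzero_imp by blast

lemma Zk_row_zero: "i \<notin> level n (k + 1) \<Longrightarrow> Zk n k i l = 0" using Zk_nonzero_imp by blast

lemma rows_in_Zk: "rows_in (level n (k + 1)) (Zk n k)" unfolding rows_in_def using Zk_nonzero_imp by blast

lemma cols_in_Zk: "cols_in (level n k) (Zk n k)" unfolding cols_in_def using Zk_nonzero_imp by blast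

lemma Pk_mmul_apply:
  assumes "level n k \<subseteq> B" "finite B"
  shows "mmul B (Pk n k) X i j = (if i \<in> level n k then X i j else 0)"
proof -
  have "mmul B (Pk n k) X i j = (\<Sum>l\<in>B. if l = i then (if i \<in> level n k then X i j else 0) else 0)"
    unfolding mmul_def by (intro sum.cong refl) (auto simp: Pk_apply)
  also have "\<dots> = (if i \<in> B then (if i \<in> level n k then X i j else 0) else 0)"
    using assms(2) by (simp add: sum.delta)
  finally show ?thesis using assms by auto
qed

lemma mmul_Pk_apply:
  assumes "level n k \<subseteq> B" "finite B"
  shows "mmul B X (Pk n k) i j = (if j \<in> level n k then X i j else 0)"
proof -
  have "mmul B X (Pk n k) i j = (\<Sum>l\<in>B. if l = j then (if j \<in> level n k then X i j else 0) else 0)"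
    unfolding mmul_def by (intro sum.cong refl) (auto simp: Pk_apply)
  also have "\<dots> = (if j \<in> B then (if j \<in> level n k then X i j else 0) else 0)"
    using assms(2) by (simp add: sum.delta)
  finally show ?thesis using assms by auto
qed

lemma Pk_mmul_rows_in: "level n k \<subseteq> B \<Longrightarrow> finite B \<Longrightarrow> rows_in (level n k) X \<Longrightarrow> mmul B (Pk n k) X = X"
  by (intro ext) (auto simp: Pk_mmul_apply rows_in_def)

lemma mmul_Pk_cols_in: "level n k \<subseteq> B \<Longrightarrow> finite B \<Longrightarrow> cols_in (level n k) X \<Longrightarrow> mmul B X (Pk n k) = X"
  by (intro ext) (auto simp: mmul_Pk_apply cols_in_def)

lemma Pk_mmul_eq_zero: "k \<noteq> k' \<Longrightarrow> rows_in (level n k') X \<Longrightarrow> mmul B (Pk n k) X = 0"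
  by (rule mmul_disjoint_support[OF cols_in_Pk _ level_disjoint])

lemma mmul_Pk_eq_zero: "k \<noteq> k' \<Longrightarrow> cols_in (level n k') X \<Longrightarrow> mmul B X (Pk n k) = 0"
  apply (rule mmul_disjoint_support) apply assumption apply (rule rows_in_Pk) using level_disjoint by blast

lemma Zk_mult_cnj_Zk:
  assumes "b < n (k + 1)" "b' < n (k + 1)" "a < n k"
  shows "Zk n k (St (k + 1) b) (St k a) * cnj (Zk n k (St (k + 1) b') (St k a))
       = zeta n k ^ (b * a) * cnj (zeta n k ^ (b' * a)) / of_nat (n k)"
proof -
  have "complex_of_real (sqrt (real (n k))) * complex_of_real (sqrt (real (n k))) = of_nat (n k)"
    by (simp flip: of_real_mult)
  then show ?thesis using assms by (simp add: Zk_def)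
qed

lemma sum_level:
  assumes "\<And>l. l \<notin> level n k \<Longrightarrow> f l = 0" "level n k \<subseteq> B" "finite B"
  shows "(\<Sum>l\<in>B. f l) = (\<Sum>a<n k. f (St k a))"
proof -
  have "(\<Sum>l\<in>B. f l) = (\<Sum>l\<in>level n k. f l)"
    using assms by (intro sum.mono_neutral_right) auto
  also have "level n k = St k ` {..<n k}" unfolding level_def by auto
  also have "(\<Sum>l\<in>St k ` {..<n k}. f l) = (\<Sum>a<n k. f (St k a))"
    by (rule sum.reindex_cong[where l="St k"]) (auto simp: inj_on_def)
  finally show ?thesis .
qed

section \<open>The generator\<close>

definition dissipator :: "bidx set \<Rightarrow> cop \<Rightarrow> cop \<Rightarrow> cop" where
  "dissipator B L \<rho> = mmul B (mmul B L \<rho>) (adj L)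
     - opscale (1/2) (mmul B (mmul B (adj L) L) \<rho> + mmul B \<rho> (mmul B (adj L) L))"

lemma Lgen_eq_dissipators: "Lgen N n \<Gamma> \<gamma> \<rho> =
   opscale (- \<i>) (mmul (basis N n) (Heff N n \<gamma>) \<rho> - mmul (basis N n) \<rho> (Heff N n \<gamma>))
   + (\<Sum>w\<in>freqs N. \<Sum>e\<in>{Neg, Pos}. dissipator (basis N n) (Kraus N n \<Gamma> e w) \<rho>)"
  unfolding Lgen_def Let_def dissipator_def by (intro ext) (simp add: sum_cop_apply)

lemma Heff_eq: "Heff N n \<gamma> =
    opscale (complex_of_real (real (n 1) * \<gamma> Neg WPlus)) (ketbra (ket Pl) (ket Pl))
  - opscale (complex_of_real (real (n 1) * \<gamma> Pos WPlus)) (ketbra (phi n 1 0) (phi n 1 0))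
  + opscale (complex_of_real (\<gamma> Neg WMinus)) (ketbra (phi n N 0) (phi n N 0))
  - opscale (complex_of_real (\<gamma> Pos WMinus)) (ketbra (ket Mn) (ket Mn))
  + (\<Sum>k\<in>{1..N-1}. opscale (complex_of_real (\<gamma> Neg (W k))) (Zabs N n k)
                   - opscale (complex_of_real (\<gamma> Pos (W k))) (Pk n (k + 1)))"
  unfolding Heff_def by (intro ext) (simp add: sum_cop_apply)

lemma freqs_eq: "freqs N = insert WPlus (insert WMinus (W ` {1..N-1}))"
  unfolding freqs_def by auto

lemma freqs_sum: "(\<Sum>w\<in>freqs N. F w) = F WPlus + F WMinus + (\<Sum>k\<in>{1..N-1}. F (W k))"
proof -
  have "(\<Sum>w\<in>freqs N. F w) = F WPlus + (F WMinus + (\<Sum>w\<in>W ` {1..N-1}. F w))"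
    unfolding freqs_eq by (simp add: image_iff)
  also have "(\<Sum>w\<in>W ` {1..N-1}. F w) = (\<Sum>k\<in>{1..N-1}. F (W k))"
    by (subst sum.reindex) (auto simp: inj_on_def)
  finally show ?thesis by (simp add: add.assoc)
qed

lemma finite_freqs: "finite (freqs N)"
  unfolding freqs_eq by simp

lemma sgn_sum: "(\<Sum>e\<in>{Neg, Pos}. F e) = F Neg + F Pos"
  by simp

lemma dissipator_eq_zero:
  assumes "mmul B L \<rho> = 0" "adj \<rho> = \<rho>"
  shows "dissipator B L \<rho> = 0"
proof -
  have a: "mmul B \<rho> (adj L) = 0" by (metis adj_mmul adj_zero assms)
  have b: "mmul B \<rho> (mmul B (adj L) L) = 0" using mmul_assoc[of B \<rho> "adj L" L] a by simp
  have c: "mmul B (mmul B (adj L) L) \<rho> = 0" using mmul_assoc[of B "adj L" L \<rho>] assms(1) by simp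
  show ?thesis unfolding dissipator_def using assms(1) b c by simp
qed

lemma dissipator_opscale: "dissipator B L (opscale c X) = opscale c (dissipator B L X)"
  unfolding dissipator_def by (simp add: mmul_scale_left mmul_scale_right opscale_diff opscale_add)

lemma Lgen_opscale: "Lgen N n \<Gamma> \<gamma> (opscale c X) = opscale c (Lgen N n \<Gamma> \<gamma> X)"
  unfolding Lgen_eq_dissipators by (simp add: dissipator_opscale mmul_scale_left mmul_scale_right opscale_diff opscale_add
      opscale_sum mult.commute)

lemma dissipator_opscale_Kraus: "dissipator B (opscale c L) \<rho> = opscale (cnj c * c) (dissipator B L \<rho>)"
  unfolding dissipator_def
  by (simp add: mmul_scale_left mmul_scale_right adj_scale opscale_diff opscale_add mult.commute)

lemma mmul_scale_ketbra_left: "mmul B (opscale c (ketbra x y)) \<rho> = opscale c (ketbra x (app B (adj \<rho>) y))"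
  by (simp add: mmul_scale_left mmul_ketbra_left)

lemma inner_dissipator_kernel:
  assumes "adj \<rho> = \<rho>" "app B \<rho> e = 0"
  shows "inner_h B e (app B (dissipator B L \<rho>) e) = inner_h B (app B (adj L) e) (app B \<rho> (app B (adj L) e))"
proof -
  have t1: "inner_h B e (app B (mmul B (mmul B L \<rho>) (adj L)) e) = inner_h B (app B (adj L) e) (app B \<rho> (app B (adj L) e))"
    by (simp add: app_mmul inner_h_app_adj)
  have t2: "inner_h B e (app B (mmul B (mmul B (adj L) L) \<rho>) e) = 0"
    using assms by (simp add: app_mmul)
  have t3: "inner_h B e (app B (mmul B \<rho> (mmul B (adj L) L)) e) = 0"
    using assms by (simp add: app_mmul inner_h_app_adj[of B e \<rho>])
  show ?thesis unfolding dissipator_def app_diff inner_h_diff_right inner_h_app_opscale app_add inner_h_add_right t1 t2 t3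
    by simp
qed

lemma inner_commutator_kernel:
  assumes "adj \<rho> = \<rho>" "app B \<rho> e = 0"
  shows "inner_h B e (app B (mmul B H \<rho> - mmul B \<rho> H) e) = 0"
proof -
  have "inner_h B e (app B \<rho> (app B H e)) = inner_h B (app B (adj \<rho>) e) (app B H e)"
    by (rule inner_h_app_adj)
  also have "\<dots> = 0" using assms by simp
  finally have a: "inner_h B e (app B \<rho> (app B H e)) = 0" .
  show ?thesis unfolding app_diff app_mmul inner_h_diff_right a using assms by simp
qed

section \<open>Invariant states of the transport model\<close>

locale transport_model =
  fixes N :: nat and n :: "nat \<Rightarrow> nat" and \<Gamma> \<gamma> :: "sgn \<Rightarrow> freq \<Rightarrow> real"
  assumes N_ge_2: "N \<ge> 2"
    and n_decreasing: "\<forall>k. 1 \<le> k \<and> k < N \<longrightarrow> n (k + 1) \<le> n k"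
    and n_N_pos: "n N \<ge> 1"
    and Gamma_pos: "\<forall>w\<in>freqs N. \<forall>e. \<Gamma> e w > 0"
begin

abbreviation "B \<equiv> basis N n"

abbreviation "mm \<equiv> mmul B"

abbreviation "E k \<equiv> level n k"

abbreviation "P k \<equiv> Pk n k"

abbreviation "Z k \<equiv> Zk n k"

abbreviation "absZ k \<equiv> Zabs N n k"

lemma n_antimono: assumes "1 \<le> k" "k \<le> j" "j \<le> N" shows "n j \<le> n k"
  using assms(2,3)
proof (induction j rule: dec_induct)
  case base then show ?case by simp
next
  case (step j)
  then have "n (j + 1) \<le> n j" using n_decreasing assms(1) by auto
  then show ?case using step by simp
qed

lemma n_pos: "1 \<le> k \<Longrightarrow> k \<le> N \<Longrightarrow> n k \<ge> 1"
  using n_antimono[of k N] n_N_pos by simp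

lemma St_in_basis: "St k a \<in> B \<longleftrightarrow> 1 \<le> k \<and> k \<le> N \<and> a < n k"
  unfolding basis_def by auto

lemma Pl_in_basis[simp]: "Pl \<in> B" unfolding basis_def by auto

lemma Mn_in_basis[simp]: "Mn \<in> B" unfolding basis_def by auto

lemma finite_basis: "finite B"
proof -
  have "B \<subseteq> {Mn, Pl} \<union> (\<lambda>(k, a). St k a) ` ({1..N} \<times> {..<n 1})"
  proof
    fix x assume "x \<in> B"
    then show "x \<in> {Mn, Pl} \<union> (\<lambda>(k, a). St k a) ` ({1..N} \<times> {..<n 1})"
    proof (cases x)
      case (St k a)
      then have "1 \<le> k" "k \<le> N" "a < n k" using \<open>x \<in> B\<close> St_in_basis by auto
      then have "a < n 1" using n_antimono[of 1 k] by simp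
      then show ?thesis using St \<open>1 \<le> k\<close> \<open>k \<le> N\<close> by force
    qed auto
  qed
  then show ?thesis by (rule finite_subset) auto
qed

lemma level_subset_basis: "1 \<le> k \<Longrightarrow> k \<le> N \<Longrightarrow> E k \<subseteq> B"
  unfolding level_def using St_in_basis by auto

lemma hops_P: "1 \<le> k \<Longrightarrow> k \<le> N \<Longrightarrow> P k \<in> hops B"
  using level_subset_basis by (intro hopsI) (auto simp: Pk_apply)

lemma hops_Z: "1 \<le> k \<Longrightarrow> k < N \<Longrightarrow> Z k \<in> hops B"
proof (intro hopsI)
  fix i j assume k: "1 \<le> k" "k < N" and ij: "i \<notin> B \<or> j \<notin> B"
  show "Z k i j = 0"
  proof (rule ccontr)
    assume "Z k i j \<noteq> 0"
    then have "i \<in> E (k + 1)" "j \<in> E k" using Zk_nonzero_imp by auto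
    then show False using ij level_subset_basis[of "k+1"] level_subset_basis[of k] k by auto
  qed
qed

lemma Z_mmul_adj_Z: assumes k: "1 \<le> k" "k < N" shows "mm (Z k) (adj (Z k)) = P (k + 1)"
proof (rule hops_eqI[OF hops_mmul[OF hops_Z[OF k] hops_adj[OF hops_Z[OF k]]] hops_P])
  show "1 \<le> k + 1" "k + 1 \<le> N" using k by auto
  fix i j
  show "mm (Z k) (adj (Z k)) i j = P (k + 1) i j"
  proof (cases "i \<in> E (k + 1) \<and> j \<in> E (k + 1)")
    case False
    then have "\<forall>l. Z k i l * cnj (Z k j l) = 0" using Zk_row_zero by auto
    then show ?thesis using False unfolding mmul_def adj_def by (auto simp: Pk_apply intro!: sum.neutral)
  next
    case True
    then obtain b b' where b: "i = St (k + 1) b" "b < n (k + 1)" and b': "j = St (k + 1) b'" "b' < n (k + 1)"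
      unfolding level_def by auto
    have nle: "n (k + 1) \<le> n k" using n_decreasing k by auto
    have "mm (Z k) (adj (Z k)) i j = (\<Sum>a<n k. Z k i (St k a) * cnj (Z k j (St k a)))"
      unfolding mmul_def adj_def
      by (rule sum_level[OF _ level_subset_basis finite_basis]) (use k in \<open>auto simp: Zk_col_zero\<close>)
    also have "\<dots> = (\<Sum>a<n k. zeta n k ^ (b * a) * cnj (zeta n k ^ (b' * a))) / of_nat (n k)"
      unfolding sum_divide_distrib b b' using b(2) b'(2) by (intro sum.cong refl Zk_mult_cnj_Zk) auto
    also have "\<dots> = P (k + 1) i j"
      using sum_roots_of_unity_orthogonal[of b "n k" b'] b b' nle n_pos[of k] k
      by (auto simp: zeta_def Pk_apply level_def)
    finally show ?thesis .
  qed
qed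

abbreviation "phi1 \<equiv> phi n 1 0"

abbreviation "phiN \<equiv> phi n N 0"

lemma phi_nonzero_imp: "phi n k a i \<noteq> 0 \<Longrightarrow> i \<in> E k"
  unfolding phi_def level_def by (cases i) (auto split: if_splits)

lemma hvecs_phi: "1 \<le> k \<Longrightarrow> k \<le> N \<Longrightarrow> phi n k a \<in> hvecs B"
  unfolding hvecs_def using phi_nonzero_imp level_subset_basis by blast

lemma hvecs_phi1: "phi1 \<in> hvecs B" using hvecs_phi N_ge_2 by auto

lemma hvecs_phiN: "phiN \<in> hvecs B" using hvecs_phi N_ge_2 by auto

lemma hvecs_ket_Pl: "ket Pl \<in> hvecs B" by (simp add: ket_hvecs)

lemma hvecs_ket_Mn: "ket Mn \<in> hvecs B" by (simp add: ket_hvecs)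

lemma hops_absZ: "1 \<le> k \<Longrightarrow> k < N \<Longrightarrow> absZ k \<in> hops B"
  unfolding Zabs_def by (intro hops_mmul hops_adj hops_Z)

lemma rows_in_absZ: "rows_in (E k) (absZ k)"
  unfolding Zabs_def by (intro rows_in_mmul) (simp add: rows_in_adj cols_in_Zk)

lemma cols_in_absZ: "cols_in (E k) (absZ k)"
  unfolding Zabs_def by (intro cols_in_mmul cols_in_Zk)

lemma rows_in_adj_Z: "rows_in (E k) (adj (Z k))" by (simp add: rows_in_adj cols_in_Zk)

lemma cols_in_adj_Z: "cols_in (E (k + 1)) (adj (Z k))" unfolding cols_in_adj by (rule rows_in_Zk)

lemma adj_absZ: "adj (absZ k) = absZ k"
  unfolding Zabs_def by (simp add: adj_mmul)

lemma P_Suc_mmul_Z: assumes "1 \<le> k" "k < N" shows "mm (P (k + 1)) (Z k) = Z k"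
proof -
  have "E (k + 1) \<subseteq> B" using level_subset_basis[of "k+1"] assms by simp
  then show ?thesis by (intro Pk_mmul_rows_in finite_basis rows_in_Zk)
qed

lemma Z_mmul_P_self: assumes "1 \<le> k" "k < N" shows "mm (Z k) (P k) = Z k"
proof -
  have "E k \<subseteq> B" using level_subset_basis[of k] assms by simp
  then show ?thesis by (intro mmul_Pk_cols_in finite_basis cols_in_Zk)
qed

lemma Z_mmul_absZ: assumes "1 \<le> k" "k < N" shows "mm (Z k) (absZ k) = Z k"
proof -
  have "mm (Z k) (absZ k) = mm (mm (Z k) (adj (Z k))) (Z k)" unfolding Zabs_def by (simp add: mmul_assoc)
  also have "\<dots> = mm (P (k + 1)) (Z k)" using Z_mmul_adj_Z[OF assms] by simp
  also have "\<dots> = Z k" by (rule P_Suc_mmul_Z[OF assms])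
  finally show ?thesis .
qed

lemma absZ_mmul_adj_Z: assumes "1 \<le> k" "k < N" shows "mm (absZ k) (adj (Z k)) = adj (Z k)"
  using Z_mmul_absZ[OF assms] by (metis adj_absZ adj_adj adj_mmul)

lemma absZ_idem: assumes "1 \<le> k" "k < N" shows "mm (absZ k) (absZ k) = absZ k"
  using Z_mmul_absZ[OF assms] unfolding Zabs_def by (simp add: mmul_assoc)

lemma app_adj_Z1_ket: "app B (adj (Z 1)) (ket (St 2 0)) = phi1"
proof -
  have n2: "n 2 \<ge> 1" using n_pos[of 2] N_ge_2 by auto
  have m: "St 2 0 \<in> B" using St_in_basis N_ge_2 n2 by auto
  show ?thesis
  proof (rule ext)
    fix i
    have "app B (adj (Z 1)) (ket (St 2 0)) i = cnj (Z 1 (St 2 0) i)"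
      using m finite_basis by (simp add: app_ket adj_def)
    also have "\<dots> = phi1 i"
      using n2 by (cases i) (auto simp: Zk_def phi_def numeral_2_eq_2)
    finally show "app B (adj (Z 1)) (ket (St 2 0)) i = phi1 i" .
  qed
qed

lemma app_absZ1_phi1: "app B (absZ 1) phi1 = phi1"
proof -
  have n2: "n 2 \<ge> 1" using n_pos[of 2] N_ge_2 by auto
  have m: "St 2 0 \<in> B" using St_in_basis N_ge_2 n2 by auto
  have N1: "1 < N" using N_ge_2 by simp
  have "app B (absZ 1) phi1 = app B (mm (adj (Z 1)) (mm (Z 1) (adj (Z 1)))) (ket (St 2 0))"
    unfolding Zabs_def app_adj_Z1_ket[symmetric] by (simp add: app_mmul)
  also have "\<dots> = app B (adj (Z 1)) (app B (P 2) (ket (St 2 0)))"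
    using Z_mmul_adj_Z[of 1] N1 by (simp add: app_mmul numeral_2_eq_2)
  also have "app B (P 2) (ket (St 2 0)) = ket (St 2 0)"
    unfolding app_ket[OF finite_basis m] using n2 by (intro ext) (auto simp: Pk_apply ket_def level_def)
  finally show ?thesis using app_adj_Z1_ket by simp
qed

lemma Kraus_simps:
  "Kraus N n \<Gamma> Neg WPlus = opscale (complex_of_real (sqrt (real (n 1) * \<Gamma> Neg WPlus))) (ketbra phi1 (ket Pl))"
  "Kraus N n \<Gamma> Pos WPlus = opscale (complex_of_real (sqrt (real (n 1) * \<Gamma> Pos WPlus))) (ketbra (ket Pl) phi1)"
  "Kraus N n \<Gamma> Neg (W k) = opscale (complex_of_real (sqrt (\<Gamma> Neg (W k)))) (Z k)"
  "Kraus N n \<Gamma> Pos (W k) = opscale (complex_of_real (sqrt (\<Gamma> Pos (W k)))) (adj (Z k))"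
  "Kraus N n \<Gamma> Neg WMinus = opscale (complex_of_real (sqrt (\<Gamma> Neg WMinus))) (ketbra (ket Mn) phiN)"
  "Kraus N n \<Gamma> Pos WMinus = 0"
  unfolding Kraus_def by (auto intro!: ext)

lemma hops_Kraus: "w \<in> freqs N \<Longrightarrow> Kraus N n \<Gamma> e w \<in> hops B"
  using hvecs_phi1 unfolding freqs_eq
  by (cases e) (auto simp: Kraus_simps intro!: hops_scale hops_ketbra hvecs_phi1 hvecs_phiN hvecs_ket_Pl hvecs_ket_Mn
      hops_Z hops_adj)

lemma Gamma_pos_freq: "w \<in> freqs N \<Longrightarrow> \<Gamma> e w > 0" using Gamma_pos by auto

lemma W_in_freqs: "1 \<le> k \<Longrightarrow> k \<le> N - 1 \<Longrightarrow> W k \<in> freqs N" unfolding freqs_def by auto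

(* Once rho e = 0, the Hamiltonian and anticommutator terms of <e, L(rho) e> vanish and what is
   left is the sum of the nonnegative numbers <L^* e, rho L^* e>. *)

lemma invariant_kernel_Kraus_adj:
  assumes H: "\<rho> \<in> hops B" "psd B \<rho>" "Lgen N n \<Gamma> \<gamma> \<rho> = 0" and e: "app B \<rho> (ket i) = 0" "i \<in> B"
    and w: "w \<in> freqs N"
  shows "app B \<rho> (app B (adj (Kraus N n \<Gamma> ep w)) (ket i)) = 0"
proof -
  have herm: "adj \<rho> = \<rho>" using psd_selfadjoint[OF H(1,2) finite_basis] .
  let ?g = "\<lambda>w ep. inner_h B (app B (adj (Kraus N n \<Gamma> ep w)) (ket i)) (app B \<rho> (app B (adj (Kraus N n \<Gamma> ep w)) (ket i)))"
  have hv: "\<And>w ep. w \<in> freqs N \<Longrightarrow> app B (adj (Kraus N n \<Gamma> ep w)) (ket i) \<in> hvecs B"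
    by (intro hvecs_app hops_adj hops_Kraus)
  have nn: "\<And>w ep. w \<in> freqs N \<Longrightarrow> Re (?g w ep) \<ge> 0 \<and> Im (?g w ep) = 0"
    using H(2) hv unfolding psd_def by blast
  have "0 = inner_h B (ket i) (app B (Lgen N n \<Gamma> \<gamma> \<rho>) (ket i))" using H(3) by simp
  also have "\<dots> = (\<Sum>w\<in>freqs N. \<Sum>ep\<in>{Neg, Pos}. ?g w ep)"
    unfolding Lgen_eq_dissipators app_add inner_h_add_right inner_h_app_opscale app_sum inner_h_sum_right
    by (simp add: inner_commutator_kernel[OF herm e(1)] inner_dissipator_kernel[OF herm e(1)])
  finally have s0: "(\<Sum>w\<in>freqs N. \<Sum>ep\<in>{Neg, Pos}. ?g w ep) = 0" by simp
  have "Re (\<Sum>ep\<in>{Neg, Pos}. ?g w ep) = 0"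
    using s0 w nn by (intro Re_sum_nonneg_eq_zero[OF finite_freqs, where g="\<lambda>w. \<Sum>ep\<in>{Neg, Pos}. ?g w ep"])
      (auto simp: Re_sum intro!: sum_nonneg)
  then have "Re (?g w ep) = 0"
    using nn w by (intro Re_sum_nonneg_eq_zero[where S="{Neg, Pos}" and g="?g w"]) (auto, cases ep, auto)
  then have "?g w ep = 0" using nn[OF w, of ep] by (simp add: complex_eq_iff)
  then show ?thesis by (rule psd_app_eq_zero[OF H(1,2) finite_basis hv[OF w]])
qed

lemma invariant_kills_phi:
  assumes H: "\<rho> \<in> hops B" "psd B \<rho>" "Lgen N n \<Gamma> \<gamma> \<rho> = 0"
    and e: "app B \<rho> (ket Pl) = 0" "app B \<rho> (ket Mn) = 0"
  shows "app B \<rho> phi1 = 0" "app B \<rho> phiN = 0"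
proof -
  have wp: "WPlus \<in> freqs N" "WMinus \<in> freqs N" unfolding freqs_def by auto
  have one: "inner_h B (ket Pl) (ket Pl) = 1" "inner_h B (ket Mn) (ket Mn) = 1"
    by (subst inner_h_ket[OF finite_basis], simp, simp add: ket_def)+
  let ?c = "sqrt (real (n 1) * \<Gamma> Pos WPlus)" and ?d = "sqrt (\<Gamma> Neg WMinus)"
  have cd: "?c \<noteq> 0" "?d \<noteq> 0"
    using Gamma_pos_freq[OF wp(1), of Pos] Gamma_pos_freq[OF wp(2), of Neg] n_pos[of 1] N_ge_2 by auto
  have "app B (adj (Kraus N n \<Gamma> Pos WPlus)) (ket Pl) = (\<lambda>i. complex_of_real ?c * phi1 i)"
    by (simp add: Kraus_simps adj_scale adj_ketbra app_opscale app_ketbra one)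
  then have "(\<lambda>i. complex_of_real ?c * app B \<rho> phi1 i) = 0"
    using invariant_kernel_Kraus_adj[OF H e(1) Pl_in_basis wp(1), of Pos] by (simp add: app_scaled_vec)
  then show "app B \<rho> phi1 = 0" using cd(1) by (simp add: fun_eq_iff)
  have "app B (adj (Kraus N n \<Gamma> Neg WMinus)) (ket Mn) = (\<lambda>i. complex_of_real ?d * phiN i)"
    by (simp add: Kraus_simps adj_scale adj_ketbra app_opscale app_ketbra one)
  then have "(\<lambda>i. complex_of_real ?d * app B \<rho> phiN i) = 0"
    using invariant_kernel_Kraus_adj[OF H e(2) Mn_in_basis wp(2), of Neg] by (simp add: app_scaled_vec)
  then show "app B \<rho> phiN = 0" using cd(2) by (simp add: fun_eq_iff)
qed

definition kappaZ :: "nat \<Rightarrow> complex" where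
  "kappaZ k = - \<i> * complex_of_real (\<gamma> Neg (W k)) - complex_of_real (\<Gamma> Neg (W k)) / 2"

definition kappaP :: "nat \<Rightarrow> complex" where
  "kappaP k = \<i> * complex_of_real (\<gamma> Pos (W k)) - complex_of_real (\<Gamma> Pos (W k)) / 2"

definition Llink :: "nat \<Rightarrow> cop \<Rightarrow> cop" where
  "Llink k \<sigma> = opscale (kappaZ k) (mm (absZ k) \<sigma>) + opscale (cnj (kappaZ k)) (mm \<sigma> (absZ k))
     + opscale (complex_of_real (\<Gamma> Neg (W k))) (mm (mm (Z k) \<sigma>) (adj (Z k)))
     + opscale (kappaP k) (mm (P (k + 1)) \<sigma>) + opscale (cnj (kappaP k)) (mm \<sigma> (P (k + 1)))
     + opscale (complex_of_real (\<Gamma> Pos (W k))) (mm (mm (adj (Z k)) \<sigma>) (Z k))"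

(* The summand of H_eff belonging to link k; the remaining boundary terms of H_eff vanish on
   boundary-free operators. *)

definition Hlink :: "nat \<Rightarrow> cop" where
  "Hlink k = opscale (complex_of_real (\<gamma> Neg (W k))) (absZ k) - opscale (complex_of_real (\<gamma> Pos (W k))) (P (k + 1))"

lemma Llink_eq:
  assumes k: "k \<in> {1..N-1}"
  shows "Llink k \<sigma> = opscale (- \<i>) (mm (Hlink k) \<sigma> - mm \<sigma> (Hlink k))
    + dissipator B (Kraus N n \<Gamma> Neg (W k)) \<sigma> + dissipator B (Kraus N n \<Gamma> Pos (W k)) \<sigma>"
proof -
  have G: "\<Gamma> Neg (W k) > 0" "\<Gamma> Pos (W k) > 0" using Gamma_pos_freq[OF W_in_freqs] k by auto
  have ZZ: "mm (Z k) (adj (Z k)) = P (k + 1)" using k by (intro Z_mmul_adj_Z) auto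
  have "dissipator B (Kraus N n \<Gamma> Neg (W k)) \<sigma> = opscale (complex_of_real (\<Gamma> Neg (W k)))
      (mm (mm (Z k) \<sigma>) (adj (Z k)) - opscale (1/2) (mm (absZ k) \<sigma> + mm \<sigma> (absZ k)))"
    using G unfolding Kraus_simps dissipator_opscale_Kraus
    by (simp add: cnj_sqrt_mult_sqrt sqrt_mult_sqrt dissipator_def Zabs_def)
  moreover have "dissipator B (Kraus N n \<Gamma> Pos (W k)) \<sigma> = opscale (complex_of_real (\<Gamma> Pos (W k)))
      (mm (mm (adj (Z k)) \<sigma>) (Z k) - opscale (1/2) (mm (P (k + 1)) \<sigma> + mm \<sigma> (P (k + 1))))"
    using G ZZ unfolding Kraus_simps dissipator_opscale_Kraus
    by (simp add: cnj_sqrt_mult_sqrt sqrt_mult_sqrt dissipator_def)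
  ultimately show ?thesis
    unfolding Llink_def Hlink_def kappaZ_def kappaP_def
    by (intro ext) (simp add: mmul_diff_left mmul_diff_right mmul_scale_left mmul_scale_right algebra_simps)
qed

lemma boundary_dissipators_eq_zero:
  assumes "adj \<sigma> = \<sigma>" "app B \<sigma> (ket Pl) = 0" "app B \<sigma> (ket Mn) = 0" "app B \<sigma> phi1 = 0" "app B \<sigma> phiN = 0"
  shows "dissipator B (Kraus N n \<Gamma> e WPlus) \<sigma> = 0" "dissipator B (Kraus N n \<Gamma> e WMinus) \<sigma> = 0"
  using assms by (cases e; auto intro!: dissipator_eq_zero simp: Kraus_simps mmul_scale_ketbra_left)+

lemma Lgen_eq_sum_Llink:
  assumes S: "\<sigma> \<in> hops B" "adj \<sigma> = \<sigma>" "app B \<sigma> (ket Pl) = 0" "app B \<sigma> (ket Mn) = 0"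
    "app B \<sigma> phi1 = 0" "app B \<sigma> phiN = 0"
  shows "Lgen N n \<Gamma> \<gamma> \<sigma> = (\<Sum>k\<in>{1..N-1}. Llink k \<sigma>)"
proof -
  let ?K = "{1..N-1}"
  have H1: "mm (Heff N n \<gamma>) \<sigma> = (\<Sum>k\<in>?K. mm (Hlink k) \<sigma>)"
    unfolding Heff_eq mmul_add_left mmul_diff_left mmul_scale_left mmul_ketbra_left mmul_sum_left
    using S by (simp add: Hlink_def mmul_diff_left mmul_scale_left)
  have H2: "mm \<sigma> (Heff N n \<gamma>) = (\<Sum>k\<in>?K. mm \<sigma> (Hlink k))"
    unfolding Heff_eq mmul_add_right mmul_diff_right mmul_scale_right mmul_ketbra_right mmul_sum_right
    using S by (simp add: Hlink_def mmul_diff_right mmul_scale_right)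
  have "Lgen N n \<Gamma> \<gamma> \<sigma> = opscale (- \<i>) (\<Sum>k\<in>?K. mm (Hlink k) \<sigma> - mm \<sigma> (Hlink k))
      + (\<Sum>k\<in>?K. dissipator B (Kraus N n \<Gamma> Neg (W k)) \<sigma> + dissipator B (Kraus N n \<Gamma> Pos (W k)) \<sigma>)"
    unfolding Lgen_eq_dissipators H1 H2 freqs_sum sgn_sum boundary_dissipators_eq_zero[OF S(2-6)]
    by (simp add: sum_subtractf)
  also have "\<dots> = (\<Sum>k\<in>?K. opscale (- \<i>) (mm (Hlink k) \<sigma> - mm \<sigma> (Hlink k))
      + (dissipator B (Kraus N n \<Gamma> Neg (W k)) \<sigma> + dissipator B (Kraus N n \<Gamma> Pos (W k)) \<sigma>))"
    by (simp add: opscale_sum sum.distrib)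
  also have "\<dots> = (\<Sum>k\<in>?K. Llink k \<sigma>)"
    by (intro sum.cong refl) (simp add: Llink_eq add.assoc)
  finally show ?thesis .
qed

lemma P_idem: "1 \<le> k \<Longrightarrow> k \<le> N \<Longrightarrow> mm (P k) (P k) = P k"
  by (intro Pk_mmul_rows_in level_subset_basis finite_basis rows_in_Pk)

lemma P_orthogonal: "k \<noteq> l \<Longrightarrow> mm (P k) (P l) = 0"
  by (rule Pk_mmul_eq_zero[OF _ rows_in_Pk])

lemma P_absZ_commute:
  assumes "1 \<le> k" "k \<le> N" "1 \<le> j" "j < N"
  shows "mm (P k) (absZ j) = mm (absZ j) (P k)"
proof (cases "k = j")
  case True
  have s: "E k \<subseteq> B" using level_subset_basis assms by auto
  show ?thesis using True Pk_mmul_rows_in[OF s finite_basis rows_in_absZ] mmul_Pk_cols_in[OF s finite_basis cols_in_absZ] by simp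
next
  case False
  then show ?thesis using Pk_mmul_eq_zero[OF False rows_in_absZ] mmul_Pk_eq_zero[OF False cols_in_absZ] by simp
qed

lemma P_commute: "mm (P k) (P l) = mm (P l) (P k)"
  by (cases "k = l") (auto simp: P_orthogonal)

lemma P_mmul_Z: assumes "1 \<le> j" "j < N" shows "mm (P k) (Z j) = (if k = j + 1 then Z j else 0)"
  using P_Suc_mmul_Z[OF assms] Pk_mmul_eq_zero[OF _ rows_in_Zk] by auto

lemma Z_mmul_P: assumes "1 \<le> j" "j < N" shows "mm (Z j) (P k) = (if k = j then Z j else 0)"
  using Z_mmul_P_self[OF assms] mmul_Pk_eq_zero[OF _ cols_in_Zk] by auto

lemma P_mmul_adj_Z: assumes "1 \<le> j" "j < N" shows "mm (P k) (adj (Z j)) = (if k = j then adj (Z j) else 0)"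
proof -
  have "mm (P j) (adj (Z j)) = adj (Z j)" using Z_mmul_P_self[OF assms] by (metis adj_Pk adj_mmul)
  then show ?thesis using Pk_mmul_eq_zero[OF _ rows_in_adj_Z] by auto
qed

lemma adj_Z_mmul_P: assumes "1 \<le> j" "j < N" shows "mm (adj (Z j)) (P k) = (if k = j + 1 then adj (Z j) else 0)"
proof -
  have "mm (adj (Z j)) (P (j + 1)) = adj (Z j)" using P_Suc_mmul_Z[OF assms] by (metis adj_Pk adj_mmul)
  then show ?thesis using mmul_Pk_eq_zero[OF _ cols_in_adj_Z] by auto
qed

lemma Re_kappaZ: "Re (kappaZ k) = - \<Gamma> Neg (W k) / 2" unfolding kappaZ_def by simp

lemma Re_kappaP: "Re (kappaP k) = - \<Gamma> Pos (W k) / 2" unfolding kappaP_def by simp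

lemma offdiag_block_Llink:
  fixes \<sigma> :: cop
  assumes j: "j \<in> {1..N-1}" and k: "1 \<le> k" "k \<le> N" and l: "1 \<le> l" "l \<le> N" and kl: "k \<noteq> l"
  defines "X \<equiv> mm (P k) (mm \<sigma> (P l))"
  shows "mm (P k) (mm (Llink j \<sigma>) (P l)) = opscale (kappaZ j) (mm (absZ j) X) + opscale (cnj (kappaZ j)) (mm X (absZ j))
           + opscale (kappaP j) (mm (P (j + 1)) X) + opscale (cnj (kappaP j)) (mm X (P (j + 1)))"
proof -
  have j1: "1 \<le> j" "j < N" using j by auto
  have t1: "mm (P k) (mm (mm (absZ j) \<sigma>) (P l)) = mm (absZ j) X"
    unfolding X_def by (metis P_absZ_commute[OF k j1] mmul_assoc)
  have t2: "mm (P k) (mm (mm \<sigma> (absZ j)) (P l)) = mm X (absZ j)"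
    unfolding X_def by (metis P_absZ_commute[OF l j1] mmul_assoc)
  have t3: "mm (P k) (mm (mm (P (j + 1)) \<sigma>) (P l)) = mm (P (j + 1)) X"
    unfolding X_def by (metis P_commute mmul_assoc)
  have t4: "mm (P k) (mm (mm \<sigma> (P (j + 1))) (P l)) = mm X (P (j + 1))"
    unfolding X_def by (metis P_commute mmul_assoc)
  have t5: "mm (P k) (mm (mm (mm (Z j) \<sigma>) (adj (Z j))) (P l)) = 0"
  proof -
    have "mm (P k) (mm (mm (mm (Z j) \<sigma>) (adj (Z j))) (P l)) = mm (mm (P k) (Z j)) (mm \<sigma> (mm (adj (Z j)) (P l)))"
      by (simp add: mmul_assoc)
    then show ?thesis using kl by (simp add: P_mmul_Z[OF j1] adj_Z_mmul_P[OF j1])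
  qed
  have t6: "mm (P k) (mm (mm (mm (adj (Z j)) \<sigma>) (Z j)) (P l)) = 0"
  proof -
    have "mm (P k) (mm (mm (mm (adj (Z j)) \<sigma>) (Z j)) (P l)) = mm (mm (P k) (adj (Z j))) (mm \<sigma> (mm (Z j) (P l)))"
      by (simp add: mmul_assoc)
    then show ?thesis using kl by (simp add: P_mmul_adj_Z[OF j1] Z_mmul_P[OF j1])
  qed
  show ?thesis unfolding Llink_def
    by (simp add: mmul_add_left mmul_add_right mmul_scale_left mmul_scale_right t1 t2 t3[simplified] t4[simplified] t5 t6)
qed

lemma trace_absZ_left: "trace_h B (mm (adj X) (mm (absZ j) X)) = complex_of_real (hs2 B (mm (Z j) X))"
proof -
  have "mm (adj (mm (Z j) X)) (mm (Z j) X) = mm (adj X) (mm (absZ j) X)"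
    unfolding Zabs_def by (simp add: adj_mmul mmul_assoc)
  then show ?thesis by (metis trace_adj_mmul_self)
qed

lemma trace_absZ_right: "trace_h B (mm (adj X) (mm X (absZ j))) = complex_of_real (hs2 B (mm X (adj (Z j))))"
proof -
  have "trace_h B (mm (adj (mm X (adj (Z j)))) (mm X (adj (Z j))))
      = trace_h B (mm (Z j) (mm (adj X) (mm X (adj (Z j)))))"
    by (simp add: adj_mmul mmul_assoc)
  also have "\<dots> = trace_h B (mm (mm (adj X) (mm X (adj (Z j)))) (Z j))" by (rule trace_h_mmul_commute)
  also have "\<dots> = trace_h B (mm (adj X) (mm X (absZ j)))" unfolding Zabs_def by (simp add: mmul_assoc)
  finally show ?thesis by (metis trace_adj_mmul_self)
qed

lemma trace_P_left: assumes "1 \<le> m" "m \<le> N"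
  shows "trace_h B (mm (adj X) (mm (P m) X)) = complex_of_real (hs2 B (mm (P m) X))"
proof -
  have "mm (adj (mm (P m) X)) (mm (P m) X) = mm (adj X) (mm (mm (P m) (P m)) X)"
    by (simp add: adj_mmul adj_Pk mmul_assoc)
  then show ?thesis using P_idem[OF assms] by (metis trace_adj_mmul_self)
qed

lemma trace_P_right: assumes "1 \<le> m" "m \<le> N"
  shows "trace_h B (mm (adj X) (mm X (P m))) = complex_of_real (hs2 B (mm X (P m)))"
proof -
  have "trace_h B (mm (adj (mm X (P m))) (mm X (P m))) = trace_h B (mm (P m) (mm (adj X) (mm X (P m))))"
    by (simp add: adj_mmul adj_Pk mmul_assoc)
  also have "\<dots> = trace_h B (mm (mm (adj X) (mm X (P m))) (P m))" by (rule trace_h_mmul_commute)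
  also have "\<dots> = trace_h B (mm (adj X) (mm X (mm (P m) (P m))))" by (simp add: mmul_assoc)
  finally show ?thesis using P_idem[OF assms] by (metis trace_adj_mmul_self)
qed

definition boundary_free :: "cop \<Rightarrow> bool" where
  "boundary_free \<sigma> \<longleftrightarrow> \<sigma> \<in> hops B \<and> adj \<sigma> = \<sigma> \<and> app B \<sigma> (ket Pl) = 0 \<and> app B \<sigma> (ket Mn) = 0
     \<and> app B \<sigma> phi1 = 0 \<and> app B \<sigma> phiN = 0"

(* The (k,l) block of L(sigma) = 0 paired with X in the Hilbert-Schmidt product; all the
   coefficients kappa have negative real part. *)

lemma offdiag_block_trace_identity:
  assumes C: "boundary_free \<sigma>" and L: "Lgen N n \<Gamma> \<gamma> \<sigma> = 0"
    and k: "1 \<le> k" "k \<le> N" and l: "1 \<le> l" "l \<le> N" and kl: "k \<noteq> l"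
  defines "X \<equiv> mm (P k) (mm \<sigma> (P l))"
  shows "(\<Sum>j\<in>{1..N-1}. kappaZ j * hs2 B (mm (Z j) X) + cnj (kappaZ j) * hs2 B (mm X (adj (Z j)))
       + kappaP j * hs2 B (mm (P (j + 1)) X) + cnj (kappaP j) * hs2 B (mm X (P (j + 1)))) = 0"
proof -
  let ?K = "{1..N-1}"
  let ?F = "\<lambda>j. opscale (kappaZ j) (mm (absZ j) X) + opscale (cnj (kappaZ j)) (mm X (absZ j))
           + opscale (kappaP j) (mm (P (j + 1)) X) + opscale (cnj (kappaP j)) (mm X (P (j + 1)))"
  have "0 = mm (P k) (mm (Lgen N n \<Gamma> \<gamma> \<sigma>) (P l))" using L by simp
  also have "\<dots> = (\<Sum>j\<in>?K. mm (P k) (mm (Llink j \<sigma>) (P l)))"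
    using C unfolding boundary_free_def by (simp add: Lgen_eq_sum_Llink mmul_sum_left mmul_sum_right)
  also have "\<dots> = (\<Sum>j\<in>?K. ?F j)"
    by (intro sum.cong refl) (simp add: offdiag_block_Llink[OF _ k l kl] X_def)
  finally have "trace_h B (mm (adj X) (\<Sum>j\<in>?K. ?F j)) = 0" by (metis mmul_zero_right trace_h_zero)
  moreover have "\<And>j. j \<in> ?K \<Longrightarrow> 1 \<le> j + 1 \<and> j + 1 \<le> N" by auto
  ultimately show ?thesis
    by (simp add: mmul_sum_right trace_h_sum mmul_add_right mmul_scale_right trace_h_add trace_h_scale
        trace_absZ_left trace_absZ_right trace_P_left trace_P_right del: One_nat_def)
qed

lemma offdiag_block_eq_zero:
  assumes C: "boundary_free \<sigma>" and L: "Lgen N n \<Gamma> \<gamma> \<sigma> = 0"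
    and k: "1 \<le> k" "k \<le> N" and l: "1 \<le> l" "l \<le> N" and kl: "k \<noteq> l"
  shows "mm (P k) (mm \<sigma> (P l)) = 0"
proof -
  let ?K = "{1..N-1}"
  define X where "X = mm (P k) (mm \<sigma> (P l))"
  have Xh: "X \<in> hops B" unfolding X_def using C k l unfolding boundary_free_def by (intro hops_mmul hops_P) auto
  have r: "hs2 B (mm (P (j + 1)) X) = 0 \<and> hs2 B (mm X (P (j + 1))) = 0" if j: "j \<in> ?K" for j
  proof (rule Re_sum_neg_coeffs_eq_zero[OF _ _ _ _ offdiag_block_trace_identity[OF C L k l kl, folded X_def] j])
    show "\<And>j. j \<in> ?K \<Longrightarrow> Re (kappaZ j) < 0" using Gamma_pos_freq[OF W_in_freqs] by (auto simp: Re_kappaZ)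
    show "\<And>j. j \<in> ?K \<Longrightarrow> Re (kappaP j) < 0" using Gamma_pos_freq[OF W_in_freqs] by (auto simp: Re_kappaP)
  qed (auto simp: hs2_nonneg)
  have PX: "mm (P k) X = X" and XP: "mm X (P l) = X"
    unfolding X_def using P_idem[OF k] P_idem[OF l] by (simp_all flip: mmul_assoc, simp add: mmul_assoc)
  have "hs2 B X = 0"
  proof (cases "k \<ge> 2")
    case True
    then have "k - 1 \<in> ?K" "k - 1 + 1 = k" using k by auto
    then show ?thesis using r[of "k - 1"] PX by simp
  next
    case False
    then have "l - 1 \<in> ?K" "l - 1 + 1 = l" using k l kl by auto
    then show ?thesis using r[of "l - 1"] XP by simp
  qed
  then show ?thesis using hs2_eq_zero[OF finite_basis Xh] X_def by simp
qed

definition block :: "cop \<Rightarrow> nat \<Rightarrow> cop" where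
  "block \<sigma> k = mm (P k) (mm \<sigma> (P k))"

lemma absZ_mmul_P: assumes "1 \<le> j" "j < N" shows "mm (absZ j) (P k) = (if k = j then absZ j else 0)"
proof -
  have "mm (absZ j) (P j) = absZ j" using level_subset_basis[of j] assms by (intro mmul_Pk_cols_in finite_basis cols_in_absZ) auto
  then show ?thesis using mmul_Pk_eq_zero[OF _ cols_in_absZ] by auto
qed

lemma P_mmul_absZ: assumes "1 \<le> j" "j < N" shows "mm (P k) (absZ j) = (if k = j then absZ j else 0)"
proof -
  have "mm (P j) (absZ j) = absZ j" using level_subset_basis[of j] assms by (intro Pk_mmul_rows_in finite_basis rows_in_absZ) auto
  then show ?thesis using Pk_mmul_eq_zero[OF _ rows_in_absZ] by auto
qed

lemma block_Z_sandwich: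
  assumes j1: "1 \<le> j" "j < N"
  shows "mm (P k) (mm (mm (mm (Z j) \<sigma>) (adj (Z j))) (P k)) = (if k = j + 1 then mm (Z j) (mm (block \<sigma> j) (adj (Z j))) else 0)"
proof -
  have "mm (P k) (mm (mm (mm (Z j) \<sigma>) (adj (Z j))) (P k)) = mm (mm (P k) (Z j)) (mm \<sigma> (mm (adj (Z j)) (P k)))"
    by (simp add: mmul_assoc)
  moreover have "mm (Z j) (mm (block \<sigma> j) (adj (Z j))) = mm (mm (Z j) (P j)) (mm \<sigma> (mm (P j) (adj (Z j))))"
    by (simp add: mmul_assoc block_def)
  ultimately show ?thesis using Z_mmul_P_self[OF j1] P_mmul_adj_Z[OF j1, of j] by (simp add: P_mmul_Z[OF j1] adj_Z_mmul_P[OF j1])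
qed

lemma block_adj_Z_sandwich:
  assumes j1: "1 \<le> j" "j < N"
  shows "mm (P k) (mm (mm (mm (adj (Z j)) \<sigma>) (Z j)) (P k)) = (if j = k then mm (adj (Z k)) (mm (block \<sigma> (k + 1)) (Z k)) else 0)"
proof -
  have "mm (P k) (mm (mm (mm (adj (Z j)) \<sigma>) (Z j)) (P k)) = mm (mm (P k) (adj (Z j))) (mm \<sigma> (mm (Z j) (P k)))"
    by (simp add: mmul_assoc)
  moreover have "mm (adj (Z j)) (mm (block \<sigma> (j + 1)) (Z j)) = mm (mm (adj (Z j)) (P (j + 1))) (mm \<sigma> (mm (P (j + 1)) (Z j)))"
    by (simp add: mmul_assoc block_def)
  ultimately show ?thesis using P_Suc_mmul_Z[OF j1] adj_Z_mmul_P[OF j1, of "j+1"] by (auto simp: P_mmul_adj_Z[OF j1] Z_mmul_P[OF j1])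
qed

lemma block_Llink:
  assumes j: "j \<in> {1..N-1}" and k: "1 \<le> k" "k \<le> N"
  shows "mm (P k) (mm (Llink j \<sigma>) (P k)) =
     (if j = k then opscale (kappaZ k) (mm (absZ k) (block \<sigma> k)) + opscale (cnj (kappaZ k)) (mm (block \<sigma> k) (absZ k))
        + opscale (complex_of_real (\<Gamma> Pos (W k))) (mm (adj (Z k)) (mm (block \<sigma> (k + 1)) (Z k))) else 0)
   + (if k = j + 1 then opscale (kappaP j + cnj (kappaP j)) (block \<sigma> k)
        + opscale (complex_of_real (\<Gamma> Neg (W j))) (mm (Z j) (mm (block \<sigma> j) (adj (Z j)))) else 0)"
proof -
  have j1: "1 \<le> j" "j < N" using j by auto
  have t1: "mm (P k) (mm (mm (absZ j) \<sigma>) (P k)) = (if j = k then mm (absZ k) (block \<sigma> k) else 0)"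
  proof -
    have "mm (P k) (mm (mm (absZ j) \<sigma>) (P k)) = mm (mm (P k) (absZ j)) (mm \<sigma> (P k))" by (simp add: mmul_assoc)
    moreover have "mm (absZ k) (block \<sigma> k) = mm (mm (absZ k) (P k)) (mm \<sigma> (P k))" by (simp add: mmul_assoc block_def)
    moreover have "mm (P k) (absZ j) = (if j = k then absZ k else 0)" "j = k \<longrightarrow> mm (absZ k) (P k) = absZ k"
      using P_mmul_absZ[OF j1, of k] absZ_mmul_P[OF j1, of j] by auto
    ultimately show ?thesis by (cases "j = k") simp_all
  qed
  have t2: "mm (P k) (mm (mm \<sigma> (absZ j)) (P k)) = (if j = k then mm (block \<sigma> k) (absZ k) else 0)"
  proof -
    have "mm (P k) (mm (mm \<sigma> (absZ j)) (P k)) = mm (mm (P k) \<sigma>) (mm (absZ j) (P k))" by (simp add: mmul_assoc)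
    moreover have "mm (block \<sigma> k) (absZ k) = mm (mm (P k) \<sigma>) (mm (P k) (absZ k))" by (simp add: mmul_assoc block_def)
    moreover have "mm (absZ j) (P k) = (if j = k then absZ k else 0)" "j = k \<longrightarrow> mm (P k) (absZ k) = absZ k"
      using P_mmul_absZ[OF j1, of j] absZ_mmul_P[OF j1, of k] by auto
    ultimately show ?thesis by (cases "j = k") simp_all
  qed
  have t3: "mm (P k) (mm (mm (P (j + 1)) \<sigma>) (P k)) = (if k = j + 1 then block \<sigma> k else 0)"
  proof -
    have "mm (P k) (mm (mm (P (j + 1)) \<sigma>) (P k)) = mm (mm (P k) (P (j + 1))) (mm \<sigma> (P k))" by (simp add: mmul_assoc)
    then show ?thesis using P_idem[OF k] P_orthogonal[of k "j+1"] by (auto simp: block_def)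
  qed
  have t4: "mm (P k) (mm (mm \<sigma> (P (j + 1))) (P k)) = (if k = j + 1 then block \<sigma> k else 0)"
  proof -
    have "mm (P k) (mm (mm \<sigma> (P (j + 1))) (P k)) = mm (mm (P k) \<sigma>) (mm (P (j + 1)) (P k))" by (simp add: mmul_assoc)
    then show ?thesis using P_idem[OF k] P_orthogonal[of "j+1" k] by (auto simp: block_def mmul_assoc)
  qed
  have t5: "mm (P k) (mm (mm (mm (Z j) \<sigma>) (adj (Z j))) (P k)) = (if k = j + 1 then mm (Z j) (mm (block \<sigma> j) (adj (Z j))) else 0)"
    by (rule block_Z_sandwich[OF j1])
  have t6: "mm (P k) (mm (mm (mm (adj (Z j)) \<sigma>) (Z j)) (P k)) = (if j = k then mm (adj (Z k)) (mm (block \<sigma> (k + 1)) (Z k)) else 0)"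
    by (rule block_adj_Z_sandwich[OF j1])
  show ?thesis unfolding Llink_def
    by (simp only: mmul_add_left mmul_add_right mmul_scale_left mmul_scale_right t1 t2 t3 t4 t5 t6)
       (auto simp: opscale_add opscale_scalar_add)
qed

lemma block_Lgen_eq:
  assumes C: "boundary_free \<sigma>" and L: "Lgen N n \<Gamma> \<gamma> \<sigma> = 0" and k: "k \<in> {1..N-1}"
  shows "opscale (kappaZ k) (mm (absZ k) (block \<sigma> k)) + opscale (cnj (kappaZ k)) (mm (block \<sigma> k) (absZ k))
        + opscale (complex_of_real (\<Gamma> Pos (W k))) (mm (adj (Z k)) (mm (block \<sigma> (k + 1)) (Z k)))
     + (if 2 \<le> k then opscale (kappaP (k - 1) + cnj (kappaP (k - 1))) (block \<sigma> k)
        + opscale (complex_of_real (\<Gamma> Neg (W (k - 1)))) (mm (Z (k - 1)) (mm (block \<sigma> (k - 1)) (adj (Z (k - 1))))) else 0) = 0"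
proof -
  let ?K = "{1..N-1}"
  have k1: "1 \<le> k" "k \<le> N" using k by auto
  define A where "A = opscale (kappaZ k) (mm (absZ k) (block \<sigma> k)) + opscale (cnj (kappaZ k)) (mm (block \<sigma> k) (absZ k))
        + opscale (complex_of_real (\<Gamma> Pos (W k))) (mm (adj (Z k)) (mm (block \<sigma> (k + 1)) (Z k)))"
  define Cf where "Cf = (\<lambda>j. opscale (kappaP j + cnj (kappaP j)) (block \<sigma> k)
        + opscale (complex_of_real (\<Gamma> Neg (W j))) (mm (Z j) (mm (block \<sigma> j) (adj (Z j)))))"
  have "0 = mm (P k) (mm (Lgen N n \<Gamma> \<gamma> \<sigma>) (P k))" using L by simp
  also have "\<dots> = (\<Sum>j\<in>?K. mm (P k) (mm (Llink j \<sigma>) (P k)))"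
    using C unfolding boundary_free_def by (simp add: Lgen_eq_sum_Llink mmul_sum_left mmul_sum_right)
  also have "\<dots> = (\<Sum>j\<in>?K. (if j = k then A else 0) + (if j = k - 1 then Cf j else 0))"
  proof (intro sum.cong refl)
    fix j assume j: "j \<in> ?K"
    have "(k = j + 1) = (j = k - 1)" using k1 by auto
    then show "mm (P k) (mm (Llink j \<sigma>) (P k)) = (if j = k then A else 0) + (if j = k - 1 then Cf j else 0)"
      unfolding block_Llink[OF j k1] A_def Cf_def by simp
  qed
  also have "\<dots> = A + (if k - 1 \<in> ?K then Cf (k - 1) else 0)"
    using k by (simp add: sum.distrib sum.delta' del: One_nat_def)
  also have "(k - 1 \<in> ?K) = (2 \<le> k)" using k by auto
  finally have "A + (if 2 \<le> k then Cf (k - 1) else 0) = 0" by (rule sym)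
  then show ?thesis unfolding A_def Cf_def .
qed

fun Zpath :: "nat \<Rightarrow> cop" where
  "Zpath 0 = P 1"
| "Zpath (Suc m) = mm (Z (Suc m)) (Zpath m)"

fun weight :: "nat \<Rightarrow> real" where
  "weight 0 = 1"
| "weight (Suc m) = weight m * \<Gamma> Neg (W (Suc m)) / \<Gamma> Pos (W (Suc m))"

lemma hops_Zpath: "m < N \<Longrightarrow> Zpath m \<in> hops B"
proof (induction m)
  case 0 then show ?case using N_ge_2 by (simp add: hops_P)
next
  case (Suc m) then show ?case by (simp add: hops_mmul hops_Z)
qed

lemma rows_in_Zpath: "rows_in (E (m + 1)) (Zpath m)"
proof (induction m)
  case 0 then show ?case by (simp add: rows_in_Pk)
next
  case (Suc m) then show ?case using rows_in_Zk[of n "Suc m"] by (simp add: rows_in_mmul)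
qed

lemma Zpath_mmul_adj: "m < N \<Longrightarrow> mm (Zpath m) (adj (Zpath m)) = P (m + 1)"
proof (induction m)
  case 0 then show ?case using P_idem[of 1] N_ge_2 by (simp add: adj_Pk)
next
  case (Suc m)
  have m1: "1 \<le> Suc m" "Suc m < N" using Suc by auto
  have "mm (Zpath (Suc m)) (adj (Zpath (Suc m))) = mm (Z (Suc m)) (mm (mm (Zpath m) (adj (Zpath m))) (adj (Z (Suc m))))"
    by (simp add: adj_mmul mmul_assoc)
  also have "\<dots> = mm (mm (Z (Suc m)) (P (Suc m))) (adj (Z (Suc m)))" using Suc by (simp add: mmul_assoc)
  also have "\<dots> = P (Suc m + 1)" using Z_mmul_P_self[OF m1] Z_mmul_adj_Z[OF m1] by simp
  finally show ?case by simp
qed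

lemma Zpath_step: "1 \<le> k \<Longrightarrow> Zpath k = mm (Z k) (Zpath (k - 1))"
  by (cases k) auto

lemma weight_pos: "m < N \<Longrightarrow> weight m > 0"
proof (induction m)
  case 0 then show ?case by simp
next
  case (Suc m)
  have "W (Suc m) \<in> freqs N" using Suc by (intro W_in_freqs) auto
  then show ?case using Suc Gamma_pos_freq by simp
qed

lemma weight_step: "1 \<le> k \<Longrightarrow> weight k = weight (k - 1) * \<Gamma> Neg (W k) / \<Gamma> Pos (W k)"
  by (cases k) auto

definition transport :: "cop \<Rightarrow> nat \<Rightarrow> cop" where
  "transport X m = mm (Zpath m) (mm X (adj (Zpath m)))"

lemma transport_step: "1 \<le> k \<Longrightarrow> mm (Z k) (mm (transport X (k - 1)) (adj (Z k))) = transport X k"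
  unfolding transport_def by (simp add: Zpath_step adj_mmul mmul_assoc)

lemma adj_block: "adj \<sigma> = \<sigma> \<Longrightarrow> adj (block \<sigma> k) = block \<sigma> k"
  unfolding block_def by (simp add: adj_mmul adj_Pk mmul_assoc)

lemma P_mmul_block: "1 \<le> k \<Longrightarrow> k \<le> N \<Longrightarrow> mm (P k) (block \<sigma> k) = block \<sigma> k"
  unfolding block_def using P_idem by (simp flip: mmul_assoc)

lemma block_mmul_P: "1 \<le> k \<Longrightarrow> k \<le> N \<Longrightarrow> mm (block \<sigma> k) (P k) = block \<sigma> k"
  unfolding block_def using P_idem by (simp add: mmul_assoc)

lemma cnj_kappaZ_nonzero: "k \<in> {1..N-1} \<Longrightarrow> cnj (kappaZ k) \<noteq> 0"
proof
  assume "k \<in> {1..N-1}" "cnj (kappaZ k) = 0"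
  then have "Re (kappaZ k) = 0" by (metis complex_cnj_zero_iff zero_complex.sel(1))
  moreover have "\<Gamma> Neg (W k) > 0" using Gamma_pos_freq[OF W_in_freqs] \<open>k \<in> {1..N-1}\<close> by auto
  ultimately show False by (simp add: Re_kappaZ)
qed

lemma kappaZ_add_cnj: "kappaZ k + cnj (kappaZ k) = - complex_of_real (\<Gamma> Neg (W k))"
  unfolding kappaZ_def by (simp add: complex_eq_iff)

lemma kappaP_add_cnj: "kappaP k + cnj (kappaP k) = - complex_of_real (\<Gamma> Pos (W k))"
  unfolding kappaP_def by (simp add: complex_eq_iff)

lemma block_link_equation:
  assumes C: "boundary_free \<sigma>" and L: "Lgen N n \<Gamma> \<gamma> \<sigma> = 0" and k: "k \<in> {1..N-1}"
    and prev: "2 \<le> k \<Longrightarrow> opscale (complex_of_real (\<Gamma> Pos (W (k - 1)))) (block \<sigma> k)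
      = opscale (complex_of_real (\<Gamma> Neg (W (k - 1)))) (mm (Z (k - 1)) (mm (block \<sigma> (k - 1)) (adj (Z (k - 1)))))"
  shows "opscale (kappaZ k) (mm (absZ k) (block \<sigma> k)) + opscale (cnj (kappaZ k)) (mm (block \<sigma> k) (absZ k))
        + opscale (complex_of_real (\<Gamma> Pos (W k))) (mm (adj (Z k)) (mm (block \<sigma> (k + 1)) (Z k))) = 0"
proof -
  have "(if 2 \<le> k then opscale (kappaP (k - 1) + cnj (kappaP (k - 1))) (block \<sigma> k)
        + opscale (complex_of_real (\<Gamma> Neg (W (k - 1)))) (mm (Z (k - 1)) (mm (block \<sigma> (k - 1)) (adj (Z (k - 1)))))
        else 0) = 0"
  proof (cases "2 \<le> k")
    case True
    then show ?thesis using fun_cong[OF fun_cong[OF prev[OF True]]] by (intro ext) (simp add: kappaP_add_cnj)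
  qed simp
  then show ?thesis using block_Lgen_eq[OF C L k] by simp
qed

(* P_k - |Z|_k annihilates |Z|_k and Z_k^*, so multiplying the equation by it on the left and by
   |Z|_k on the right leaves only the term with X |Z|_k. *)

lemma absZ_commute_of_link_equation:
  assumes k: "k \<in> {1..N-1}" and X: "adj X = X" "mm (P k) X = X" and a: "cnj a \<noteq> 0"
    and eq: "opscale a (mm (absZ k) X) + opscale (cnj a) (mm X (absZ k)) + opscale c (mm (adj (Z k)) (mm Y (Z k))) = 0"
  shows "mm (absZ k) X = mm X (absZ k)"
proof -
  have k1: "1 \<le> k" "k < N" using k by auto
  let ?D = "P k - absZ k"
  have D1: "mm ?D (absZ k) = 0" by (simp add: mmul_diff_left P_mmul_absZ[OF k1] absZ_idem[OF k1])
  have D2: "mm ?D (adj (Z k)) = 0" by (simp add: mmul_diff_left P_mmul_adj_Z[OF k1] absZ_mmul_adj_Z[OF k1])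
  have "mm ?D (mm (mm (absZ k) X) (absZ k)) = 0" using D1 by (metis mmul_assoc mmul_zero_left)
  moreover have "mm ?D (mm (mm X (absZ k)) (absZ k)) = mm ?D (mm X (absZ k))" by (simp add: mmul_assoc absZ_idem[OF k1])
  moreover have "mm ?D (mm (mm (adj (Z k)) (mm Y (Z k))) (absZ k)) = 0" using D2 by (metis mmul_assoc mmul_zero_left)
  ultimately have "opscale (cnj a) (mm ?D (mm X (absZ k))) = 0"
    using arg_cong[OF eq, of "\<lambda>W. mm ?D (mm W (absZ k))"]
    by (simp add: mmul_add_left mmul_add_right mmul_scale_left mmul_scale_right)
  then have "mm (P k) (mm X (absZ k)) = mm (absZ k) (mm X (absZ k))"
    using a by (simp add: opscale_eq_zero_iff mmul_diff_left)
  then have XR: "mm X (absZ k) = mm (absZ k) (mm X (absZ k))" using X(2) by (metis mmul_assoc)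
  have "mm (absZ k) X = adj (mm X (absZ k))" using X(1) adj_absZ by (simp add: adj_mmul)
  also have "\<dots> = adj (mm (absZ k) (mm X (absZ k)))" using XR by simp
  also have "\<dots> = mm (absZ k) (mm X (absZ k))" using X(1) adj_absZ by (simp add: adj_mmul mmul_assoc)
  finally show ?thesis using XR by simp
qed

lemma link_balance_of_link_equation:
  assumes k: "k \<in> {1..N-1}" and Y: "mm (P (k + 1)) Y = Y" "mm Y (P (k + 1)) = Y"
    and eq: "opscale (kappaZ k) (mm (absZ k) X) + opscale (cnj (kappaZ k)) (mm X (absZ k))
        + opscale (complex_of_real (\<Gamma> Pos (W k))) (mm (adj (Z k)) (mm Y (Z k))) = 0"
    and comm: "mm (absZ k) X = mm X (absZ k)"
  shows "opscale (complex_of_real (\<Gamma> Pos (W k))) Y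
    = opscale (complex_of_real (\<Gamma> Neg (W k))) (mm (Z k) (mm X (adj (Z k))))"
proof -
  have k1: "1 \<le> k" "k < N" using k by auto
  have "opscale (- complex_of_real (\<Gamma> Neg (W k))) (mm (absZ k) X)
        + opscale (complex_of_real (\<Gamma> Pos (W k))) (mm (adj (Z k)) (mm Y (Z k))) = 0"
    using eq comm by (simp add: kappaZ_add_cnj[symmetric] opscale_scalar_add)
  from arg_cong[OF this, of "\<lambda>W. mm (Z k) (mm W (adj (Z k)))"]
  have "opscale (- complex_of_real (\<Gamma> Neg (W k))) (mm (mm (Z k) (absZ k)) (mm X (adj (Z k))))
        + opscale (complex_of_real (\<Gamma> Pos (W k))) (mm (mm (Z k) (adj (Z k))) (mm Y (mm (Z k) (adj (Z k))))) = 0"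
    by (simp add: mmul_add_left mmul_add_right mmul_scale_left mmul_scale_right mmul_assoc)
  then have "opscale (- complex_of_real (\<Gamma> Neg (W k))) (mm (Z k) (mm X (adj (Z k))))
        + opscale (complex_of_real (\<Gamma> Pos (W k))) Y = 0"
    unfolding Z_mmul_absZ[OF k1] Z_mmul_adj_Z[OF k1] Y(2) Y(1) .
  then show ?thesis by (intro ext) (simp add: fun_eq_iff algebra_simps eq_neg_iff_add_eq_0)
qed

lemma block_link_balance:
  assumes C: "boundary_free \<sigma>" and L: "Lgen N n \<Gamma> \<gamma> \<sigma> = 0"
  shows "k \<in> {1..N-1} \<Longrightarrow> opscale (complex_of_real (\<Gamma> Pos (W k))) (block \<sigma> (k + 1))
    = opscale (complex_of_real (\<Gamma> Neg (W k))) (mm (Z k) (mm (block \<sigma> k) (adj (Z k))))"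
proof (induction k)
  case (Suc k)
  have herm: "adj \<sigma> = \<sigma>" using C unfolding boundary_free_def by simp
  have k: "Suc k \<le> N" using Suc.prems by auto
  have prev: "2 \<le> Suc k \<Longrightarrow> opscale (complex_of_real (\<Gamma> Pos (W (Suc k - 1)))) (block \<sigma> (Suc k))
      = opscale (complex_of_real (\<Gamma> Neg (W (Suc k - 1))))
          (mm (Z (Suc k - 1)) (mm (block \<sigma> (Suc k - 1)) (adj (Z (Suc k - 1)))))"
    using Suc.IH Suc.prems by (simp del: opscale_apply)
  note eq = block_link_equation[OF C L Suc.prems prev]
  have "mm (absZ (Suc k)) (block \<sigma> (Suc k)) = mm (block \<sigma> (Suc k)) (absZ (Suc k))"
    using absZ_commute_of_link_equation[OF Suc.prems adj_block[OF herm] P_mmul_block _ eq]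
      cnj_kappaZ_nonzero[OF Suc.prems] k by simp
  moreover have "mm (P (Suc k + 1)) (block \<sigma> (Suc k + 1)) = block \<sigma> (Suc k + 1)"
    "mm (block \<sigma> (Suc k + 1)) (P (Suc k + 1)) = block \<sigma> (Suc k + 1)"
    using P_mmul_block[of "Suc k + 1"] block_mmul_P[of "Suc k + 1"] Suc.prems by auto
  ultimately show ?case using link_balance_of_link_equation[OF Suc.prems _ _ eq] by simp
qed simp

lemma block_eq_transport:
  assumes C: "boundary_free \<sigma>" and L: "Lgen N n \<Gamma> \<gamma> \<sigma> = 0"
  shows "m < N \<Longrightarrow> block \<sigma> (m + 1) = opscale (complex_of_real (weight m)) (transport (block \<sigma> 1) m)"
proof (induction m)
  case 0
  have "transport (block \<sigma> 1) 0 = block \<sigma> 1"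
    unfolding transport_def using P_mmul_block[of 1] block_mmul_P[of 1] N_ge_2 by (simp add: adj_Pk mmul_assoc)
  then show ?case by simp
next
  case (Suc m)
  have k: "Suc m \<in> {1..N-1}" using Suc.prems by auto
  have G: "\<Gamma> Pos (W (Suc m)) > 0" using Gamma_pos_freq[OF W_in_freqs] k by auto
  have "opscale (complex_of_real (\<Gamma> Pos (W (Suc m)))) (block \<sigma> (Suc m + 1))
    = opscale (complex_of_real (\<Gamma> Neg (W (Suc m)) * weight m)) (transport (block \<sigma> 1) (Suc m))"
    using block_link_balance[OF C L k] Suc transport_step[of "Suc m" "block \<sigma> 1"]
    by (simp add: mmul_scale_left mmul_scale_right del: opscale_apply)
  then show ?case using G by (simp add: fun_eq_iff field_simps)
qed

lemma absZ_block_commute: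
  assumes C: "boundary_free \<sigma>" and L: "Lgen N n \<Gamma> \<gamma> \<sigma> = 0" and k: "k \<in> {1..N-1}"
  shows "mm (absZ k) (block \<sigma> k) = mm (block \<sigma> k) (absZ k)"
proof -
  have herm: "adj \<sigma> = \<sigma>" using C unfolding boundary_free_def by simp
  have "2 \<le> k \<Longrightarrow> k - 1 \<in> {1..N-1}" "k - 1 + 1 = k" using k by auto
  then have prev: "2 \<le> k \<Longrightarrow> opscale (complex_of_real (\<Gamma> Pos (W (k - 1)))) (block \<sigma> k)
      = opscale (complex_of_real (\<Gamma> Neg (W (k - 1)))) (mm (Z (k - 1)) (mm (block \<sigma> (k - 1)) (adj (Z (k - 1)))))"
    using block_link_balance[OF C L, of "k - 1"] by simp
  show ?thesis
    using absZ_commute_of_link_equation[OF k adj_block[OF herm] P_mmul_block _ block_link_equation[OF C L k prev]]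
      cnj_kappaZ_nonzero[OF k] k by auto
qed

lemma sum_P_mmul:
  assumes X: "X \<in> hops B" and r: "\<And>j. X Pl j = 0" "\<And>j. X Mn j = 0"
  shows "(\<Sum>k\<in>{1..N}. mm (P k) X) = X"
proof (intro ext)
  fix i j
  have "(\<Sum>k\<in>{1..N}. mm (P k) X) i j = (\<Sum>k\<in>{1..N}. if i \<in> E k then X i j else 0)"
    by (simp add: sum_cop_apply Pk_mmul_apply[OF level_subset_basis finite_basis])
  also have "\<dots> = X i j"
  proof (cases i)
    case (St k0 a)
    have "(\<Sum>k\<in>{1..N}. if i \<in> E k then X i j else 0) = (\<Sum>k\<in>{1..N}. if k = k0 then (if a < n k0 then X i j else 0) else 0)"
      by (intro sum.cong refl) (auto simp: St level_def)
    also have "\<dots> = (if k0 \<in> {1..N} then (if a < n k0 then X i j else 0) else 0)"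
      by (simp add: sum.delta)
    also have "\<dots> = X i j"
      using X St St_in_basis by (auto simp: hops_def)
    finally show ?thesis .
  qed (auto simp: level_def r)
  finally show "(\<Sum>k\<in>{1..N}. mm (P k) X) i j = X i j" .
qed

lemma sum_mmul_P:
  assumes X: "X \<in> hops B" and r: "\<And>j. X j Pl = 0" "\<And>j. X j Mn = 0"
  shows "(\<Sum>k\<in>{1..N}. mm X (P k)) = X"
proof -
  have "(\<Sum>k\<in>{1..N}. mm X (P k)) = adj (\<Sum>k\<in>{1..N}. mm (P k) (adj X))"
    by (simp add: adj_sum adj_mmul adj_Pk)
  also have "(\<Sum>k\<in>{1..N}. mm (P k) (adj X)) = adj X"
    using r by (intro sum_P_mmul hops_adj X) (simp_all add: adj_def)
  finally show ?thesis by simp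
qed

lemma boundary_free_entries:
  assumes "boundary_free \<sigma>"
  shows "\<sigma> j Pl = 0" "\<sigma> j Mn = 0" "\<sigma> Pl j = 0" "\<sigma> Mn j = 0"
proof -
  have h: "adj \<sigma> = \<sigma>" "app B \<sigma> (ket Pl) = 0" "app B \<sigma> (ket Mn) = 0" using assms unfolding boundary_free_def by auto
  show c1: "\<sigma> j Pl = 0" using fun_cong[OF h(2), of j] by (simp add: app_ket[OF finite_basis])
  show c2: "\<sigma> j Mn = 0" using fun_cong[OF h(3), of j] by (simp add: app_ket[OF finite_basis])
  show "\<sigma> Pl j = 0" using c1 fun_cong[OF fun_cong[OF h(1), of Pl], of j] by (simp add: adj_def)
  show "\<sigma> Mn j = 0" using c2 fun_cong[OF fun_cong[OF h(1), of Mn], of j] by (simp add: adj_def)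
qed

lemma eq_sum_blocks:
  assumes C: "boundary_free \<sigma>" and L: "Lgen N n \<Gamma> \<gamma> \<sigma> = 0"
  shows "\<sigma> = (\<Sum>k\<in>{1..N}. block \<sigma> k)"
proof -
  have h: "\<sigma> \<in> hops B" using C unfolding boundary_free_def by simp
  have "\<sigma> = (\<Sum>k\<in>{1..N}. mm (P k) \<sigma>)"
    using sum_P_mmul[OF h] boundary_free_entries[OF C] by simp
  also have "\<dots> = (\<Sum>k\<in>{1..N}. block \<sigma> k)"
  proof (intro sum.cong refl)
    fix k assume k: "k \<in> {1..N}"
    have hk: "mm (P k) \<sigma> \<in> hops B" using k h by (intro hops_mmul hops_P) auto
    have c: "mm (P k) \<sigma> j Pl = 0" "mm (P k) \<sigma> j Mn = 0" for j
      unfolding mmul_def using boundary_free_entries[OF C] by auto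
    have "mm (P k) \<sigma> = (\<Sum>l\<in>{1..N}. mm (mm (P k) \<sigma>) (P l))"
      using sum_mmul_P[OF hk] c by simp
    also have "\<dots> = (\<Sum>l\<in>{1..N}. if l = k then block \<sigma> k else 0)"
    proof (intro sum.cong refl)
      fix l assume l: "l \<in> {1..N}"
      show "mm (mm (P k) \<sigma>) (P l) = (if l = k then block \<sigma> k else 0)"
      proof (cases "l = k")
        case True then show ?thesis by (simp add: block_def mmul_assoc)
      next
        case False
        have "mm (P k) (mm \<sigma> (P l)) = 0" using k l False by (intro offdiag_block_eq_zero[OF C L]) auto
        then show ?thesis using False by (simp add: mmul_assoc)
      qed
    qed
    also have "\<dots> = block \<sigma> k" using k by (simp add: sum.delta)
    finally show "mm (P k) \<sigma> = block \<sigma> k" .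
  qed
  finally show ?thesis .
qed

definition lift :: "cop \<Rightarrow> cop" where
  "lift X = (\<Sum>m<N. opscale (complex_of_real (weight m)) (transport X m))"

lemma eq_lift_block:
  assumes C: "boundary_free \<sigma>" and L: "Lgen N n \<Gamma> \<gamma> \<sigma> = 0"
  shows "\<sigma> = lift (block \<sigma> 1)"
proof -
  have "\<sigma> = (\<Sum>k\<in>{1..N}. block \<sigma> k)" by (rule eq_sum_blocks[OF C L])
  also have "{1..N} = Suc ` {..<N}" by (simp add: image_Suc_lessThan)
  also have "(\<Sum>k\<in>Suc ` {..<N}. block \<sigma> k) = (\<Sum>m<N. block \<sigma> (Suc m))"
    by (rule sum.reindex_cong[where l=Suc]) auto
  also have "\<dots> = lift (block \<sigma> 1)" unfolding lift_def
  proof (intro sum.cong refl)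
    fix m assume "m \<in> {..<N}"
    then have "m < N" by simp
    from block_eq_transport[OF C L this] show "block \<sigma> (Suc m) = opscale (complex_of_real (weight m)) (transport (block \<sigma> 1) m)"
      by (simp only: Suc_eq_plus1)
  qed
  finally show ?thesis .
qed

lemma rows_in_transport: "rows_in (E (m + 1)) (transport X m)"
  unfolding transport_def by (intro rows_in_mmul rows_in_Zpath)

lemma cols_in_transport: "cols_in (E (m + 1)) (transport X m)"
  unfolding transport_def by (intro cols_in_mmul) (unfold cols_in_adj, rule rows_in_Zpath)

lemma adj_transport: "adj (transport X m) = transport (adj X) m"
  unfolding transport_def by (simp add: adj_mmul mmul_assoc)

lemma adj_lift: "adj (lift X) = lift (adj X)"
  unfolding lift_def by (simp add: adj_sum adj_scale adj_transport)

lemma mmul_lift: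
  assumes A: "cols_in (E j) A" and j: "1 \<le> j" "j \<le> N"
  shows "mm A (lift X) = opscale (complex_of_real (weight (j - 1))) (mm A (transport X (j - 1)))"
proof -
  have "mm A (transport X m) = 0" if "m \<noteq> j - 1" for m
    using that j by (intro mmul_disjoint_support[OF A rows_in_transport] level_disjoint) auto
  then have "(\<Sum>m<N. opscale (complex_of_real (weight m)) (mm A (transport X m)))
      = (\<Sum>m\<in>{j - 1}. opscale (complex_of_real (weight m)) (mm A (transport X m)))"
    using j by (intro sum.mono_neutral_right) auto
  then show ?thesis unfolding lift_def by (simp add: mmul_sum_right mmul_scale_right)
qed

lemma lift_mmul:
  assumes A: "rows_in (E j) A" and j: "1 \<le> j" "j \<le> N"
  shows "mm (lift X) A = opscale (complex_of_real (weight (j - 1))) (mm (transport X (j - 1)) A)"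
proof -
  have "mm (lift X) A = adj (mm (adj A) (lift (adj X)))" by (simp add: adj_mmul adj_lift)
  also have "\<dots> = adj (opscale (complex_of_real (weight (j - 1))) (mm (adj A) (transport (adj X) (j - 1))))"
    using mmul_lift[of j "adj A" "adj X"] A j by (simp add: cols_in_adj)
  finally show ?thesis by (simp add: adj_scale adj_mmul adj_transport)
qed

(* The projection, inside E_1, onto the initial space of the partial isometry Z_m ... Z_1 P_1. *)

definition Qproj :: "nat \<Rightarrow> cop" where
  "Qproj m = mm (adj (Zpath m)) (Zpath m)"

lemma Qproj_step: "1 \<le> k \<Longrightarrow> Qproj k = mm (adj (Zpath (k - 1))) (mm (absZ k) (Zpath (k - 1)))"
  unfolding Qproj_def Zabs_def by (simp add: Zpath_step adj_mmul mmul_assoc)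

lemma hops_Qproj: "m < N \<Longrightarrow> Qproj m \<in> hops B"
  unfolding Qproj_def by (intro hops_mmul hops_adj hops_Zpath)

lemma adj_Qproj: "adj (Qproj m) = Qproj m"
  unfolding Qproj_def by (simp add: adj_mmul)

lemma Qproj_0: "Qproj 0 = P 1"
  unfolding Qproj_def using P_idem[of 1] N_ge_2 by (simp add: adj_Pk)

lemma Zpath_mmul_Qproj: "m \<le> m' \<Longrightarrow> m' < N \<Longrightarrow> mm (Zpath m') (Qproj m) = Zpath m'"
proof (induction m' rule: dec_induct)
  case base
  have "mm (Zpath m) (Qproj m) = mm (mm (Zpath m) (adj (Zpath m))) (Zpath m)" unfolding Qproj_def by (simp add: mmul_assoc)
  also have "\<dots> = mm (P (m + 1)) (Zpath m)" using Zpath_mmul_adj base by simp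
  also have "\<dots> = Zpath m" using level_subset_basis[of "m+1"] base by (intro Pk_mmul_rows_in finite_basis rows_in_Zpath) auto
  finally show ?case .
next
  case (step m')
  then show ?case by (simp add: mmul_assoc)
qed

lemma Qproj_nested: assumes "m \<le> m'" "m' < N"
  shows "mm (Qproj m') (Qproj m) = Qproj m'" "mm (Qproj m) (Qproj m') = Qproj m'"
proof -
  have "mm (Qproj m') (Qproj m) = mm (adj (Zpath m')) (mm (Zpath m') (Qproj m))" unfolding Qproj_def[of m'] by (simp add: mmul_assoc)
  also have "\<dots> = mm (adj (Zpath m')) (Zpath m')" using Zpath_mmul_Qproj[OF assms] by simp
  also have "\<dots> = Qproj m'" unfolding Qproj_def ..
  finally show a: "mm (Qproj m') (Qproj m) = Qproj m'" .
  show "mm (Qproj m) (Qproj m') = Qproj m'" by (metis a adj_Qproj adj_mmul)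
qed

lemma Qproj_commute: "m < N \<Longrightarrow> m' < N \<Longrightarrow> mm (Qproj m) (Qproj m') = mm (Qproj m') (Qproj m)"
  by (cases "m \<le> m'") (auto simp: Qproj_nested)

lemma Qproj_idem: "m < N \<Longrightarrow> mm (Qproj m) (Qproj m) = Qproj m"
  using Qproj_nested[of m m] by simp

lemma P1_mmul_Qproj: "m < N \<Longrightarrow> mm (P 1) (Qproj m) = Qproj m"
  using Qproj_nested(2)[of 0 m] Qproj_0 by simp

lemma absZ_transport_commute:
  assumes k: "1 \<le> k" "k < N" and c: "mm (Qproj k) X = mm X (Qproj k)"
  shows "mm (absZ k) (transport X (k - 1)) = mm (transport X (k - 1)) (absZ k)"
proof -
  let ?z = "Zpath (k - 1)"
  have co: "mm ?z (adj ?z) = P k" using Zpath_mmul_adj[of "k - 1"] k by simp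
  have PR: "mm (P k) (absZ k) = absZ k" "mm (absZ k) (P k) = absZ k" using P_mmul_absZ[OF k] absZ_mmul_P[OF k] by auto
  have "mm (absZ k) (transport X (k - 1)) = mm (mm (P k) (absZ k)) (transport X (k - 1))" using PR by simp
  also have "\<dots> = mm ?z (mm (mm (Qproj k) X) (adj ?z))"
    unfolding co[symmetric] Qproj_step[OF k(1)] transport_def by (simp add: mmul_assoc)
  also have "\<dots> = mm ?z (mm (mm X (Qproj k)) (adj ?z))" using c by simp
  also have "\<dots> = mm (transport X (k - 1)) (mm (absZ k) (P k))"
    unfolding co[symmetric] Qproj_step[OF k(1)] transport_def by (simp add: mmul_assoc)
  also have "\<dots> = mm (transport X (k - 1)) (absZ k)" using PR by simp
  finally show ?thesis .
qed

lemma Z_lift_adj_Z: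
  assumes k: "1 \<le> k" "k < N"
  shows "mm (mm (Z k) (lift X)) (adj (Z k)) = opscale (complex_of_real (weight (k - 1))) (transport X k)"
proof -
  have "mm (mm (Z k) (lift X)) (adj (Z k)) = opscale (complex_of_real (weight (k - 1))) (mm (mm (Z k) (transport X (k - 1))) (adj (Z k)))"
    using mmul_lift[OF cols_in_Zk] k by (simp add: mmul_scale_left)
  then show ?thesis using transport_step[OF k(1)] by (simp add: mmul_assoc)
qed

lemma adj_Z_lift_Z:
  assumes k: "1 \<le> k" "k < N" and cm: "mm (absZ k) (transport X (k - 1)) = mm (transport X (k - 1)) (absZ k)"
  shows "mm (mm (adj (Z k)) (lift X)) (Z k) = opscale (complex_of_real (weight k)) (mm (absZ k) (transport X (k - 1)))"
proof -
  have "mm (mm (adj (Z k)) (lift X)) (Z k) = opscale (complex_of_real (weight k)) (mm (mm (adj (Z k)) (transport X k)) (Z k))"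
    using mmul_lift[OF cols_in_adj_Z[of k]] k by (simp add: mmul_scale_left)
  also have "mm (mm (adj (Z k)) (transport X k)) (Z k) = mm (absZ k) (mm (transport X (k - 1)) (absZ k))"
    unfolding transport_step[OF k(1), symmetric] Zabs_def by (simp add: mmul_assoc)
  also have "\<dots> = mm (absZ k) (transport X (k - 1))" unfolding cm[symmetric] by (simp flip: mmul_assoc add: absZ_idem[OF k])
  finally show ?thesis .
qed

lemma Llink_lift_eq_zero:
  assumes k: "k \<in> {1..N-1}" and c: "mm (Qproj k) X = mm X (Qproj k)"
  shows "Llink k (lift X) = 0"
proof -
  have k1: "1 \<le> k" "k < N" "k \<le> N" "1 \<le> k + 1" "k + 1 \<le> N" using k by auto
  have GpN: "\<Gamma> Neg (W k) > 0" "\<Gamma> Pos (W k) > 0" using Gamma_pos_freq[OF W_in_freqs] k by auto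
  let ?M = "transport X (k - 1)" and ?M' = "transport X k"
  let ?c = "complex_of_real (weight (k - 1))" and ?c' = "complex_of_real (weight k)"
  have cm: "mm (absZ k) ?M = mm ?M (absZ k)" by (rule absZ_transport_commute[OF k1(1,2) c])
  have e1: "mm (absZ k) (lift X) = opscale ?c (mm (absZ k) ?M)" using mmul_lift[OF cols_in_absZ k1(1,3)] .
  have e2: "mm (lift X) (absZ k) = opscale ?c (mm (absZ k) ?M)" using lift_mmul[OF rows_in_absZ k1(1,3)] cm by simp
  have "mm (P (k + 1)) ?M' = ?M'"
    by (intro Pk_mmul_rows_in level_subset_basis[OF k1(4,5)] finite_basis rows_in_transport)
  moreover have "mm ?M' (P (k + 1)) = ?M'"
    by (intro mmul_Pk_cols_in level_subset_basis[OF k1(4,5)] finite_basis cols_in_transport)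
  ultimately have e34: "mm (P (k + 1)) (lift X) = opscale ?c' ?M'" "mm (lift X) (P (k + 1)) = opscale ?c' ?M'"
    using mmul_lift[OF cols_in_Pk k1(4,5)] lift_mmul[OF rows_in_Pk k1(4,5)] by simp_all
  show ?thesis
  proof (intro ext)
    fix i j
    show "Llink k (lift X) i j = 0 i j"
      unfolding Llink_def e1 e2 e34 mmul_assoc[symmetric] Z_lift_adj_Z[OF k1(1,2)] adj_Z_lift_Z[OF k1(1,2) cm]
      using GpN by (simp add: weight_step[OF k1(1)] kappaZ_def kappaP_def field_simps)
  qed
qed

lemma transport_0: "mm (P 1) X = X \<Longrightarrow> adj X = X \<Longrightarrow> transport X 0 = X"
proof -
  assume a: "mm (P 1) X = X" "adj X = X"
  have b: "mm X (P 1) = X" using a by (metis adj_Pk adj_mmul)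
  show ?thesis unfolding transport_def using a b by (simp add: adj_Pk)
qed

lemma hops_lift: "X \<in> hops B \<Longrightarrow> lift X \<in> hops B"
  unfolding lift_def transport_def by (intro hops_sum hops_scale hops_mmul hops_adj hops_Zpath) auto

lemma psd_lift: "psd B X \<Longrightarrow> psd B (lift X)"
  unfolding lift_def transport_def
proof (intro psd_sum psd_scale)
  fix m assume "psd B X" "m \<in> {..<N}"
  then show "psd B (mm (Zpath m) (mm X (adj (Zpath m))))"
    using psd_sandwich[of B X "Zpath m"] hops_Zpath[of m] by (simp add: mmul_assoc)
  show "0 \<le> weight m" using weight_pos \<open>m \<in> {..<N}\<close> by (simp add: less_imp_le)
qed

lemma lift_add: "lift (X + Y) = lift X + lift Y"
  unfolding lift_def transport_def by (simp add: mmul_add_left mmul_add_right opscale_add sum.distrib)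

lemma lift_opscale: "lift (opscale c X) = opscale c (lift X)"
  unfolding lift_def transport_def by (simp add: mmul_scale_left mmul_scale_right opscale_sum mult.commute)

lemma block_lift: "mm (P 1) X = X \<Longrightarrow> adj X = X \<Longrightarrow> block (lift X) 1 = X"
proof -
  assume a: "mm (P 1) X = X" "adj X = X"
  have b: "mm X (P 1) = X" using a by (metis adj_Pk adj_mmul)
  have "mm (P 1) (lift X) = opscale (complex_of_real (weight 0)) (mm (P 1) (transport X 0))"
    using mmul_lift[OF cols_in_Pk, of 1 X] N_ge_2 by simp
  then have "mm (P 1) (lift X) = X" using transport_0[OF a] a by simp
  then show ?thesis unfolding block_def using b by (simp flip: mmul_assoc)
qed

lemma lift_eq_zero_imp: "mm (P 1) X = X \<Longrightarrow> adj X = X \<Longrightarrow> lift X = 0 \<Longrightarrow> X = 0"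
  using block_lift by (metis block_def mmul_zero_left mmul_zero_right)

lemma app_P_eq_self: "1 \<le> k \<Longrightarrow> k \<le> N \<Longrightarrow> (\<And>i. v i \<noteq> 0 \<Longrightarrow> i \<in> E k) \<Longrightarrow> app B (P k) v = v"
proof (intro ext)
  fix i assume k: "1 \<le> k" "k \<le> N" and v: "\<And>i. v i \<noteq> 0 \<Longrightarrow> i \<in> E k"
  have "app B (P k) v i = (\<Sum>l\<in>B. if l = i then (if i \<in> E k then v i else 0) else 0)"
    unfolding app_def by (intro sum.cong refl) (auto simp: Pk_apply)
  also have "\<dots> = (if i \<in> B then (if i \<in> E k then v i else 0) else 0)" using finite_basis by (simp add: sum.delta)
  also have "\<dots> = v i" using v level_subset_basis[OF k] by auto
  finally show "app B (P k) v i = v i" .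
qed

lemma app_P1_phi1: "app B (P 1) phi1 = phi1" using app_P_eq_self[of 1 phi1] N_ge_2 phi_nonzero_imp by auto

lemma app_PN_phiN: "app B (P N) phiN = phiN" using app_P_eq_self[of N phiN] N_ge_2 phi_nonzero_imp by auto

(* The first blocks of the invariant states that vanish on |+>, |->, phi_{0_1} and phi_{0_N}. *)

definition admissible :: "cop \<Rightarrow> bool" where
  "admissible X \<longleftrightarrow> X \<in> hops B \<and> adj X = X \<and> mm (P 1) X = X \<and> app B X phi1 = 0
     \<and> app B (transport X (N - 1)) phiN = 0 \<and> (\<forall>m\<in>{1..N-1}. mm (Qproj m) X = mm X (Qproj m))"

lemma boundary_free_lift:
  assumes V: "admissible X"
  shows "boundary_free (lift X)"
proof -
  have h: "X \<in> hops B" "adj X = X" "mm (P 1) X = X" "app B X phi1 = 0" "app B (transport X (N - 1)) phiN = 0"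
    using V unfolding admissible_def by auto
  have appL: "app B (lift X) v = (\<Sum>m<N. (\<lambda>i. complex_of_real (weight m) * app B (transport X m) v i))" for v
    unfolding lift_def by (simp add: app_sum app_opscale)
  have z1: "app B (transport X m) v = 0" if "\<And>i. i \<in> E (m + 1) \<Longrightarrow> v i = 0" for m v
    by (rule app_eq_zero_if_cols_in[OF cols_in_transport that])
  have "app B (transport X m) (ket Pl) = 0" for m by (rule z1) (auto simp: ket_def level_def)
  then have kPl: "app B (lift X) (ket Pl) = 0" unfolding appL by (intro sum.neutral ballI ext) simp
  have "app B (transport X m) (ket Mn) = 0" for m by (rule z1) (auto simp: ket_def level_def)
  then have kMn: "app B (lift X) (ket Mn) = 0" unfolding appL by (intro sum.neutral ballI ext) simp
  have kf1: "app B (lift X) phi1 = 0"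
  proof -
    have "app B (transport X m) phi1 = 0" for m
    proof (cases m)
      case 0 then show ?thesis using transport_0[OF h(3,2)] h(4) by simp
    next
      case (Suc m')
      then show ?thesis by (intro z1) (use phi_nonzero_imp level_def in fastforce)
    qed
    then show ?thesis unfolding appL by (intro sum.neutral ballI ext) simp
  qed
  have kfN: "app B (lift X) phiN = 0"
  proof -
    have "app B (transport X m) phiN = 0" if "m < N" for m
    proof (cases "m = N - 1")
      case True then show ?thesis using h(5) by simp
    next
      case False
      then have "m + 1 \<noteq> N" using that by auto
      then show ?thesis by (intro z1) (use phi_nonzero_imp level_def in fastforce)
    qed
    then show ?thesis unfolding appL by (intro sum.neutral ballI ext) simp
  qed
  show ?thesis unfolding boundary_free_def
    using hops_lift[OF h(1)] adj_lift h(2) kPl kMn kf1 kfN by simp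
qed

lemma Lgen_lift_eq_zero:
  assumes V: "admissible X"
  shows "Lgen N n \<Gamma> \<gamma> (lift X) = 0"
proof -
  have C: "boundary_free (lift X)" by (rule boundary_free_lift[OF V])
  have "Lgen N n \<Gamma> \<gamma> (lift X) = (\<Sum>k\<in>{1..N-1}. Llink k (lift X))"
    using C unfolding boundary_free_def by (intro Lgen_eq_sum_Llink) auto
  also have "\<dots> = 0"
    using V unfolding admissible_def by (intro sum.neutral ballI Llink_lift_eq_zero) auto
  finally show ?thesis .
qed

lemma Qproj_commute_if_absZ_transport_commute:
  assumes m: "Suc m < N" and prev: "mm (Qproj m) X = mm X (Qproj m)"
    and c: "mm (absZ (Suc m)) (transport X m) = mm (transport X m) (absZ (Suc m))"
  shows "mm (Qproj (Suc m)) X = mm X (Qproj (Suc m))"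
proof -
  let ?z = "Zpath m"
  have Q: "Qproj (Suc m) = mm (adj ?z) (mm (absZ (Suc m)) ?z)" using Qproj_step[of "Suc m"] by simp
  have "mm (mm (Qproj (Suc m)) X) (Qproj m) = mm (adj ?z) (mm (mm (absZ (Suc m)) (transport X m)) ?z)"
    unfolding Q Qproj_def[of m] transport_def by (simp add: mmul_assoc)
  also have "\<dots> = mm (adj ?z) (mm (mm (transport X m) (absZ (Suc m))) ?z)" using c by simp
  also have "\<dots> = mm (mm (Qproj m) X) (Qproj (Suc m))"
    unfolding Q Qproj_def[of m] transport_def by (simp add: mmul_assoc)
  moreover have "mm (Qproj (Suc m)) (Qproj m) = Qproj (Suc m)" "mm (Qproj m) (Qproj (Suc m)) = Qproj (Suc m)"
    using Qproj_nested[of m "Suc m"] m by auto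
  ultimately show ?thesis using prev by (metis mmul_assoc)
qed

lemma admissible_block:
  assumes C: "boundary_free \<sigma>" and L: "Lgen N n \<Gamma> \<gamma> \<sigma> = 0"
  shows "admissible (block \<sigma> 1)"
proof -
  let ?X = "block \<sigma> 1"
  have h: "\<sigma> \<in> hops B" "adj \<sigma> = \<sigma>" "app B \<sigma> phi1 = 0" "app B \<sigma> phiN = 0"
    using C unfolding boundary_free_def by auto
  have Xh: "?X \<in> hops B" unfolding block_def using h(1) N_ge_2 by (intro hops_mmul hops_P) auto
  have Xa: "adj ?X = ?X" by (rule adj_block[OF h(2)])
  have XP: "mm (P 1) ?X = ?X" using P_mmul_block[of 1] N_ge_2 by simp
  have Xf: "app B ?X phi1 = 0" unfolding block_def app_mmul app_P1_phi1 h(3) by simp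
  have XfN: "app B (transport ?X (N - 1)) phiN = 0"
  proof -
    have e: "block \<sigma> N = opscale (complex_of_real (weight (N - 1))) (transport ?X (N - 1))"
      using block_eq_transport[OF C L, of "N - 1"] N_ge_2 by simp
    have "app B (block \<sigma> N) phiN = 0" unfolding block_def app_mmul app_PN_phiN h(4) by simp
    then have "(\<lambda>i. complex_of_real (weight (N - 1)) * app B (transport ?X (N - 1)) phiN i) = 0"
      unfolding e app_opscale .
    moreover have "weight (N - 1) \<noteq> 0" using weight_pos[of "N - 1"] N_ge_2 by simp
    ultimately show ?thesis by (auto simp: fun_eq_iff)
  qed
  have comm: "mm (Qproj m) ?X = mm ?X (Qproj m)" if "m < N" for m
    using that
  proof (induction m)
    case 0 then show ?case using XP Xa Qproj_0 by (metis adj_Pk adj_mmul)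
  next
    case (Suc m)
    have k: "Suc m \<in> {1..N-1}" using Suc by auto
    have "opscale (complex_of_real (weight m)) (mm (absZ (Suc m)) (transport ?X m))
      = opscale (complex_of_real (weight m)) (mm (transport ?X m) (absZ (Suc m)))"
      using absZ_block_commute[OF C L k] block_eq_transport[OF C L, of m] Suc.prems
      by (simp add: mmul_scale_left mmul_scale_right del: opscale_apply)
    then have "mm (absZ (Suc m)) (transport ?X m) = mm (transport ?X m) (absZ (Suc m))"
      using weight_pos[of m] Suc.prems by (simp add: opscale_cancel)
    then show ?case using Suc by (intro Qproj_commute_if_absZ_transport_commute) auto
  qed
  show ?thesis unfolding admissible_def using Xh Xa XP Xf XfN comm by auto
qed

lemma in_WfreeI:
  assumes v: "v \<in> hvecs B"
    and boundary: "inner_h B (ket Pl) v = 0" "inner_h B (ket Mn) v = 0" "inner_h B phi1 v = 0" "inner_h B phiN v = 0"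
    and links: "\<And>k. k \<in> {1..N-1} \<Longrightarrow> app B (Z k) v = 0 \<and> app B (adj (Z k)) v = 0"
  shows "v \<in> Wfree N n \<Gamma>"
proof -
  have ketbra: "app B (opscale c (ketbra x y)) v = 0" if "inner_h B y v = 0" for c x y
    using that by (simp add: app_opscale app_ketbra fun_eq_iff)
  have scaled: "app B (opscale c M) v = 0" if "app B M v = 0" for c M
    using that by (simp add: app_opscale fun_eq_iff)
  have "app B (Kraus N n \<Gamma> e w) v = 0 \<and> app B (adj (Kraus N n \<Gamma> e w)) v = 0" if w: "w \<in> freqs N" for w e
  proof -
    consider "w = WPlus" | "w = WMinus" | k where "w = W k" "k \<in> {1..N-1}"
      using w unfolding freqs_eq by auto
    then show ?thesis
    proof cases
      case 1
      then show ?thesis using boundary(1,3)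
        by (cases e) (auto simp: Kraus_simps adj_scale adj_ketbra intro!: ketbra)
    next
      case 2
      then show ?thesis using boundary(2,4)
        by (cases e) (auto simp: Kraus_simps adj_scale adj_ketbra intro!: ketbra)
    next
      case 3
      then show ?thesis using links[OF 3(2)]
        by (cases e) (auto simp: Kraus_simps adj_scale intro!: scaled)
    qed
  qed
  then show ?thesis unfolding Wfree_def kernel_h_def using v by (auto simp: zero_fun_def)
qed

lemma app_P1_minus_absZ1_in_Wfree:
  assumes u: "u \<in> hvecs B"
  shows "app B (P 1 - absZ 1) u \<in> Wfree N n \<Gamma>"
proof -
  define v where "v = app B (P 1 - absZ 1) u"
  have N1: "1 < N" using N_ge_2 by simp
  have vE: "v i = 0" if "i \<notin> E 1" for i
    using rows_in_diff[OF rows_in_Pk rows_in_absZ] that unfolding rows_in_def app_def v_def by simp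
  have col0: "app B M v = 0" if "cols_in (E k) M" "k \<noteq> 1" for M k
    by (rule app_eq_zero_if_cols_in[OF that(1)]) (use vE level_disjoint[OF that(2)] in blast)
  have "mm (Z 1) (P 1 - absZ 1) = 0" using Z_mmul_P_self[of 1] Z_mmul_absZ[of 1] N1 by (simp add: mmul_diff_right)
  then have Z1: "app B (Z 1) v = 0" unfolding v_def by (simp flip: app_mmul)
  have "adj (P 1 - absZ 1) = P 1 - absZ 1" by (simp add: adj_diff adj_Pk adj_absZ)
  then have "inner_h B phi1 v = inner_h B (app B (P 1 - absZ 1) phi1) u" unfolding v_def by (metis inner_h_app_adj)
  then have phi1: "inner_h B phi1 v = 0" unfolding app_diff app_P1_phi1 app_absZ1_phi1 by simp
  have phiN: "inner_h B phiN v = 0" unfolding inner_h_def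
  proof (intro sum.neutral ballI)
    fix i show "cnj (phiN i) * v i = 0"
      using vE[of i] phi_nonzero_imp[of N 0 i] level_disjoint[of 1 N n] N_ge_2 by auto
  qed
  show ?thesis unfolding v_def[symmetric]
  proof (rule in_WfreeI[OF _ _ _ phi1 phiN])
    show "v \<in> hvecs B" unfolding v_def by (intro hvecs_app hops_diff hops_P hops_absZ) (use N_ge_2 in auto)
    show "inner_h B (ket Pl) v = 0" "inner_h B (ket Mn) v = 0"
      using vE[of Pl] vE[of Mn] finite_basis by (simp_all add: inner_h_ket level_def)
    fix k assume "k \<in> {1..N-1}"
    then show "app B (Z k) v = 0 \<and> app B (adj (Z k)) v = 0"
      using Z1 col0[OF cols_in_Zk, of k] col0[OF cols_in_adj_Z, of k] by (cases "k = 1") auto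
  qed
qed

lemma block_opscale: "block (opscale c X) k = opscale c (block X k)"
  unfolding block_def by (simp add: mmul_scale_left mmul_scale_right)

lemma block_add: "block (X + Y) k = block X k + block Y k"
  unfolding block_def by (simp add: mmul_add_left mmul_add_right)

lemma lift_zero: "lift 0 = 0"
  using lift_opscale[of 0 0] by simp

(* The consequences of the support hypothesis that are used; the last one holds because the part of
   E_1 outside the range of |Z|_1 lies in W. *)

definition support_conditions :: "cop \<Rightarrow> bool" where
  "support_conditions \<sigma> \<longleftrightarrow> app B \<sigma> (ket Pl) = 0 \<and> app B \<sigma> (ket Mn) = 0 \<and> mm \<sigma> (P 1 - absZ 1) = 0"

lemma support_conditions_if_supported:
  assumes S: "is_state B \<rho>" and sup: "supported_on B \<rho> (Vsub N n \<inter> ortho_compl B (Wfree N n \<Gamma>))"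
  shows "support_conditions \<rho>"
proof -
  have h: "\<rho> \<in> hops B" "psd B \<rho>" using S unfolding is_state_iff_psd by auto
  have a: "adj \<rho> = \<rho>" by (rule psd_selfadjoint[OF h finite_basis])
  have rng: "app B \<rho> v \<in> Vsub N n \<inter> ortho_compl B (Wfree N n \<Gamma>)" if "v \<in> hvecs B" for v
    using sup that unfolding supported_on_def op_range_def by blast
  have oPl: "\<forall>v\<in>hvecs B. inner_h B (ket Pl) (app B \<rho> v) = 0"
    and oMn: "\<forall>v\<in>hvecs B. inner_h B (ket Mn) (app B \<rho> v) = 0"
    using rng unfolding Vsub_def Let_def ortho_compl_def by blast+
  have oW: "\<forall>v\<in>hvecs B. inner_h B w (app B \<rho> v) = 0" if "w \<in> Wfree N n \<Gamma>" for w
    using rng that unfolding ortho_compl_def by blast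
  have D: "P 1 - absZ 1 \<in> hops B" using N_ge_2 by (intro hops_diff hops_P hops_absZ) auto
  have "mm \<rho> (P 1 - absZ 1) = 0"
  proof (rule mmul_eq_zero_if_app_ket[OF finite_basis h(1) D])
    fix j assume j: "j \<in> B"
    show "app B \<rho> (app B (P 1 - absZ 1) (ket j)) = 0"
      by (intro app_eq_zero_if_orthogonal_range[OF finite_basis h(1) a] hvecs_app D
          oW app_P1_minus_absZ1_in_Wfree ket_hvecs j)
  qed
  then show ?thesis unfolding support_conditions_def
    using app_eq_zero_if_orthogonal_range[OF finite_basis h(1) a hvecs_ket_Pl oPl]
      app_eq_zero_if_orthogonal_range[OF finite_basis h(1) a hvecs_ket_Mn oMn] by simp
qed

lemma support_conditions_if_kernel_subset:
  assumes K: "support_conditions \<rho>" and \<sigma>: "\<sigma> \<in> hops B"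
    and ker: "\<And>v. v \<in> hvecs B \<Longrightarrow> app B \<rho> v = 0 \<Longrightarrow> app B \<sigma> v = 0"
  shows "support_conditions \<sigma>"
proof -
  have "P 1 - absZ 1 \<in> hops B" using N_ge_2 by (intro hops_diff hops_P hops_absZ) auto
  then show ?thesis
    using K ker[OF hvecs_ket_Pl] ker[OF hvecs_ket_Mn] mmul_eq_zero_if_kernel_subset[OF finite_basis \<sigma> _ _ ker]
    unfolding support_conditions_def by blast
qed

lemma invariant_eq_lift:
  assumes h: "\<sigma> \<in> hops B" "psd B \<sigma>" "Lgen N n \<Gamma> \<gamma> \<sigma> = 0" and K: "support_conditions \<sigma>"
  shows "\<sigma> = lift (block \<sigma> 1)" "admissible (block \<sigma> 1)" "mm (absZ 1) (block \<sigma> 1) = block \<sigma> 1"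
proof -
  have k: "app B \<sigma> (ket Pl) = 0" "app B \<sigma> (ket Mn) = 0" "mm \<sigma> (P 1 - absZ 1) = 0"
    using K unfolding support_conditions_def by auto
  have a: "adj \<sigma> = \<sigma>" by (rule psd_selfadjoint[OF h(1,2) finite_basis])
  have C: "boundary_free \<sigma>"
    unfolding boundary_free_def using h(1) a k(1,2) invariant_kills_phi[OF h k(1,2)] by simp
  show "\<sigma> = lift (block \<sigma> 1)" by (rule eq_lift_block[OF C h(3)])
  show "admissible (block \<sigma> 1)" by (rule admissible_block[OF C h(3)])
  have sP: "mm \<sigma> (P 1) = mm \<sigma> (absZ 1)" using k(3) by (simp add: mmul_diff_right)
  have Ps: "mm (P 1) \<sigma> = mm (absZ 1) \<sigma>" using arg_cong[OF sP, of adj] a by (simp add: adj_mmul adj_Pk adj_absZ)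
  have RP: "mm (absZ 1) (P 1) = absZ 1" using absZ_mmul_P[of 1 1] N_ge_2 by simp
  have "mm (absZ 1) (block \<sigma> 1) = mm (mm (mm (absZ 1) (P 1)) \<sigma>) (P 1)" unfolding block_def by (simp only: mmul_assoc)
  also have "\<dots> = mm (mm (P 1) \<sigma>) (P 1)" unfolding RP Ps ..
  also have "\<dots> = block \<sigma> 1" unfolding block_def by (simp only: mmul_assoc)
  finally show "mm (absZ 1) (block \<sigma> 1) = block \<sigma> 1" .
qed

lemma absZ1_mmul_lift:
  assumes "\<sigma> = lift X" "admissible X" "mm (absZ 1) X = X"
  shows "mm (absZ 1) \<sigma> = X"
proof -
  have v: "mm (P 1) X = X" "adj X = X" using assms(2) unfolding admissible_def by auto
  have "mm (absZ 1) \<sigma> = opscale (complex_of_real (weight 0)) (mm (absZ 1) (transport X 0))"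
    using mmul_lift[OF cols_in_absZ, of 1 X] N_ge_2 assms(1) by simp
  then show ?thesis using transport_0[OF v] assms(3) by simp
qed

lemma normalized_lift_invariant:
  assumes V: "admissible Y" and p: "psd B Y" and nz: "Y \<noteq> 0"
  defines "l \<equiv> Re (trace_h B (lift Y))"
  shows "l > 0" "trace_h B (lift Y) = complex_of_real l"
    "invariant_state N n \<Gamma> \<gamma> (opscale (complex_of_real (inverse l)) (lift Y))"
    "block (opscale (complex_of_real (inverse l)) (lift Y)) 1 = opscale (complex_of_real (inverse l)) Y"
proof -
  have v: "Y \<in> hops B" "adj Y = Y" "mm (P 1) Y = Y" using V unfolding admissible_def by auto
  have Lh: "lift Y \<in> hops B" by (rule hops_lift[OF v(1)])
  have Lp: "psd B (lift Y)" by (rule psd_lift[OF p])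
  have Lnz: "lift Y \<noteq> 0" using lift_eq_zero_imp[OF v(3,2)] nz by blast
  show l: "l > 0" "trace_h B (lift Y) = complex_of_real l" using psd_trace_pos[OF finite_basis Lh Lp Lnz] l_def by auto
  have "Lgen N n \<Gamma> \<gamma> (opscale (complex_of_real (inverse l)) (lift Y)) = 0"
    by (simp add: Lgen_opscale Lgen_lift_eq_zero[OF V])
  moreover have "is_state B (opscale (complex_of_real (inverse l)) (lift Y))"
    by (rule is_state_normalize[OF Lh Lp l(2) l(1)])
  ultimately show "invariant_state N n \<Gamma> \<gamma> (opscale (complex_of_real (inverse l)) (lift Y))"
    unfolding invariant_state_def by (simp add: zero_fun_def)
  show "block (opscale (complex_of_real (inverse l)) (lift Y)) 1 = opscale (complex_of_real (inverse l)) Y"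
    unfolding block_opscale block_lift[OF v(3,2)] ..
qed

lemma admissibleD:
  assumes "admissible X"
  shows "X \<in> hops B" "adj X = X" "mm (P 1) X = X" "mm X (P 1) = X" "app B X phi1 = 0"
    "app B (transport X (N - 1)) phiN = 0" "\<And>m. m \<in> {1..N-1} \<Longrightarrow> mm (Qproj m) X = mm X (Qproj m)"
  using assms unfolding admissible_def by (auto, metis adj_Pk adj_mmul)

lemma admissible_diff:
  assumes X: "admissible X" and Y: "admissible Y"
  shows "admissible (X - Y)"
  using admissibleD[OF X] admissibleD[OF Y] unfolding admissible_def
  by (simp add: hops_diff adj_diff mmul_diff_left mmul_diff_right app_diff transport_def)

lemma admissible_Qproj_mmul:
  assumes V: "admissible X" and m: "m \<in> {1..N-1}"
  shows "admissible (mm (Qproj m) X)"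
  unfolding admissible_def
proof (intro conjI ballI)
  note v = admissibleD[OF V]
  have mN: "m < N" using m by auto
  let ?Q = "Qproj m"
  show "mm ?Q X \<in> hops B" by (intro hops_mmul hops_Qproj mN v(1))
  show "adj (mm ?Q X) = mm ?Q X" using v(7)[OF m] v(2) adj_Qproj by (simp add: adj_mmul)
  show "mm (P 1) (mm ?Q X) = mm ?Q X" using P1_mmul_Qproj[OF mN] by (simp flip: mmul_assoc)
  show "app B (mm ?Q X) phi1 = 0" using v(5) by (simp add: app_mmul)
  have "mm (Zpath (N - 1)) ?Q = Zpath (N - 1)" using Zpath_mmul_Qproj[of m "N - 1"] m N_ge_2 by simp
  then have "transport (mm ?Q X) (N - 1) = transport X (N - 1)"
    unfolding transport_def by (simp flip: mmul_assoc)
  then show "app B (transport (mm ?Q X) (N - 1)) phiN = 0" using v(6) by simp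
  fix k assume k: "k \<in> {1..N-1}"
  then have "k < N" by auto
  then have "mm (Qproj k) (mm ?Q X) = mm ?Q (mm (Qproj k) X)"
    using Qproj_commute[OF _ mN] by (simp flip: mmul_assoc)
  also have "\<dots> = mm (mm ?Q X) (Qproj k)" using v(7)[OF k] by (simp add: mmul_assoc)
  finally show "mm (Qproj k) (mm ?Q X) = mm (mm ?Q X) (Qproj k)" .
qed

lemma psd_Qproj_split:
  assumes V: "admissible X" and p: "psd B X" and m: "m \<in> {1..N-1}"
  shows "psd B (mm (Qproj m) X)" "psd B (X - mm (Qproj m) X)"
proof -
  note v = admissibleD[OF V]
  have mN: "m < N" using m by auto
  let ?Q = "Qproj m" and ?D = "P 1 - Qproj m"
  have c: "mm ?Q X = mm X ?Q" using v(7)[OF m] .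
  have Qh: "?Q \<in> hops B" by (rule hops_Qproj[OF mN])
  have Dh: "?D \<in> hops B" using N_ge_2 by (intro hops_diff hops_P Qh) auto
  have QQX: "mm ?Q (mm ?Q X) = mm ?Q X" using Qproj_idem[OF mN] by (simp flip: mmul_assoc)
  have QP: "mm ?Q (P 1) = ?Q" using P1_mmul_Qproj[OF mN] by (metis adj_Qproj adj_Pk adj_mmul)
  have "mm (mm ?Q X) (adj ?Q) = mm ?Q (mm X ?Q)" using adj_Qproj by (simp add: mmul_assoc)
  also have "\<dots> = mm ?Q X" using c QQX by simp
  finally show "psd B (mm ?Q X)" using psd_sandwich[OF p Qh] by simp
  have "mm (mm ?D X) (adj ?D) = X - mm ?Q X"
    using v(3,4) QP c QQX by (simp add: adj_diff adj_Pk adj_Qproj mmul_diff_left mmul_diff_right mmul_assoc flip: c)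
  then show "psd B (X - mm ?Q X)" using psd_sandwich[OF p Dh] by simp
qed

lemma P1_mmul_if_kernel_subset:
  assumes X: "mm X (P 1) = X" and mu: "\<mu> \<in> hops B" "adj \<mu> = \<mu>"
    and ker: "\<And>v. v \<in> hvecs B \<Longrightarrow> app B X v = 0 \<Longrightarrow> app B \<mu> v = 0"
  shows "mm \<mu> (P 1) = \<mu>" "mm (P 1) \<mu> = \<mu>"
proof -
  have E1: "E 1 \<subseteq> B" using level_subset_basis[of 1] N_ge_2 by simp
  have "\<mu> i j = 0" if j: "j \<notin> E 1" for i j
  proof (cases "j \<in> B")
    case True
    have "X l j = mm X (P 1) l j" for l using X by simp
    also have "mm X (P 1) l j = 0" for l
      using j level_subset_basis[of 1] N_ge_2 by (simp add: mmul_Pk_apply[OF _ finite_basis])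
    finally have "X l j = 0" for l .
    then have "app B X (ket j) = 0" using True finite_basis by (simp add: app_ket fun_eq_iff)
    then have "app B \<mu> (ket j) = 0" by (intro ker ket_hvecs True)
    then show ?thesis using True finite_basis by (simp add: app_ket fun_eq_iff)
  next
    case False then show ?thesis using mu(1) by (simp add: hops_def)
  qed
  then show P1: "mm \<mu> (P 1) = \<mu>" by (intro mmul_Pk_cols_in E1 finite_basis) (auto simp: cols_in_def)
  show "mm (P 1) \<mu> = \<mu>" using P1 mu(2) by (metis adj_Pk adj_mmul)
qed

lemma transport_kills_phiN_if_kernel_subset:
  assumes X: "X \<in> hops B" "psd B X" "app B (transport X (N - 1)) phiN = 0"
    and ker: "\<And>v. v \<in> hvecs B \<Longrightarrow> app B X v = 0 \<Longrightarrow> app B \<mu> v = 0"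
  shows "app B (transport \<mu> (N - 1)) phiN = 0"
proof -
  define u where "u = app B (adj (Zpath (N - 1))) phiN"
  have uh: "u \<in> hvecs B" unfolding u_def using N_ge_2 by (intro hvecs_app hops_adj hops_Zpath) auto
  have "inner_h B u (app B X u) = inner_h B phiN (app B (transport X (N - 1)) phiN)"
    unfolding u_def transport_def by (simp add: app_mmul inner_h_app_adj)
  then have "app B X u = 0" using X(3) by (intro psd_app_eq_zero[OF X(1,2) finite_basis uh]) simp
  then have "app B \<mu> u = 0" by (rule ker[OF uh])
  then show ?thesis unfolding transport_def u_def by (simp add: app_mmul)
qed

lemma Qproj_commute_if_kernel_subset:
  assumes m: "m \<in> {1..N-1}" and X: "adj X = X" "mm X (P 1) = X"
    and mu: "\<mu> \<in> hops B" "adj \<mu> = \<mu>" "mm \<mu> (P 1) = \<mu>"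
    and ker: "\<And>v. v \<in> hvecs B \<Longrightarrow> app B X v = 0 \<Longrightarrow> app B \<mu> v = 0"
    and cs: "mm (Qproj m) X = X \<or> mm (Qproj m) X = 0"
  shows "mm (Qproj m) \<mu> = mm \<mu> (Qproj m)"
proof -
  have Qh: "Qproj m \<in> hops B" using m by (intro hops_Qproj) auto
  have XQ: "mm X (Qproj m) = adj (mm (Qproj m) X)" using X(1) adj_Qproj by (simp add: adj_mmul)
  have Qmu: "mm (Qproj m) \<mu> = adj (mm \<mu> (Qproj m))" using mu(2) adj_Qproj by (simp add: adj_mmul)
  from cs show ?thesis
  proof
    assume QX: "mm (Qproj m) X = X"
    have D: "P 1 - Qproj m \<in> hops B" using N_ge_2 by (intro hops_diff hops_P Qh) auto
    have "mm X (P 1 - Qproj m) = 0" using X XQ QX by (simp add: mmul_diff_right)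
    then have "mm \<mu> (P 1 - Qproj m) = 0" by (rule mmul_eq_zero_if_kernel_subset[OF finite_basis mu(1) D _ ker])
    then have "mm \<mu> (Qproj m) = \<mu>" using mu(3) by (simp add: mmul_diff_right)
    then show ?thesis using Qmu mu(2) by simp
  next
    assume "mm (Qproj m) X = 0"
    then have "mm X (Qproj m) = 0" using XQ by simp
    then have "mm \<mu> (Qproj m) = 0" by (rule mmul_eq_zero_if_kernel_subset[OF finite_basis mu(1) Qh _ ker])
    then show ?thesis using Qmu by simp
  qed
qed

lemma admissible_if_kernel_subset:
  assumes V: "admissible X" and p: "psd B X" and mu: "\<mu> \<in> hops B" "psd B \<mu>"
    and ker: "\<And>v. v \<in> hvecs B \<Longrightarrow> app B X v = 0 \<Longrightarrow> app B \<mu> v = 0"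
    and cs: "\<And>m. m \<in> {1..N-1} \<Longrightarrow> mm (Qproj m) X = X \<or> mm (Qproj m) X = 0"
  shows "admissible \<mu>"
proof -
  note v = admissibleD[OF V]
  have a: "adj \<mu> = \<mu>" by (rule psd_selfadjoint[OF mu finite_basis])
  note P1 = P1_mmul_if_kernel_subset[OF v(4) mu(1) a ker]
  show ?thesis unfolding admissible_def
    using mu(1) a P1(2) ker[OF hvecs_phi1 v(5)] transport_kills_phiN_if_kernel_subset[OF v(1) p v(6) ker]
      Qproj_commute_if_kernel_subset[OF _ v(2,4) mu(1) a P1(1) ker cs] by blast
qed

lemma invariant_stateD:
  assumes "invariant_state N n \<Gamma> \<gamma> \<sigma>"
  shows "\<sigma> \<in> hops B" "psd B \<sigma>" "trace_h B \<sigma> = 1" "Lgen N n \<Gamma> \<gamma> \<sigma> = 0"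
  using assms unfolding invariant_state_def is_state_iff_psd by (auto simp: zero_fun_def)

lemma psd_block1: "\<sigma> \<in> hops B \<Longrightarrow> psd B \<sigma> \<Longrightarrow> psd B (block \<sigma> 1)"
  using psd_sandwich[of B \<sigma> "P 1"] hops_P[of 1] N_ge_2 unfolding block_def by (simp add: adj_Pk mmul_assoc)

lemma hops_block1: "\<sigma> \<in> hops B \<Longrightarrow> block \<sigma> 1 \<in> hops B"
  unfolding block_def using N_ge_2 by (intro hops_mmul hops_P) auto

lemma lift_split_not_invariant_extremal:
  assumes rho: "\<rho> = opscale (complex_of_real c1) (lift Y1) + opscale (complex_of_real c2) (lift Y2)"
      "trace_h B \<rho> = 1"
    and c: "c1 > 0" "c2 > 0"
    and Y1: "admissible Y1" "psd B Y1" "Y1 \<noteq> 0" and Y2: "admissible Y2" "psd B Y2" "Y2 \<noteq> 0"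
    and not_parallel: "\<And>c. Y1 \<noteq> opscale c Y2"
  shows "\<not> invariant_extremal N n \<Gamma> \<gamma> \<rho>"
proof
  assume IE: "invariant_extremal N n \<Gamma> \<gamma> \<rho>"
  define l1 l2 where "l1 = Re (trace_h B (lift Y1))" and "l2 = Re (trace_h B (lift Y2))"
  note s1 = normalized_lift_invariant[OF Y1, folded l1_def]
  note s2 = normalized_lift_invariant[OF Y2, folded l2_def]
  define \<sigma>1 \<sigma>2 where "\<sigma>1 = opscale (complex_of_real (inverse l1)) (lift Y1)"
    and "\<sigma>2 = opscale (complex_of_real (inverse l2)) (lift Y2)"
  have "lift Y1 = opscale (complex_of_real l1) \<sigma>1" "lift Y2 = opscale (complex_of_real l2) \<sigma>2"
    unfolding \<sigma>1_def \<sigma>2_def using s1(1) s2(1) by simp_all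
  then have rs: "\<rho> = opscale (complex_of_real (c1 * l1)) \<sigma>1 + opscale (complex_of_real (c2 * l2)) \<sigma>2"
    unfolding rho(1) by simp
  have "complex_of_real (c1 * l1 + c2 * l2) = 1"
    using rho(2) invariant_stateD(3)[OF s1(3)] invariant_stateD(3)[OF s2(3)]
    unfolding rs \<sigma>1_def[symmetric] \<sigma>2_def[symmetric] by (simp add: trace_h_add trace_h_scale)
  then have sum1: "c1 * l1 + c2 * l2 = 1" by (metis of_real_eq_1_iff)
  have "\<sigma>1 \<noteq> \<sigma>2"
  proof
    assume "\<sigma>1 = \<sigma>2"
    then have "opscale (complex_of_real (inverse l1)) Y1 = opscale (complex_of_real (inverse l2)) Y2"
      using s1(4) s2(4) unfolding \<sigma>1_def \<sigma>2_def by simp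
    then have "opscale (complex_of_real l1) (opscale (complex_of_real (inverse l1)) Y1)
      = opscale (complex_of_real l1) (opscale (complex_of_real (inverse l2)) Y2)" by simp
    then have "Y1 = opscale (complex_of_real l1 * complex_of_real (inverse l2)) Y2" using s1(1) by simp
    then show False using not_parallel by blast
  qed
  moreover have "\<rho> = convex_comb (c1 * l1) \<sigma>1 \<sigma>2" unfolding convex_comb_eq_opscale rs sum1[symmetric] by simp
  moreover have "0 < c1 * l1" "0 < c2 * l2" using c s1(1) s2(1) by simp_all
  moreover from this have "c1 * l1 < 1" using sum1 by linarith
  ultimately show False
    using IE s1(3) s2(3) unfolding invariant_extremal_def \<sigma>1_def \<sigma>2_def by blast
qed

lemma invariant_extremal_Qproj_trivial:
  assumes IE: "invariant_extremal N n \<Gamma> \<gamma> \<rho>" and rho: "\<rho> = lift X" "trace_h B \<rho> = 1"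
    and X: "admissible X" "psd B X" and m: "m \<in> {1..N-1}"
  shows "mm (Qproj m) X = X \<or> mm (Qproj m) X = 0"
proof (rule ccontr)
  assume nontrivial: "\<not> (mm (Qproj m) X = X \<or> mm (Qproj m) X = 0)"
  define Y1 Y2 where "Y1 = mm (Qproj m) X" and "Y2 = X - mm (Qproj m) X"
  have mN: "m < N" using m by auto
  have QQX: "mm (Qproj m) (mm (Qproj m) X) = mm (Qproj m) X" using Qproj_idem[OF mN] by (simp flip: mmul_assoc)
  have QY: "mm (Qproj m) Y1 = Y1" "mm (Qproj m) Y2 = 0" unfolding Y1_def Y2_def using QQX by (simp_all add: mmul_diff_right)
  have not_parallel: "Y1 \<noteq> opscale c Y2" for c
  proof
    assume "Y1 = opscale c Y2"
    then have "Y1 = 0" using QY by (metis mmul_scale_right opscale_zero(2))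
    then show False using nontrivial unfolding Y1_def by simp
  qed
  have rs: "\<rho> = opscale (complex_of_real 1) (lift Y1) + opscale (complex_of_real 1) (lift Y2)"
    unfolding rho Y1_def Y2_def by (simp flip: lift_add)
  have Y: "admissible Y1" "psd B Y1" "Y1 \<noteq> 0" "admissible Y2" "psd B Y2" "Y2 \<noteq> 0"
    using admissible_Qproj_mmul[OF X(1) m] admissible_diff[OF X(1) admissible_Qproj_mmul[OF X(1) m]]
      psd_Qproj_split[OF X m] nontrivial unfolding Y1_def Y2_def by auto
  have "\<not> invariant_extremal N n \<Gamma> \<gamma> \<rho>"
    by (rule lift_split_not_invariant_extremal[OF rs rho(2) _ _ Y not_parallel]) simp_all
  then show False using IE by contradiction
qed

lemma extremal_if_invariant_extremal:
  assumes IE: "invariant_extremal N n \<Gamma> \<gamma> \<rho>" and rho: "\<rho> = lift X" "trace_h B \<rho> = 1"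
    and X: "admissible X" "psd B X" "trace_h B X = complex_of_real a" "a > 0"
  shows "extremal_state B (opscale (complex_of_real (inverse a)) X)"
proof -
  let ?\<tau> = "opscale (complex_of_real (inverse a)) X"
  have "\<not> (\<exists>\<mu>1 \<mu>2 s. is_state B \<mu>1 \<and> is_state B \<mu>2 \<and> \<mu>1 \<noteq> \<mu>2 \<and> 0 < s \<and> s < 1 \<and> ?\<tau> = convex_comb s \<mu>1 \<mu>2)"
  proof
    assume "\<exists>\<mu>1 \<mu>2 s. is_state B \<mu>1 \<and> is_state B \<mu>2 \<and> \<mu>1 \<noteq> \<mu>2 \<and> 0 < s \<and> s < 1 \<and> ?\<tau> = convex_comb s \<mu>1 \<mu>2"
    then obtain \<mu>1 \<mu>2 s where mu: "is_state B \<mu>1" "is_state B \<mu>2" "\<mu>1 \<noteq> \<mu>2" "0 < s" "s < 1"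
      and tau: "?\<tau> = convex_comb s \<mu>1 \<mu>2" by blast
    have muh: "\<mu>1 \<in> hops B" "psd B \<mu>1" "trace_h B \<mu>1 = 1" "\<mu>2 \<in> hops B" "psd B \<mu>2" "trace_h B \<mu>2 = 1"
      using mu unfolding is_state_iff_psd by auto
    have ker: "app B \<mu>1 v = 0 \<and> app B \<mu>2 v = 0" if "v \<in> hvecs B" "app B X v = 0" for v
    proof -
      have "app B (convex_comb s \<mu>1 \<mu>2) v = 0" unfolding tau[symmetric] app_opscale using that(2) by (simp add: fun_eq_iff)
      then show ?thesis using psd_convex_comb_kernel[OF finite_basis muh(1,2) muh(4,5) mu(4,5) that(1)] by blast
    qed
    have cs: "\<And>m. m \<in> {1..N-1} \<Longrightarrow> mm (Qproj m) X = X \<or> mm (Qproj m) X = 0"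
      by (rule invariant_extremal_Qproj_trivial[OF IE rho X(1,2)])
    have adm: "admissible \<mu>1" "admissible \<mu>2"
      using ker by (intro admissible_if_kernel_subset[OF X(1,2) muh(1,2) _ cs]
          admissible_if_kernel_subset[OF X(1,2) muh(4,5) _ cs]; blast)+
    have "X = opscale (complex_of_real a) ?\<tau>" using X(4) by simp
    then have rs: "\<rho> = opscale (complex_of_real (a * s)) (lift \<mu>1) + opscale (complex_of_real (a * (1 - s))) (lift \<mu>2)"
      unfolding rho(1) tau convex_comb_eq_opscale by (simp add: lift_add lift_opscale opscale_add)
    have not_parallel: "\<mu>1 \<noteq> opscale c \<mu>2" for c
    proof
      assume e: "\<mu>1 = opscale c \<mu>2"
      then have "c = 1" using muh(3,6) by (simp add: trace_h_scale)
      then show False using e mu(3) by simp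
    qed
    have nz: "\<mu>1 \<noteq> 0" "\<mu>2 \<noteq> 0" using muh(3,6) by auto
    have "\<not> invariant_extremal N n \<Gamma> \<gamma> \<rho>"
      by (rule lift_split_not_invariant_extremal[OF rs rho(2) _ _ adm(1) muh(2) nz(1) adm(2) muh(5) nz(2) not_parallel])
        (use X(4) mu(4,5) in simp_all)
    then show False using IE by contradiction
  qed
  moreover have "is_state B ?\<tau>" by (rule is_state_normalize[OF admissibleD(1)[OF X(1)] X(2-4)])
  ultimately show ?thesis unfolding extremal_state_def by blast
qed

lemma face_state_eq_lift:
  assumes K: "support_conditions \<rho>" and \<sigma>: "invariant_state N n \<Gamma> \<gamma> \<sigma>"
    and ker: "\<And>v. v \<in> hvecs B \<Longrightarrow> app B \<rho> v = 0 \<Longrightarrow> app B \<sigma> v = 0"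
  obtains a where "\<sigma> = lift (block \<sigma> 1)" "is_state B (opscale (complex_of_real (inverse a)) (block \<sigma> 1))"
    "trace_h B (block \<sigma> 1) = complex_of_real a" "a > 0"
proof -
  note s = invariant_stateD[OF \<sigma>]
  note L = invariant_eq_lift[OF s(1,2,4) support_conditions_if_kernel_subset[OF K s(1) ker]]
  have X: "block \<sigma> 1 \<in> hops B" "psd B (block \<sigma> 1)" "block \<sigma> 1 \<noteq> 0"
    using hops_block1 psd_block1 s L(1) lift_zero by auto
  define a where "a = Re (trace_h B (block \<sigma> 1))"
  have a: "trace_h B (block \<sigma> 1) = complex_of_real a" "a > 0"
    using psd_trace_pos[OF finite_basis X] unfolding a_def by auto
  show ?thesis by (rule that[OF L(1) is_state_normalize[OF X(1,2) a] a])
qed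

lemma invariant_extremal_if_extremal:
  assumes inv: "invariant_state N n \<Gamma> \<gamma> \<rho>" and K: "support_conditions \<rho>"
    and a: "trace_h B (block \<rho> 1) = complex_of_real a"
    and E: "extremal_state B (opscale (complex_of_real (inverse a)) (block \<rho> 1))"
  shows "invariant_extremal N n \<Gamma> \<gamma> \<rho>"
proof -
  have "\<not> (\<exists>\<sigma>1 \<sigma>2 t. invariant_state N n \<Gamma> \<gamma> \<sigma>1 \<and> invariant_state N n \<Gamma> \<gamma> \<sigma>2 \<and> \<sigma>1 \<noteq> \<sigma>2 \<and>
          0 < t \<and> t < 1 \<and> \<rho> = convex_comb t \<sigma>1 \<sigma>2)"
  proof
    assume "\<exists>\<sigma>1 \<sigma>2 t. invariant_state N n \<Gamma> \<gamma> \<sigma>1 \<and> invariant_state N n \<Gamma> \<gamma> \<sigma>2 \<and> \<sigma>1 \<noteq> \<sigma>2 \<and>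
          0 < t \<and> t < 1 \<and> \<rho> = convex_comb t \<sigma>1 \<sigma>2"
    then obtain \<sigma>1 \<sigma>2 t where sg: "invariant_state N n \<Gamma> \<gamma> \<sigma>1" "invariant_state N n \<Gamma> \<gamma> \<sigma>2" "\<sigma>1 \<noteq> \<sigma>2"
      "0 < t" "t < 1" and rho: "\<rho> = convex_comb t \<sigma>1 \<sigma>2" by blast
    note p1 = invariant_stateD[OF sg(1)] and p2 = invariant_stateD[OF sg(2)]
    have ker: "app B \<sigma>1 v = 0 \<and> app B \<sigma>2 v = 0" if "v \<in> hvecs B" "app B \<rho> v = 0" for v
      using psd_convex_comb_kernel[OF finite_basis p1(1,2) p2(1,2) sg(4,5) that(1)] rho that(2) by simp
    have ker1: "\<And>v. v \<in> hvecs B \<Longrightarrow> app B \<rho> v = 0 \<Longrightarrow> app B \<sigma>1 v = 0"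
      and ker2: "\<And>v. v \<in> hvecs B \<Longrightarrow> app B \<rho> v = 0 \<Longrightarrow> app B \<sigma>2 v = 0" using ker by simp_all
    obtain a1 where r1: "\<sigma>1 = lift (block \<sigma>1 1)" and \<tau>1: "is_state B (opscale (complex_of_real (inverse a1)) (block \<sigma>1 1))"
      and a1: "trace_h B (block \<sigma>1 1) = complex_of_real a1" "a1 > 0"
      by (rule face_state_eq_lift[OF K sg(1) ker1])
    obtain a2 where r2: "\<sigma>2 = lift (block \<sigma>2 1)" and \<tau>2: "is_state B (opscale (complex_of_real (inverse a2)) (block \<sigma>2 1))"
      and a2: "trace_h B (block \<sigma>2 1) = complex_of_real a2" "a2 > 0"
      by (rule face_state_eq_lift[OF K sg(2) ker2])
    have "block \<rho> 1 = opscale (complex_of_real t) (block \<sigma>1 1) + opscale (complex_of_real (1 - t)) (block \<sigma>2 1)"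
      unfolding rho convex_comb_eq_opscale by (simp add: block_add block_opscale)
    then obtain s where s: "0 < s" "s < 1" and conv: "opscale (complex_of_real (inverse a)) (block \<rho> 1)
        = convex_comb s (opscale (complex_of_real (inverse a1)) (block \<sigma>1 1)) (opscale (complex_of_real (inverse a2)) (block \<sigma>2 1))"
      using normalize_convex_comb a a1 a2 sg(4,5) by metis
    define \<tau> where "\<tau> = opscale (complex_of_real (inverse a1)) (block \<sigma>1 1)"
    have eq: "opscale (complex_of_real (inverse a2)) (block \<sigma>2 1) = \<tau>"
      using E \<tau>1 \<tau>2 s conv unfolding extremal_state_def \<tau>_def by metis
    have "\<sigma>1 = lift (opscale (complex_of_real a1) \<tau>)" unfolding \<tau>_def using r1 a1(2) by simp
    moreover have "\<sigma>2 = lift (opscale (complex_of_real a2) \<tau>)" unfolding eq[symmetric] using r2 a2(2) by simp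
    ultimately have "\<sigma>1 = opscale (complex_of_real a1) (lift \<tau>)" "\<sigma>2 = opscale (complex_of_real a2) (lift \<tau>)"
      by (simp_all add: lift_opscale)
    moreover from this have "complex_of_real a1 * trace_h B (lift \<tau>) = complex_of_real a2 * trace_h B (lift \<tau>)"
      "trace_h B (lift \<tau>) \<noteq> 0"
      using p1(3) p2(3) by (auto simp: trace_h_scale)
    ultimately show False using sg(3) by simp
  qed
  then show ?thesis using inv unfolding invariant_extremal_def by blast
qed

end

theorem lemma3p20:
  fixes N :: nat and n :: "nat \<Rightarrow> nat"
    and \<Gamma> \<gamma> :: "sgn \<Rightarrow> freq \<Rightarrow> real" and \<rho> :: cop
  assumes "N \<ge> 2"
    and "\<forall>k. 1 \<le> k \<and> k < N \<longrightarrow> n (k + 1) \<le> n k"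
    and "n N \<ge> 1"
    and "\<forall>w\<in>freqs N. \<forall>e. \<Gamma> e w > 0"
    and "invariant_state N n \<Gamma> \<gamma> \<rho>"
    and "supported_on (basis N n) \<rho> (Vsub N n \<inter> ortho_compl (basis N n) (Wfree N n \<Gamma>))"
  shows "invariant_extremal N n \<Gamma> \<gamma> \<rho> \<longleftrightarrow>
         extremal_state (basis N n)
           (opscale (inverse (trace_h (basis N n) (mmul (basis N n) (Zabs N n 1) \<rho>)))
                    (mmul (basis N n) (Zabs N n 1) \<rho>))"
proof -
  interpret transport_model N n \<Gamma> \<gamma> using assms(1-4) by unfold_locales
  note inv = invariant_stateD[OF assms(5)]
  have K: "support_conditions \<rho>"
    using assms(5,6) unfolding invariant_state_def by (intro support_conditions_if_supported) auto
  define X where "X = block \<rho> 1"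
  note L = invariant_eq_lift[OF inv(1,2,4) K, folded X_def]
  have X: "X \<in> hops B" "psd B X" "X \<noteq> 0"
    using hops_block1 psd_block1 inv L(1) lift_zero unfolding X_def by auto
  obtain a where a: "trace_h B X = complex_of_real a" "a > 0" using psd_trace_pos[OF finite_basis X] by blast
  have "mm (absZ 1) \<rho> = X" by (rule absZ1_mmul_lift[OF L])
  then have \<tau>: "opscale (inverse (trace_h B (mm (absZ 1) \<rho>))) (mm (absZ 1) \<rho>) = opscale (complex_of_real (inverse a)) X"
    using a by simp
  show ?thesis unfolding \<tau>
    using extremal_if_invariant_extremal[OF _ L(1) inv(3) L(2) X(2) a]
      invariant_extremal_if_extremal[OF assms(5) K a(1)[unfolded X_def]] X_def by blast
qed

end
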